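(* Let $(A,S)$ be a QP and $k$ a vertex such that for every vertex $i$, $A_{i,k}=0$ or $A_{k,i}=0$, and no cyclic path occurring in the expansion of $S$ starts (and ends) at $k$. Let $(\widetilde A,\widetilde S)=\widetilde\mu_k(A,S)$. Then the algebras $\mathcal P(A,S)_{\hat k,\hat k}$ and $\mathcal P(\widetilde A,\widetilde S)_{\hat k,\hat k}$ are isomorphic.
   Context: Fix a field $K$; quiver $Q$ with vertices $Q_0$, arrows $a:t(a)\to h(a)$; $R=K^{Q_0}$ with idempotents $e_i$; arrow span $A$, $A_{i,j}=e_iAe_j$ spanned by arrows $j\to i$. $R\langle\langle A\rangle\rangle=\prod_{d\ge0}A^d$ complete path algebra (possibly infinite linear combinations of paths $a_1\cdots a_d$, $t(a_i)=h(a_{i+1})$), $\mathfrak m$-adic topology. Potentials: linear combinations of cyclic paths; cyclic equivalence: difference in the closure of the span of $a_1\cdots a_d-a_2\cdots a_da_1$. $\partial_c(a_1\cdots a_d)=\sum_{p:a_p=c}a_{p+1}\cdots a_da_1\cdots a_{p-1}$; $J(S)$ closure of the ideal generated by all $\partial_cS$; $\mathcal P(A,S)=R\langle\langle A\rangle\rangle/J(S)$. QP: no loops, no two cyclically equivalent cyclic paths in $S$. For an $R$-bimodule (or algebra) $B$, $B_{\hat k,\hat k}=\overline e_kB\overline e_k$ with $\overline e_k=1-e_k$. Premutation $\widetilde\mu_k(A,S)=(\widetilde A,\widetilde S)$: arrows of $\widetilde A$ are the arrows of $Q$ not incident to $k$, a new arrow $[ba]:t(a)\to h(b)$ for each pair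 of arrows with $h(a)=t(b)=k$, and for each arrow $c$ incident to $k$ a reversed arrow $c^\star$; $\widetilde S=[S]+\sum_{h(a)=t(b)=k}[ba]a^\star b^\star$, where $[S]$ replaces each factor $a_pa_{p+1}$ with $t(a_p)=h(a_{p+1})=k$ in the cyclic paths of $S$ by $[a_pa_{p+1}]$. *)

theory Defs
  imports Main
begin

text \<open>A quiver is given by a finite vertex set V, a finite arrow set E and head/tail
  maps h, t (arrow a goes from t a to h a).  A path is encoded as a pair (i, xs):
  (i, []) is the trivial path e_i, and (i, a_1 ... a_d) with t(a_p) = h(a_{p+1}) is
  the path a_1 ... a_d (a_d applied first) with source i = t(a_d).
  Elements of the complete path algebra are arbitrary (possibly infinite) linear
  combinations of paths, i.e. coefficient functions supported on valid paths.\<close>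

definition valid_path :: "'v set \<Rightarrow> 'a set \<Rightarrow> ('a \<Rightarrow> 'v) \<Rightarrow> ('a \<Rightarrow> 'v) \<Rightarrow> 'v \<times> 'a list \<Rightarrow> bool" where
  "valid_path V E h t p =
     (case p of (i, xs) \<Rightarrow>
        (if xs = [] then i \<in> V
         else set xs \<subseteq> E \<and> (\<forall>n. Suc n < length xs \<longrightarrow> t (xs ! n) = h (xs ! Suc n))
              \<and> i = t (last xs)))"

definition ptgt :: "('a \<Rightarrow> 'v) \<Rightarrow> 'v \<times> 'a list \<Rightarrow> 'v" where
  "ptgt h p = (case p of (i, xs) \<Rightarrow> if xs = [] then i else h (hd xs))"

definition is_quiver :: "'v set \<Rightarrow> 'a set \<Rightarrow> ('a \<Rightarrow> 'v) \<Rightarrow> ('a \<Rightarrow> 'v) \<Rightarrow> bool" where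
  "is_quiver V E h t = (finite V \<and> finite E \<and> (\<forall>a\<in>E. h a \<in> V \<and> t a \<in> V))"

definition palg :: "'v set \<Rightarrow> 'a set \<Rightarrow> ('a \<Rightarrow> 'v) \<Rightarrow> ('a \<Rightarrow> 'v) \<Rightarrow> ('v \<times> 'a list \<Rightarrow> 'k::field) set" where
  "palg V E h t = {f. \<forall>p. f p \<noteq> 0 \<longrightarrow> valid_path V E h t p}"

definition pzero :: "'v \<times> 'a list \<Rightarrow> 'k::field" where
  "pzero = (\<lambda>p. 0)"

definition padd :: "('v \<times> 'a list \<Rightarrow> 'k::field) \<Rightarrow> ('v \<times> 'a list \<Rightarrow> 'k) \<Rightarrow> 'v \<times> 'a list \<Rightarrow> 'k" where
  "padd f g = (\<lambda>p. f p + g p)"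

definition psub :: "('v \<times> 'a list \<Rightarrow> 'k::field) \<Rightarrow> ('v \<times> 'a list \<Rightarrow> 'k) \<Rightarrow> 'v \<times> 'a list \<Rightarrow> 'k" where
  "psub f g = (\<lambda>p. f p - g p)"

definition psmul :: "'k::field \<Rightarrow> ('v \<times> 'a list \<Rightarrow> 'k) \<Rightarrow> 'v \<times> 'a list \<Rightarrow> 'k" where
  "psmul c f = (\<lambda>p. c * f p)"

text \<open>Multiplication (concatenation of paths): the path zs from j splits as
  take n zs (applied last) after drop n zs (applied first).\<close>
definition pmul :: "('a \<Rightarrow> 'v) \<Rightarrow> ('v \<times> 'a list \<Rightarrow> 'k::field) \<Rightarrow> ('v \<times> 'a list \<Rightarrow> 'k) \<Rightarrow> 'v \<times> 'a list \<Rightarrow> 'k" where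
  "pmul h f g = (\<lambda>(j, zs). \<Sum>n\<in>{0..length zs}.
       f (ptgt h (j, drop n zs), take n zs) * g (j, drop n zs))"

text \<open>Closure in the m-adic topology: the basic neighbourhoods of 0 are m^n, the
  elements supported on paths of length at least n.\<close>
definition padic_closure :: "'v set \<Rightarrow> 'a set \<Rightarrow> ('a \<Rightarrow> 'v) \<Rightarrow> ('a \<Rightarrow> 'v)
    \<Rightarrow> ('v \<times> 'a list \<Rightarrow> 'k::field) set \<Rightarrow> ('v \<times> 'a list \<Rightarrow> 'k) set" where
  "padic_closure V E h t X =
     {f \<in> palg V E h t. \<forall>n. \<exists>x\<in>X. \<forall>p. length (snd p) < n \<longrightarrow> f p = x p}"

inductive_set ideal_gen :: "'v set \<Rightarrow> 'a set \<Rightarrow> ('a \<Rightarrow> 'v) \<Rightarrow> ('a \<Rightarrow> 'v)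
    \<Rightarrow> ('v \<times> 'a list \<Rightarrow> 'k::field) set \<Rightarrow> ('v \<times> 'a list \<Rightarrow> 'k) set"
  for V E h t X where
  zero: "pzero \<in> ideal_gen V E h t X"
| gen: "g \<in> X \<Longrightarrow> x \<in> palg V E h t \<Longrightarrow> y \<in> palg V E h t \<Longrightarrow>
          pmul h (pmul h x g) y \<in> ideal_gen V E h t X"
| add: "u \<in> ideal_gen V E h t X \<Longrightarrow> v \<in> ideal_gen V E h t X \<Longrightarrow>
          padd u v \<in> ideal_gen V E h t X"

definition is_cycle :: "'v set \<Rightarrow> 'a set \<Rightarrow> ('a \<Rightarrow> 'v) \<Rightarrow> ('a \<Rightarrow> 'v) \<Rightarrow> 'v \<times> 'a list \<Rightarrow> bool" where
  "is_cycle V E h t p = (valid_path V E h t p \<and> snd p \<noteq> [] \<and> h (hd (snd p)) = fst p)"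

definition is_potential :: "'v set \<Rightarrow> 'a set \<Rightarrow> ('a \<Rightarrow> 'v) \<Rightarrow> ('a \<Rightarrow> 'v) \<Rightarrow> ('v \<times> 'a list \<Rightarrow> 'k::field) \<Rightarrow> bool" where
  "is_potential V E h t S = (\<forall>p. S p \<noteq> 0 \<longrightarrow> is_cycle V E h t p)"

text \<open>Cyclic paths are cyclically equivalent iff one is a rotation of the other.\<close>
definition is_QP :: "'v set \<Rightarrow> 'a set \<Rightarrow> ('a \<Rightarrow> 'v) \<Rightarrow> ('a \<Rightarrow> 'v) \<Rightarrow> ('v \<times> 'a list \<Rightarrow> 'k::field) \<Rightarrow> bool" where
  "is_QP V E h t S =
     (is_potential V E h t S \<and> (\<forall>a\<in>E. h a \<noteq> t a) \<and>
      (\<forall>p q. S p \<noteq> 0 \<longrightarrow> S q \<noteq> 0 \<longrightarrow> p \<noteq> q \<longrightarrow> (\<forall>r. snd q \<noteq> rotate r (snd p))))"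

text \<open>Cyclic derivative: the coefficient of the path w in d_c S is the sum, over all
  rotations q of the cycle c w, of the coefficient of q in S.\<close>
definition cder :: "'v set \<Rightarrow> 'a set \<Rightarrow> ('a \<Rightarrow> 'v) \<Rightarrow> ('a \<Rightarrow> 'v) \<Rightarrow> 'a
    \<Rightarrow> ('v \<times> 'a list \<Rightarrow> 'k::field) \<Rightarrow> 'v \<times> 'a list \<Rightarrow> 'k" where
  "cder V E h t c S = (\<lambda>(j, w).
      if valid_path V E h t (j, w) \<and> j = h c \<and> ptgt h (j, w) = t c
      then (\<Sum>r\<in>{0..<Suc (length w)}. S (t (last (rotate r (c # w))), rotate r (c # w)))
      else 0)"

definition jacobian :: "'v set \<Rightarrow> 'a set \<Rightarrow> ('a \<Rightarrow> 'v) \<Rightarrow> ('a \<Rightarrow> 'v)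
    \<Rightarrow> ('v \<times> 'a list \<Rightarrow> 'k::field) \<Rightarrow> ('v \<times> 'a list \<Rightarrow> 'k) set" where
  "jacobian V E h t S = padic_closure V E h t (ideal_gen V E h t ((\<lambda>c. cder V E h t c S) ` E))"

text \<open>The corner  (1-e_k) B (1-e_k): elements supported on paths neither starting nor
  ending at k.\<close>
definition corner :: "'v set \<Rightarrow> 'a set \<Rightarrow> ('a \<Rightarrow> 'v) \<Rightarrow> ('a \<Rightarrow> 'v) \<Rightarrow> 'v
    \<Rightarrow> ('v \<times> 'a list \<Rightarrow> 'k::field) set" where
  "corner V E h t k = {f \<in> palg V E h t. \<forall>p. f p \<noteq> 0 \<longrightarrow> fst p \<noteq> k \<and> ptgt h p \<noteq> k}"

datatype 'a marrow = Old 'a | Comp 'a 'a | Star 'a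

text \<open>Comp b a stands for [ba] (h a = t b = k), an arrow t a -> h b; Star c is c^*.\<close>
fun mh :: "('a \<Rightarrow> 'v) \<Rightarrow> ('a \<Rightarrow> 'v) \<Rightarrow> 'a marrow \<Rightarrow> 'v" where
  "mh h t (Old a) = h a"
| "mh h t (Comp b a) = h b"
| "mh h t (Star c) = t c"

fun mt :: "('a \<Rightarrow> 'v) \<Rightarrow> ('a \<Rightarrow> 'v) \<Rightarrow> 'a marrow \<Rightarrow> 'v" where
  "mt h t (Old a) = t a"
| "mt h t (Comp b a) = t a"
| "mt h t (Star c) = h c"

definition mE :: "'a set \<Rightarrow> ('a \<Rightarrow> 'v) \<Rightarrow> ('a \<Rightarrow> 'v) \<Rightarrow> 'v \<Rightarrow> 'a marrow set" where
  "mE E h t k =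
     Old ` {a \<in> E. h a \<noteq> k \<and> t a \<noteq> k}
     \<union> {Comp b a | a b. a \<in> E \<and> b \<in> E \<and> h a = k \<and> t b = k}
     \<union> Star ` {c \<in> E. h c = k \<or> t c = k}"

text \<open>[.] on paths: replace each factor a_p a_{p+1} with t(a_p) = h(a_{p+1}) = k by [a_p a_{p+1}].\<close>
fun bracket :: "'v \<Rightarrow> ('a \<Rightarrow> 'v) \<Rightarrow> ('a \<Rightarrow> 'v) \<Rightarrow> 'a list \<Rightarrow> 'a marrow list" where
  "bracket k h t [] = []"
| "bracket k h t [a] = [Old a]"
| "bracket k h t (a # b # xs) =
     (if t a = k \<and> h b = k then Comp a b # bracket k h t xs
      else Old a # bracket k h t (b # xs))"

fun unbr :: "'a marrow \<Rightarrow> 'a list" where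
  "unbr (Old a) = [a]"
| "unbr (Comp b a) = [b, a]"
| "unbr (Star c) = [c]"

definition unbracket :: "'a marrow list \<Rightarrow> 'a list" where
  "unbracket ys = concat (map unbr ys)"

text \<open>[S]: the image of S under the (injective) map on paths induced by bracket.\<close>
definition bracketS :: "'v \<Rightarrow> ('a \<Rightarrow> 'v) \<Rightarrow> ('a \<Rightarrow> 'v) \<Rightarrow> ('v \<times> 'a list \<Rightarrow> 'k::field)
    \<Rightarrow> 'v \<times> 'a marrow list \<Rightarrow> 'k" where
  "bracketS k h t S = (\<lambda>(i, ys).
     if ys \<noteq> [] \<and> (\<forall>c. Star c \<notin> set ys) \<and> bracket k h t (unbracket ys) = ys
     then S (i, unbracket ys) else 0)"

text \<open>S~ = [S] + sum over h a = t b = k of [ba] a^* b^*.\<close>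
definition mS :: "'a set \<Rightarrow> 'v \<Rightarrow> ('a \<Rightarrow> 'v) \<Rightarrow> ('a \<Rightarrow> 'v) \<Rightarrow> ('v \<times> 'a list \<Rightarrow> 'k::field)
    \<Rightarrow> 'v \<times> 'a marrow list \<Rightarrow> 'k" where
  "mS E k h t S = (\<lambda>(i, ys). bracketS k h t S (i, ys) +
      (if \<exists>a b. a \<in> E \<and> b \<in> E \<and> h a = k \<and> t b = k \<and> i = h b
                 \<and> ys = [Comp b a, Star a, Star b] then 1 else 0))"

text \<open>phi induces a K-algebra isomorphism C1/(J1 \<inter> C1) \<cong> C2/(J2 \<inter> C2), where C1, C2 are
  the corner subalgebras and J1, J2 the (closed) Jacobian ideals; note
  (1-e_k) P(A,S) (1-e_k) = C/(J \<inter> C).\<close>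
definition quot_iso :: "('a \<Rightarrow> 'v) \<Rightarrow> ('v \<times> 'a list \<Rightarrow> 'k::field) set \<Rightarrow> ('v \<times> 'a list \<Rightarrow> 'k) set
    \<Rightarrow> ('b \<Rightarrow> 'v) \<Rightarrow> ('v \<times> 'b list \<Rightarrow> 'k) set \<Rightarrow> ('v \<times> 'b list \<Rightarrow> 'k) set
    \<Rightarrow> (('v \<times> 'a list \<Rightarrow> 'k) \<Rightarrow> ('v \<times> 'b list \<Rightarrow> 'k)) \<Rightarrow> bool" where
  "quot_iso h1 C1 J1 h2 C2 J2 \<phi> =
     ((\<forall>x\<in>C1. \<phi> x \<in> C2) \<and>
      (\<forall>x\<in>C1. \<forall>y\<in>C1. psub x y \<in> J1 \<longleftrightarrow> psub (\<phi> x) (\<phi> y) \<in> J2) \<and>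
      (\<forall>z\<in>C2. \<exists>x\<in>C1. psub z (\<phi> x) \<in> J2) \<and>
      (\<forall>x\<in>C1. \<forall>y\<in>C1. psub (\<phi> (padd x y)) (padd (\<phi> x) (\<phi> y)) \<in> J2) \<and>
      (\<forall>x\<in>C1. \<forall>y\<in>C1. psub (\<phi> (pmul h1 x y)) (pmul h2 (\<phi> x) (\<phi> y)) \<in> J2) \<and>
      (\<forall>c. \<forall>x\<in>C1. psub (\<phi> (psmul c x)) (psmul c (\<phi> x)) \<in> J2))"

end

theory Submission
  imports Defs
begin

(* Bracketing, i.e. replacing every factor b a through k by the new arrow [ba], identifies
   the paths of Q that neither start nor end at k with the star-free paths of the premutated
   quiver that do not; this gives a multiplicative map phi between the two corner algebras.
   It matches the Jacobian relations: d_c S~ = [d_c S] for arrows c away from k, while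
   d_[ba] S~ = [d_ba S] + a* b* and d_a* S~, d_b* S~ are sums of cubic terms.  So in the
   corner of P(A~, S~) each pair a* b* may be replaced by -[d_ba S], which defines an inverse
   map psi.  Cut down to the corner by arrows at k (d_a S = sum_b d_ba S b), generators of
   either Jacobian ideal are carried into the other one; moreover psi (phi x) = x and
   z - phi (psi z) lies in the Jacobian ideal of S~.  Both maps at most double path lengths,
   so they also respect the m-adic closures. *)

section \<open>Arithmetic of coefficient functions\<close>

lemma sum_eq_single:
  assumes "finite A" "a \<in> A" "\<And>x. x \<in> A \<Longrightarrow> x \<noteq> a \<Longrightarrow> F x = 0"
  shows "sum F A = F a"
  using assms by (simp add: sum.remove[of A a] sum.neutral)

lemma sum_triangle_reindex:
  "(\<Sum>n\<in>{0..L}. \<Sum>m\<in>{0..n}. F m n) = (\<Sum>m\<in>{0..(L::nat)}. \<Sum>p\<in>{0..L-m}. F m (m+p))"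
proof -
  have "(\<Sum>n\<in>{0..L}. \<Sum>m\<in>{0..n}. F m n) = (\<Sum>m\<in>{0..L}. \<Sum>n\<in>{m..L}. F m n)"
    by (induction L) (auto simp: sum.distrib atLeastAtMostSuc_conv ac_simps)
  also have "\<dots> = (\<Sum>m\<in>{0..L}. \<Sum>p\<in>{0..L-m}. F m (m+p))"
  proof (rule sum.cong[OF refl])
    fix m assume "m \<in> {0..L}"
    then show "(\<Sum>n\<in>{m..L}. F m n) = (\<Sum>p\<in>{0..L-m}. F m (m+p))"
      by (intro sum.reindex_bij_witness[of _ "\<lambda>p. m + p" "\<lambda>n. n - m"]) auto
  qed
  finally show ?thesis .
qed

lemma sum_length3: "(\<Sum>r\<in>{0..<length [x, y, z]}. F r) = F 0 + F 1 + F (2::nat)"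
  by (simp add: numeral_2_eq_2 atLeast0_lessThan_Suc ac_simps)

lemma sum_rotate_rotate1:
  fixes F :: "'a list \<Rightarrow> 'k::ab_group_add"
  shows "(\<Sum>r\<in>{0..<length xs}. F (rotate r (rotate1 xs))) = (\<Sum>r\<in>{0..<length xs}. F (rotate r xs))"
proof -
  define g where "g r = F (rotate r xs)" for r
  have "(\<Sum>r\<in>{0..<length xs}. F (rotate r (rotate1 xs))) = (\<Sum>r<length xs. g (Suc r))"
    by (simp add: atLeast0LessThan g_def rotate_rotate[of _ 1, simplified, symmetric] rotate1_rotate_swap)
  also have "\<dots> = (\<Sum>r<length xs. g r)"
  proof -
    have e1: "(\<Sum>r<Suc (length xs). g r) = g 0 + (\<Sum>r<length xs. g (Suc r))"
      by (rule sum.lessThan_Suc_shift)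
    have e2: "(\<Sum>r<Suc (length xs). g r) = (\<Sum>r<length xs. g r) + g (length xs)"
      by (rule sum.lessThan_Suc)
    have e3: "g (length xs) = g 0" by (simp add: g_def)
    from e1 e2 e3 show ?thesis by (simp add: algebra_simps)
  qed
  finally show ?thesis by (simp add: atLeast0LessThan g_def)
qed

lemma ptgt_take_drop: "ptgt h (ptgt h (j, drop p ys), take p ys) = ptgt h (j, ys)"
  by (cases "p = 0"; cases "p < length ys") (auto simp: ptgt_def hd_drop_conv_nth)

lemma ptgt_append: "ptgt h (i, xs @ ys) = ptgt h (ptgt h (i, ys), xs)"
  by (auto simp: ptgt_def)

lemma ptgt_Cons: "ptgt h (i, a # xs) = h a"
  by (auto simp: ptgt_def)

lemma pmul_assoc:
  fixes h :: "'a \<Rightarrow> 'v" and f g l :: "'v \<times> 'a list \<Rightarrow> 'k::field"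
  shows "pmul h (pmul h f g) l = pmul h f (pmul h g l)"
proof (rule ext, clarify)
  fix j :: 'v and zs :: "'a list"
  let ?L = "length zs"
  have "pmul h (pmul h f g) l (j, zs) =
     (\<Sum>n\<in>{0..?L}. \<Sum>m\<in>{0..n}. f (ptgt h (ptgt h (j, drop n zs), drop m (take n zs)), take m (take n zs))
        * g (ptgt h (j, drop n zs), drop m (take n zs)) * l (j, drop n zs))"
    by (auto simp: pmul_def sum_distrib_right intro!: sum.cong)
  also have "\<dots> = (\<Sum>m\<in>{0..?L}. \<Sum>p\<in>{0..?L-m}. f (ptgt h (ptgt h (j, drop (m+p) zs), drop m (take (m+p) zs)), take m (take (m+p) zs))
        * g (ptgt h (j, drop (m+p) zs), drop m (take (m+p) zs)) * l (j, drop (m+p) zs))"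
    by (rule sum_triangle_reindex)
  also have "\<dots> = (\<Sum>m\<in>{0..?L}. \<Sum>p\<in>{0..?L-m}. f (ptgt h (j, drop m zs), take m zs)
        * (g (ptgt h (j, drop p (drop m zs)), take p (drop m zs)) * l (j, drop p (drop m zs))))"
  proof (intro sum.cong refl)
    fix m p assume "m \<in> {0..?L}" "p \<in> {0..?L-m}"
    have e1: "drop m (take (m+p) zs) = take p (drop m zs)" by (simp add: take_drop add.commute)
    have e2: "ptgt h (ptgt h (j, drop (m+p) zs), take p (drop m zs)) = ptgt h (j, drop m zs)"
      using ptgt_take_drop[of h j p "drop m zs"] by (simp add: add.commute)
    show "f (ptgt h (ptgt h (j, drop (m+p) zs), drop m (take (m+p) zs)), take m (take (m+p) zs))
        * g (ptgt h (j, drop (m+p) zs), drop m (take (m+p) zs)) * l (j, drop (m+p) zs) =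
        f (ptgt h (j, drop m zs), take m zs)
        * (g (ptgt h (j, drop p (drop m zs)), take p (drop m zs)) * l (j, drop p (drop m zs)))"
      by (simp add: e1 e2 add.commute mult.assoc)
  qed
  also have "\<dots> = pmul h f (pmul h g l) (j, zs)"
    by (auto simp: pmul_def sum_distrib_left intro!: sum.cong)
  finally show "pmul h (pmul h f g) l (j, zs) = pmul h f (pmul h g l) (j, zs)" .
qed

definition pmono :: "'v \<times> 'a list \<Rightarrow> 'v \<times> 'a list \<Rightarrow> 'k::field" where
  "pmono p = (\<lambda>q. if q = p then 1 else 0)"

definition punit :: "'v set \<Rightarrow> 'v \<times> 'a list \<Rightarrow> 'k::field" where
  "punit V = (\<lambda>p. if snd p = [] \<and> fst p \<in> V then 1 else 0)"

definition agree_below :: "nat \<Rightarrow> ('v \<times> 'a list \<Rightarrow> 'k) \<Rightarrow> ('v \<times> 'a list \<Rightarrow> 'k) \<Rightarrow> bool" where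
  "agree_below n f g = (\<forall>p. length (snd p) < n \<longrightarrow> f p = g p)"

definition prestrict :: "'v set \<Rightarrow> 'v set \<Rightarrow> ('a \<Rightarrow> 'v) \<Rightarrow> ('v \<times> 'a list \<Rightarrow> 'k::field) \<Rightarrow> 'v \<times> 'a list \<Rightarrow> 'k" where
  "prestrict A B h f = (\<lambda>p. if fst p \<in> A \<and> ptgt h p \<in> B then f p else 0)"

lemma pmul_padd_l: "pmul h (padd f g) l = padd (pmul h f l) (pmul h g l)"
  by (auto simp: pmul_def padd_def fun_eq_iff sum.distrib algebra_simps)

lemma pmul_padd_r: "pmul h l (padd f g) = padd (pmul h l f) (pmul h l g)"
  by (auto simp: pmul_def padd_def fun_eq_iff sum.distrib algebra_simps)

lemma pmul_psub_l: "pmul h (psub f g) l = psub (pmul h f l) (pmul h g l)"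
  by (auto simp: pmul_def psub_def fun_eq_iff sum_subtractf algebra_simps)

lemma pmul_psub_r: "pmul h l (psub f g) = psub (pmul h l f) (pmul h l g)"
  by (auto simp: pmul_def psub_def fun_eq_iff sum_subtractf algebra_simps)

lemma pmul_psmul_l: "pmul h (psmul c f) g = psmul c (pmul h f g)"
  by (auto simp: pmul_def psmul_def fun_eq_iff sum_distrib_left algebra_simps)

lemma pmul_psmul_r: "pmul h f (psmul c g) = psmul c (pmul h f g)"
  by (auto simp: pmul_def psmul_def fun_eq_iff sum_distrib_left algebra_simps)

lemma pmul_pzero_l: "pmul h pzero g = pzero"
  by (auto simp: pmul_def pzero_def fun_eq_iff)

lemma pmul_pzero_r: "pmul h f pzero = pzero"
  by (auto simp: pmul_def pzero_def fun_eq_iff)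

lemma pmul_sum_l: "pmul h (\<lambda>p. \<Sum>i\<in>I. F i p) g = (\<lambda>p. \<Sum>i\<in>I. pmul h (F i) g p)"
  by (auto simp: pmul_def fun_eq_iff sum_distrib_right intro: sum.swap)

lemma pmul_sum_r: "pmul h g (\<lambda>p. \<Sum>i\<in>I. F i p) = (\<lambda>p. \<Sum>i\<in>I. pmul h g (F i) p)"
  by (auto simp: pmul_def fun_eq_iff sum_distrib_left intro: sum.swap)

lemma psub_eq_padd_psmul: "psub u v = padd u (psmul (-1) v)"
  by (auto simp: psub_def padd_def psmul_def)

lemma psub_self: "psub w w = pzero"
  by (simp add: psub_def pzero_def)

lemma sum_psub: "(\<lambda>p. \<Sum>i\<in>I. psub (F i) (G i) p) = psub (\<lambda>p. \<Sum>i\<in>I. F i p) (\<lambda>p. \<Sum>i\<in>I. G i p)"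
  by (simp add: psub_def sum_subtractf fun_eq_iff)

lemma psub_pmul_pmul:
  fixes M1 M2 P1 P2 :: "'v \<times> 'a list \<Rightarrow> 'k::field"
  shows "psub (pmul h M1 M2) (pmul h P1 P2) = padd (pmul h (psub M1 P1) M2) (pmul h P1 (psub M2 P2))"
  by (simp add: pmul_psub_l pmul_psub_r) (auto simp: psub_def padd_def fun_eq_iff)

lemma pmul_nonzeroE:
  fixes h :: "'a \<Rightarrow> 'v" and f g :: "'v \<times> 'a list \<Rightarrow> 'k::field"
  assumes "pmul h f g (j, zs) \<noteq> 0"
  obtains n where "n \<le> length zs" "f (ptgt h (j, drop n zs), take n zs) \<noteq> 0" "g (j, drop n zs) \<noteq> 0"
proof -
  from assms obtain n where "n \<in> {0..length zs}" "f (ptgt h (j, drop n zs), take n zs) * g (j, drop n zs) \<noteq> 0"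
    unfolding pmul_def by (auto elim: sum.not_neutral_contains_not_neutral)
  then show ?thesis using that by auto
qed

lemma pmul_pmono_source:
  fixes f :: "'v \<times> 'a list \<Rightarrow> 'k::field"
  shows "pmul h f (pmono (v, xs)) (j, zs) \<noteq> 0 \<Longrightarrow> j = v"
  by (auto elim!: pmul_nonzeroE simp: pmono_def split: if_splits)

lemma pmono_mul:
  fixes h :: "'a \<Rightarrow> 'v" and j :: 'v and xs ys :: "'a list"
  shows "pmul h (pmono (ptgt h (j, ys), xs)) (pmono (j, ys)) = (pmono (j, xs @ ys) :: _ \<Rightarrow> 'k::field)"
proof (rule ext, clarify)
  fix j' :: 'v and zs :: "'a list"
  let ?T = "\<lambda>n. (pmono (ptgt h (j, ys), xs) (ptgt h (j', drop n zs), take n zs) * pmono (j, ys) (j', drop n zs) :: 'k)"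
  have lenx: "\<And>n. n \<le> length zs \<Longrightarrow> take n zs = xs \<Longrightarrow> n = length xs"
  proof -
    fix n assume "n \<le> length zs" "take n zs = xs"
    then show "n = length xs" using length_take[of n zs] by auto
  qed
  have eq: "pmul h (pmono (ptgt h (j, ys), xs)) (pmono (j, ys)) (j', zs) = (\<Sum>n\<in>{0..length zs}. ?T n)"
    by (simp add: pmul_def)
  show "pmul h (pmono (ptgt h (j, ys), xs)) (pmono (j, ys)) (j', zs) = (pmono (j, xs @ ys) (j', zs) :: 'k)"
  proof (cases "j' = j \<and> zs = xs @ ys")
    case True
    have "(\<Sum>n\<in>{0..length zs}. ?T n) = ?T (length xs)"
    proof (rule sum_eq_single)
      show "length xs \<in> {0..length zs}" using True by simp
      fix n assume "n \<in> {0..length zs}" "n \<noteq> length xs"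
      then show "?T n = 0" using lenx by (auto simp: pmono_def)
    qed simp
    also have "\<dots> = 1" using True by (simp add: pmono_def)
    finally show ?thesis using eq True by (simp add: pmono_def)
  next
    case False
    have "(\<Sum>n\<in>{0..length zs}. ?T n) = 0"
    proof (rule sum.neutral, rule ballI)
      fix n assume "n \<in> {0..length zs}"
      show "?T n = 0"
      proof (rule ccontr)
        assume "?T n \<noteq> 0"
        then have "take n zs = xs" "j' = j" "drop n zs = ys" by (auto simp: pmono_def split: if_splits)
        then show False using False append_take_drop_id[of n zs] by auto
      qed
    qed
    then show ?thesis using eq False by (simp add: pmono_def)
  qed
qed

lemma pmono_pmul:
  fixes h :: "'a \<Rightarrow> 'v" and g :: "'v \<times> 'a list \<Rightarrow> 'k::field"
  shows "pmul h (pmono (v, xs)) g (j, zs) =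
    (if length xs \<le> length zs \<and> take (length xs) zs = xs \<and> ptgt h (j, drop (length xs) zs) = v
     then g (j, drop (length xs) zs) else 0)"
proof -
  let ?T = "\<lambda>n. pmono (v, xs) (ptgt h (j, drop n zs), take n zs) * g (j, drop n zs)"
  have eq: "pmul h (pmono (v, xs)) g (j, zs) = (\<Sum>n\<in>{0..length zs}. ?T n)" by (simp add: pmul_def)
  have lenx: "\<And>n. n \<le> length zs \<Longrightarrow> take n zs = xs \<Longrightarrow> n = length xs"
  proof -
    fix n assume "n \<le> length zs" "take n zs = xs"
    then show "n = length xs" using length_take[of n zs] by auto
  qed
  show ?thesis
  proof (cases "length xs \<le> length zs \<and> take (length xs) zs = xs \<and> ptgt h (j, drop (length xs) zs) = v")
    case True
    have "(\<Sum>n\<in>{0..length zs}. ?T n) = ?T (length xs)"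
    proof (rule sum_eq_single)
      show "length xs \<in> {0..length zs}" using True by simp
      fix n assume "n \<in> {0..length zs}" "n \<noteq> length xs"
      then show "?T n = 0" using lenx by (auto simp: pmono_def)
    qed simp
    then show ?thesis using eq True by (simp add: pmono_def)
  next
    case False
    have "(\<Sum>n\<in>{0..length zs}. ?T n) = 0"
    proof (rule sum.neutral, rule ballI)
      fix n assume n: "n \<in> {0..length zs}"
      show "?T n = 0"
      proof (rule ccontr)
        assume "?T n \<noteq> 0"
        then have "take n zs = xs" "ptgt h (j, drop n zs) = v" by (auto simp: pmono_def split: if_splits)
        moreover then have "n = length xs" using lenx n by auto
        ultimately show False using False n by auto
      qed
    qed
    then show ?thesis using eq False by auto
  qed
qed

lemma pmul_pmono_single:
  fixes h :: "'a \<Rightarrow> 'v" and g :: "'v \<times> 'a list \<Rightarrow> 'k::field"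
  shows "pmul h g (pmono (v, [b])) (j, zs) = (if j = v \<and> zs \<noteq> [] \<and> last zs = b then g (h b, butlast zs) else 0)"
proof -
  let ?T = "\<lambda>n. g (ptgt h (j, drop n zs), take n zs) * pmono (v, [b]) (j, drop n zs)"
  have eq: "pmul h g (pmono (v, [b])) (j, zs) = (\<Sum>n\<in>{0..length zs}. ?T n)" by (simp add: pmul_def)
  have strip_right: "\<And>n. drop n zs = [b] \<longleftrightarrow> (zs \<noteq> [] \<and> last zs = b \<and> n = length zs - 1)"
  proof -
    fix n
    show "drop n zs = [b] \<longleftrightarrow> (zs \<noteq> [] \<and> last zs = b \<and> n = length zs - 1)"
    proof
      assume d: "drop n zs = [b]"
      then have "length (drop n zs) = 1" by simp
      then have n: "n = length zs - 1" "zs \<noteq> []" by auto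
      have "last zs = last (take n zs @ drop n zs)" by simp
      also have "\<dots> = b" using d by simp
      finally show "zs \<noteq> [] \<and> last zs = b \<and> n = length zs - 1" using n by simp
    next
      assume H: "zs \<noteq> [] \<and> last zs = b \<and> n = length zs - 1"
      then show "drop n zs = [b]" by (cases zs rule: rev_cases) auto
    qed
  qed
  show ?thesis
  proof (cases "j = v \<and> zs \<noteq> [] \<and> last zs = b")
    case True
    have "(\<Sum>n\<in>{0..length zs}. ?T n) = ?T (length zs - 1)"
    proof (rule sum_eq_single)
      fix n assume "n \<in> {0..length zs}" "n \<noteq> length zs - 1"
      then show "?T n = 0" using strip_right by (auto simp: pmono_def)
    qed auto
    also have "\<dots> = g (h b, butlast zs)"
      using True strip_right[of "length zs - 1"] by (simp add: pmono_def ptgt_def butlast_conv_take)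
    finally show ?thesis using eq True by simp
  next
    case False
    have "(\<Sum>n\<in>{0..length zs}. ?T n) = 0"
      by (rule sum.neutral) (use False strip_right in \<open>auto simp: pmono_def\<close>)
    then show ?thesis using eq False by auto
  qed
qed

lemma agree_below_trans: "agree_below n f g \<Longrightarrow> agree_below n g l \<Longrightarrow> agree_below n f l"
  by (auto simp: agree_below_def)

lemma agree_below_refl: "agree_below n f f"
  by (auto simp: agree_below_def)

lemma agree_below_mono: "agree_below n f g \<Longrightarrow> m \<le> n \<Longrightarrow> agree_below m f g"
  by (auto simp: agree_below_def)

lemma agree_below_padd: "agree_below n f f' \<Longrightarrow> agree_below n g g' \<Longrightarrow> agree_below n (padd f g) (padd f' g')"
  by (auto simp: agree_below_def padd_def)

lemma agree_below_psmul: "agree_below n f f' \<Longrightarrow> agree_below n (psmul c f) (psmul c f')"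
  by (auto simp: agree_below_def psmul_def)

lemma agree_below_psub: "agree_below n f f' \<Longrightarrow> agree_below n g g' \<Longrightarrow> agree_below n (psub f g) (psub f' g')"
  by (auto simp: agree_below_def psub_def)

lemma agree_below_pmul:
  fixes h :: "'a \<Rightarrow> 'v" and f f' g g' :: "'v \<times> 'a list \<Rightarrow> 'k::field"
  assumes "agree_below n f f'" "agree_below n g g'"
  shows "agree_below n (pmul h f g) (pmul h f' g')"
  unfolding agree_below_def
proof (clarify)
  fix j :: 'v and zs :: "'a list" assume "length (snd (j, zs)) < n"
  then show "pmul h f g (j, zs) = pmul h f' g' (j, zs)"
    using assms unfolding agree_below_def pmul_def
    by (auto intro!: sum.cong)
qed

lemma prestrict_pmul:
  fixes h :: "'a \<Rightarrow> 'v" and f g :: "'v \<times> 'a list \<Rightarrow> 'k::field"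
  shows "prestrict A B h (pmul h f g) = pmul h (prestrict UNIV B h f) (prestrict A UNIV h g)"
proof (rule ext, clarify)
  fix j :: 'v and zs :: "'a list"
  show "prestrict A B h (pmul h f g) (j, zs) = pmul h (prestrict UNIV B h f) (prestrict A UNIV h g) (j, zs)"
    unfolding prestrict_def pmul_def
    using ptgt_take_drop[of h j _ zs] by (auto intro!: sum.cong)
qed

lemma pmul_prestrict_middle: "pmul h (prestrict A UNIV h f) g = pmul h f (prestrict UNIV A h g)"
  unfolding prestrict_def pmul_def fun_eq_iff by (auto intro!: sum.cong)

lemma prestrict_prestrict: "prestrict A B h (prestrict A' B' h f) = prestrict (A \<inter> A') (B \<inter> B') h f"
  by (auto simp: prestrict_def fun_eq_iff)

lemma prestrict_UNIV: "prestrict UNIV UNIV h f = f"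
  by (auto simp: prestrict_def fun_eq_iff)

lemma prestrict_id: "(\<And>p. f p \<noteq> 0 \<Longrightarrow> fst p \<in> A \<and> ptgt h p \<in> B) \<Longrightarrow> prestrict A B h f = f"
  unfolding prestrict_def fun_eq_iff by (metis (mono_tags))

lemma prestrict_padd: "prestrict A B h' (padd f1 f2) = padd (prestrict A B h' f1) (prestrict A B h' f2)"
  by (auto simp: prestrict_def padd_def fun_eq_iff)

lemma prestrict_pzero: "prestrict A B h' pzero = pzero"
  by (auto simp: prestrict_def pzero_def fun_eq_iff)

lemma prestrict_pmul3:
  assumes g: "prestrict {s} {e} h g = g"
  shows "prestrict A B h (pmul h (pmul h x g) y) = pmul h (pmul h (prestrict {e} B h x) g) (prestrict A {s} h y)"
proof -
  have "prestrict A B h (pmul h (pmul h x g) y) = pmul h (pmul h (prestrict UNIV B h x) (prestrict UNIV UNIV h g)) (prestrict A UNIV h y)"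
    by (simp add: prestrict_pmul)
  also have "\<dots> = pmul h (pmul h (prestrict UNIV B h x) (prestrict UNIV {e} h (prestrict {s} UNIV h g))) (prestrict A UNIV h y)"
    using g by (simp add: prestrict_UNIV prestrict_prestrict)
  also have "\<dots> = pmul h (pmul h (prestrict {e} UNIV h (prestrict UNIV B h x)) (prestrict {s} UNIV h g)) (prestrict A UNIV h y)"
    by (simp add: pmul_prestrict_middle[symmetric])
  also have "\<dots> = pmul h (prestrict {e} UNIV h (prestrict UNIV B h x)) (pmul h (prestrict {s} UNIV h g) (prestrict A UNIV h y))"
    by (simp add: pmul_assoc)
  also have "\<dots> = pmul h (prestrict {e} UNIV h (prestrict UNIV B h x)) (pmul h g (prestrict UNIV {s} h (prestrict A UNIV h y)))"
    using g by (simp add: pmul_prestrict_middle prestrict_prestrict)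
  also have "\<dots> = pmul h (pmul h (prestrict {e} B h x) g) (prestrict A {s} h y)"
    by (simp add: prestrict_prestrict pmul_assoc Int_commute)
  finally show ?thesis .
qed

section \<open>The complete path algebra of a quiver\<close>

lemma valid_path_Nil: "valid_path V E h t (i, []) \<longleftrightarrow> i \<in> V"
  by (simp add: valid_path_def)

lemma valid_path_successively: "xs \<noteq> [] \<Longrightarrow> valid_path V E h t (i, xs) \<longleftrightarrow>
    set xs \<subseteq> E \<and> successively (\<lambda>a b. t a = h b) xs \<and> i = t (last xs)"
  by (simp add: valid_path_def successively_conv_nth)

locale path_algebra =
  fixes V :: "'v set" and E :: "'a set" and h t :: "'a \<Rightarrow> 'v"
  assumes quiver: "is_quiver V E h t"
begin

abbreviation "valid \<equiv> valid_path V E h t"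

lemma fin_V: "finite V" and fin_E: "finite E" and hV: "a \<in> E \<Longrightarrow> h a \<in> V" and tV: "a \<in> E \<Longrightarrow> t a \<in> V"
  using quiver by (auto simp: is_quiver_def)

lemma valid_Cons: "valid (i, a # xs) \<longleftrightarrow> a \<in> E \<and> valid (i, xs) \<and> t a = ptgt h (i, xs)"
proof (cases xs)
  case Nil then show ?thesis using tV by (auto simp: valid_path_def ptgt_def)
next
  case (Cons b ys)
  then show ?thesis by (auto simp: valid_path_successively ptgt_def)
qed

lemma valid_append: "valid (i, xs @ ys) \<longleftrightarrow> valid (ptgt h (i, ys), xs) \<and> valid (i, ys)"
proof (induction xs)
  case Nil
  show ?case
  proof (cases ys)
    case Nil then show ?thesis by (simp add: ptgt_def)
  next
    case (Cons b zs)
    then show ?thesis using hV by (auto simp: valid_Cons ptgt_def valid_path_Nil)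
  qed
next
  case (Cons a xs)
  then show ?case by (auto simp: valid_Cons ptgt_append)
qed

lemma valid_V: "valid (i, xs) \<Longrightarrow> i \<in> V"
  by (cases xs rule: rev_cases) (auto simp: valid_path_def tV)

lemma valid_tgtV: "valid p \<Longrightarrow> ptgt h p \<in> V"
  by (cases p; cases "snd p") (auto simp: valid_path_def ptgt_def hV)

lemma valid_set: "valid (i, xs) \<Longrightarrow> set xs \<subseteq> E"
  by (cases "xs = []") (auto simp: valid_path_successively)

lemma palgI: "(\<And>p. f p \<noteq> 0 \<Longrightarrow> valid p) \<Longrightarrow> f \<in> palg V E h t"
  by (auto simp: palg_def)

lemma palgD: "f \<in> palg V E h t \<Longrightarrow> f p \<noteq> 0 \<Longrightarrow> valid p"
  unfolding palg_def by blast

lemma pmul_palg: "f \<in> palg V E h t \<Longrightarrow> g \<in> palg V E h t \<Longrightarrow> pmul h f g \<in> palg V E h t"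
proof (rule palgI)
  fix p assume f: "f \<in> palg V E h t" and g: "g \<in> palg V E h t" and ne: "pmul h f g p \<noteq> 0"
  obtain j zs where p: "p = (j, zs)" by (cases p)
  from ne obtain n where "f (ptgt h (j, drop n zs), take n zs) * g (j, drop n zs) \<noteq> 0"
    unfolding p pmul_def by (auto elim: sum.not_neutral_contains_not_neutral)
  then have "f (ptgt h (j, drop n zs), take n zs) \<noteq> 0" "g (j, drop n zs) \<noteq> 0" by auto
  then have "valid (ptgt h (j, drop n zs), take n zs)" "valid (j, drop n zs)"
    using f g palgD by blast+
  then show "valid p" unfolding p using valid_append[of j "take n zs" "drop n zs"] by simp
qed

lemma padd_palg: "f \<in> palg V E h t \<Longrightarrow> g \<in> palg V E h t \<Longrightarrow> padd f g \<in> palg V E h t"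
  by (rule palgI) (metis add_0 padd_def palgD)

lemma psub_palg: "f \<in> palg V E h t \<Longrightarrow> g \<in> palg V E h t \<Longrightarrow> psub f g \<in> palg V E h t"
  by (rule palgI) (metis diff_self psub_def palgD)

lemma psmul_palg: "f \<in> palg V E h t \<Longrightarrow> psmul c f \<in> palg V E h t"
  by (auto simp: palg_def psmul_def)

lemma pzero_palg: "pzero \<in> palg V E h t"
  by (auto simp: palg_def pzero_def)

lemma punit_palg: "punit V \<in> palg V E h t"
  by (auto simp: palg_def punit_def valid_path_Nil)

lemma pmono_palg: "valid p \<Longrightarrow> pmono p \<in> palg V E h t"
  by (auto simp: palg_def pmono_def)

lemma prestrict_palg: "f \<in> palg V E h t \<Longrightarrow> prestrict A B h f \<in> palg V E h t"
  by (auto simp: palg_def prestrict_def)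

lemma pmul_punit_left: "f \<in> palg V E h t \<Longrightarrow> pmul h (punit V) f = f"
proof (rule ext, clarify)
  fix j zs assume f: "f \<in> palg V E h t"
  have "pmul h (punit V) f (j, zs) = punit V (ptgt h (j, drop 0 zs), take 0 zs) * f (j, drop 0 zs)"
    unfolding pmul_def by (subst sum_eq_single[where a=0]) (auto simp: punit_def)
  also have "\<dots> = f (j, zs)" using palgD[OF f, of "(j, zs)"] valid_tgtV[of "(j,zs)"]
    by (auto simp: punit_def)
  finally show "pmul h (punit V) f (j, zs) = f (j, zs)" .
qed

lemma pmul_punit_right: "f \<in> palg V E h t \<Longrightarrow> pmul h f (punit V) = f"
proof (rule ext, clarify)
  fix j zs assume f: "f \<in> palg V E h t"
  have "pmul h f (punit V) (j, zs) = f (ptgt h (j, drop (length zs) zs), take (length zs) zs) * punit V (j, drop (length zs) zs)"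
  proof -
    have "pmul h f (punit V) (j, zs) = (\<Sum>n\<in>{0..length zs}. f (ptgt h (j, drop n zs), take n zs) * punit V (j, drop n zs))"
      by (simp add: pmul_def)
    also have "\<dots> = f (ptgt h (j, drop (length zs) zs), take (length zs) zs) * punit V (j, drop (length zs) zs)"
      by (rule sum_eq_single) (auto simp: punit_def)
    finally show ?thesis .
  qed
  also have "\<dots> = f (j, zs)" using palgD[OF f, of "(j, zs)"] valid_V[of j zs]
    by (auto simp: punit_def ptgt_def)
  finally show "pmul h f (punit V) (j, zs) = f (j, zs)" .
qed

lemma corner_iff: "f \<in> corner V E h t k \<longleftrightarrow> f \<in> palg V E h t \<and> (\<forall>p. f p \<noteq> 0 \<longrightarrow> fst p \<noteq> k \<and> ptgt h p \<noteq> k)"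
  by (simp add: corner_def)

lemma cornerD: "f \<in> corner V E h t k \<Longrightarrow> f p \<noteq> 0 \<Longrightarrow> valid p \<and> fst p \<noteq> k \<and> ptgt h p \<noteq> k"
  unfolding corner_iff using palgD by blast

lemma cornerI: "(\<And>p. f p \<noteq> 0 \<Longrightarrow> valid p \<and> fst p \<noteq> k \<and> ptgt h p \<noteq> k) \<Longrightarrow> f \<in> corner V E h t k"
  unfolding corner_iff using palgI by blast

lemma corner_palg: "f \<in> corner V E h t k \<Longrightarrow> f \<in> palg V E h t"
  by (simp add: corner_iff)

lemma corner_pmul: "f \<in> corner V E h t k \<Longrightarrow> g \<in> corner V E h t k \<Longrightarrow> pmul h f g \<in> corner V E h t k"
proof (rule cornerI)
  fix p assume f: "f \<in> corner V E h t k" and g: "g \<in> corner V E h t k" and ne: "pmul h f g p \<noteq> 0"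
  obtain j zs where p: "p = (j, zs)" by (cases p)
  have "pmul h f g \<in> palg V E h t" using f g corner_palg pmul_palg by blast
  then have v: "valid p" using ne palgD by blast
  from ne obtain n where "f (ptgt h (j, drop n zs), take n zs) \<noteq> 0" "g (j, drop n zs) \<noteq> 0"
    unfolding p by (rule pmul_nonzeroE)
  then have 1: "ptgt h (ptgt h (j, drop n zs), take n zs) \<noteq> k" "j \<noteq> k"
    using cornerD[OF f] cornerD[OF g] by (metis fst_conv)+
  show "valid p \<and> fst p \<noteq> k \<and> ptgt h p \<noteq> k"
    using 1 v ptgt_take_drop[of h j n zs] unfolding p by simp
qed

lemma corner_padd: "f \<in> corner V E h t k \<Longrightarrow> g \<in> corner V E h t k \<Longrightarrow> padd f g \<in> corner V E h t k"
proof (rule cornerI)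
  fix p assume f: "f \<in> corner V E h t k" and g: "g \<in> corner V E h t k" and "padd f g p \<noteq> 0"
  then have "f p \<noteq> 0 \<or> g p \<noteq> 0" by (auto simp: padd_def)
  then show "valid p \<and> fst p \<noteq> k \<and> ptgt h p \<noteq> k" using cornerD[OF f] cornerD[OF g] by blast
qed

lemma corner_psub: "f \<in> corner V E h t k \<Longrightarrow> g \<in> corner V E h t k \<Longrightarrow> psub f g \<in> corner V E h t k"
proof (rule cornerI)
  fix p assume f: "f \<in> corner V E h t k" and g: "g \<in> corner V E h t k" and "psub f g p \<noteq> 0"
  then have "f p \<noteq> 0 \<or> g p \<noteq> 0" by (auto simp: psub_def)
  then show "valid p \<and> fst p \<noteq> k \<and> ptgt h p \<noteq> k" using cornerD[OF f] cornerD[OF g] by blast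
qed

lemma corner_sum: "(\<And>i. i \<in> I \<Longrightarrow> F i \<in> corner V E h t k) \<Longrightarrow> (\<lambda>p. \<Sum>i\<in>I. F i p) \<in> corner V E h t k"
proof (rule cornerI)
  fix p assume F: "\<And>i. i \<in> I \<Longrightarrow> F i \<in> corner V E h t k" and "(\<Sum>i\<in>I. F i p) \<noteq> 0"
  then obtain i where "i \<in> I" "F i p \<noteq> 0" by (auto elim: sum.not_neutral_contains_not_neutral)
  then show "valid p \<and> fst p \<noteq> k \<and> ptgt h p \<noteq> k" using cornerD[OF F] by blast
qed

lemma corner_pmono: "valid p \<Longrightarrow> fst p \<noteq> k \<Longrightarrow> ptgt h p \<noteq> k \<Longrightarrow> pmono p \<in> corner V E h t k"
  by (rule cornerI) (auto simp: pmono_def split: if_splits)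

lemma prestrict_corner: "A \<subseteq> -{k} \<Longrightarrow> B \<subseteq> -{k} \<Longrightarrow> f \<in> palg V E h t \<Longrightarrow> prestrict A B h f \<in> corner V E h t k"
  by (rule cornerI) (auto simp: prestrict_def split: if_splits dest: palgD)

lemma prestrict_corner_id: "f \<in> corner V E h t k \<Longrightarrow> prestrict (-{k}) (-{k}) h f = f"
  by (auto simp: prestrict_def fun_eq_iff dest: cornerD)

lemma corner_truncation:
  assumes z: "z \<in> corner V E h t k"
  obtains Q where "finite Q" "\<And>q. q \<in> Q \<Longrightarrow> valid q \<and> fst q \<noteq> k \<and> ptgt h q \<noteq> k"
    "agree_below N z (\<lambda>p. \<Sum>q\<in>Q. psmul (z q) (pmono q) p)"
proof -
  define Q where "Q = {q. valid q \<and> fst q \<noteq> k \<and> ptgt h q \<noteq> k \<and> length (snd q) < N}"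
  have "Q \<subseteq> V \<times> {ys. set ys \<subseteq> E \<and> length ys \<le> N}"
    using valid_V valid_set by (fastforce simp: Q_def)
  moreover have "finite (V \<times> {ys. set ys \<subseteq> E \<and> length ys \<le> N})"
    using fin_V fin_E by (simp add: finite_lists_length_le)
  ultimately have fin: "finite Q" by (rule finite_subset)
  have sum_eq: "(\<Sum>q\<in>Q. psmul (z q) (pmono q) p) = (if p \<in> Q then z p else 0)" for p
    unfolding psmul_def pmono_def using fin by (simp add: if_distrib[of "\<lambda>x. _ * x"] sum.delta' cong: if_cong)
  show ?thesis
  proof (rule that[OF fin])
    show "valid q \<and> fst q \<noteq> k \<and> ptgt h q \<noteq> k" if "q \<in> Q" for q
      using that by (simp add: Q_def)
    show "agree_below N z (\<lambda>p. \<Sum>q\<in>Q. psmul (z q) (pmono q) p)"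
      unfolding agree_below_def sum_eq using cornerD[OF z] by (fastforce simp: Q_def)
  qed
qed

definition strip_left :: "('v \<times> 'a list \<Rightarrow> 'k::field) \<Rightarrow> 'a \<Rightarrow> 'v \<times> 'a list \<Rightarrow> 'k" where
  "strip_left f a = (\<lambda>(j, w). if ptgt h (j, w) = t a then f (j, a # w) else 0)"

definition strip_right :: "'v \<Rightarrow> ('v \<times> 'a list \<Rightarrow> 'k::field) \<Rightarrow> 'a \<Rightarrow> 'v \<times> 'a list \<Rightarrow> 'k" where
  "strip_right v f b = (\<lambda>(j, w). if j = h b then f (v, w @ [b]) else 0)"

lemma sum_strip_left:
  assumes f: "f \<in> palg V E h t" and sup: "\<And>p. f p \<noteq> 0 \<Longrightarrow> ptgt h p = v \<and> snd p \<noteq> []"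
  shows "f = (\<lambda>p. \<Sum>a\<in>{a\<in>E. h a = v}. pmul h (pmono (t a, [a])) (strip_left f a) p)"
proof (rule ext, clarify)
  fix j zs
  show "f (j, zs) = (\<Sum>a\<in>{a\<in>E. h a = v}. pmul h (pmono (t a, [a])) (strip_left f a) (j, zs))"
  proof (cases zs)
    case Nil
    then have "f (j, zs) = 0" using sup[of "(j, zs)"] by auto
    then show ?thesis using Nil by (simp add: pmono_pmul)
  next
    case (Cons a0 zs')
    have T: "pmul h (pmono (t a, [a])) (strip_left f a) (j, zs) = (if a = a0 \<and> ptgt h (j, zs') = t a then f (j, zs) else 0)" for a
      using Cons by (simp add: pmono_pmul strip_left_def)
    show ?thesis
    proof (cases "f (j, zs) = 0")
      case True
      have "(\<Sum>a\<in>{a\<in>E. h a = v}. pmul h (pmono (t a, [a])) (strip_left f a) (j, zs)) = 0"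
        by (rule sum.neutral) (use True in \<open>auto simp: T\<close>)
      then show ?thesis using True by simp
    next
      case False
      then have v: "valid (j, zs)" "ptgt h (j, zs) = v" using f palgD sup by blast+
      then have a0: "a0 \<in> E" "t a0 = ptgt h (j, zs')" "h a0 = v" using Cons by (auto simp: valid_Cons ptgt_def)
      have "(\<Sum>a\<in>{a\<in>E. h a = v}. pmul h (pmono (t a, [a])) (strip_left f a) (j, zs)) =
          pmul h (pmono (t a0, [a0])) (strip_left f a0) (j, zs)"
        by (rule sum_eq_single) (use fin_E a0 in \<open>auto simp: T\<close>)
      moreover have "pmul h (pmono (t a0, [a0])) (strip_left f a0) (j, zs) = f (j, zs)" using T[of a0] a0 by simp
      ultimately show ?thesis by simp
    qed
  qed
qed

lemma sum_strip_right:
  assumes f: "f \<in> palg V E h t" and sup: "\<And>p. f p \<noteq> 0 \<Longrightarrow> fst p = v \<and> snd p \<noteq> []"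
  shows "f = (\<lambda>p. \<Sum>b\<in>{b\<in>E. t b = v}. pmul h (strip_right v f b) (pmono (v, [b])) p)"
proof (rule ext, clarify)
  fix j zs
  have T: "pmul h (strip_right v f b) (pmono (v, [b])) (j, zs) = (if j = v \<and> zs \<noteq> [] \<and> last zs = b then f (j, zs) else 0)" for b
    by (auto simp: pmul_pmono_single strip_right_def)
  show "f (j, zs) = (\<Sum>b\<in>{b\<in>E. t b = v}. pmul h (strip_right v f b) (pmono (v, [b])) (j, zs))"
  proof (cases "f (j, zs) = 0")
    case True
    have "(\<Sum>b\<in>{b\<in>E. t b = v}. pmul h (strip_right v f b) (pmono (v, [b])) (j, zs)) = 0"
      by (rule sum.neutral) (use True in \<open>auto simp: T\<close>)
    then show ?thesis using True by simp
  next
    case False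
    then have v: "valid (j, zs)" "j = v" "zs \<noteq> []" using f palgD sup by fastforce+
    then have l: "last zs \<in> E" "t (last zs) = v" using valid_path_successively[of zs V E h t j] by auto
    have "(\<Sum>b\<in>{b\<in>E. t b = v}. pmul h (strip_right v f b) (pmono (v, [b])) (j, zs)) =
        pmul h (strip_right v f (last zs)) (pmono (v, [last zs])) (j, zs)"
      by (rule sum_eq_single) (use fin_E l in \<open>auto simp: T\<close>)
    moreover have "pmul h (strip_right v f (last zs)) (pmono (v, [last zs])) (j, zs) = f (j, zs)" using T[of "last zs"] v by simp
    ultimately show ?thesis by simp
  qed
qed

abbreviation "gen_ideal X \<equiv> ideal_gen V E h t X"

abbreviation "closed_ideal X \<equiv> padic_closure V E h t (ideal_gen V E h t X)"

lemma gen_ideal_gen: "g \<in> X \<Longrightarrow> x \<in> palg V E h t \<Longrightarrow> y \<in> palg V E h t \<Longrightarrow> pmul h (pmul h x g) y \<in> gen_ideal X"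
  by (rule ideal_gen.gen)

lemma gen_ideal_zero: "pzero \<in> gen_ideal X"
  by (rule ideal_gen.zero)

lemma gen_ideal_add: "u \<in> gen_ideal X \<Longrightarrow> v \<in> gen_ideal X \<Longrightarrow> padd u v \<in> gen_ideal X"
  by (rule ideal_gen.add)

lemma gen_ideal_palg: "u \<in> gen_ideal X \<Longrightarrow> X \<subseteq> palg V E h t \<Longrightarrow> u \<in> palg V E h t"
  by (induction rule: ideal_gen.induct) (auto intro: pmul_palg padd_palg pzero_palg)

lemma gen_ideal_mult_left: "u \<in> gen_ideal X \<Longrightarrow> f \<in> palg V E h t \<Longrightarrow> pmul h f u \<in> gen_ideal X"
proof (induction rule: ideal_gen.induct)
  case zero then show ?case by (simp add: pmul_pzero_r gen_ideal_zero)
next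
  case (gen g x y)
  then show ?case using gen_ideal_gen[of g X "pmul h f x" y] by (simp add: pmul_assoc pmul_palg)
next
  case (add u v) then show ?case by (simp add: pmul_padd_r gen_ideal_add)
qed

lemma gen_ideal_mult_right: "u \<in> gen_ideal X \<Longrightarrow> f \<in> palg V E h t \<Longrightarrow> pmul h u f \<in> gen_ideal X"
proof (induction rule: ideal_gen.induct)
  case zero then show ?case by (simp add: pmul_pzero_l gen_ideal_zero)
next
  case (gen g x y)
  then show ?case using gen_ideal_gen[of g X x "pmul h y f"] by (simp add: pmul_assoc pmul_palg)
next
  case (add u v) then show ?case by (simp add: pmul_padd_l gen_ideal_add)
qed

lemma gen_ideal_smult: "u \<in> gen_ideal X \<Longrightarrow> psmul c u \<in> gen_ideal X"
proof (induction rule: ideal_gen.induct)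
  case zero
  show ?case using gen_ideal_zero[of X] by (simp add: psmul_def pzero_def)
next
  case (gen g x y)
  then show ?case using gen_ideal_gen[of g X "psmul c x" y] by (simp add: pmul_psmul_l psmul_palg)
next
  case (add u v)
  have "psmul c (padd u v) = padd (psmul c u) (psmul c v)" by (auto simp: psmul_def padd_def algebra_simps)
  then show ?case using add by (simp add: gen_ideal_add)
qed

lemma gen_ideal_generator: "X \<subseteq> palg V E h t \<Longrightarrow> g \<in> X \<Longrightarrow> g \<in> gen_ideal X"
proof -
  assume "X \<subseteq> palg V E h t" "g \<in> X"
  then have "g \<in> palg V E h t" by blast
  then have "pmul h (pmul h (punit V) g) (punit V) = g" by (simp add: pmul_punit_left pmul_punit_right)
  then show ?thesis using gen_ideal_gen[of g X "punit V" "punit V"] punit_palg \<open>g \<in> X\<close> by simp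
qed

lemma closed_ideal_iff: "f \<in> closed_ideal X \<longleftrightarrow> f \<in> palg V E h t \<and> (\<forall>n. \<exists>x\<in>gen_ideal X. agree_below n f x)"
  by (auto simp: padic_closure_def agree_below_def)

lemma closed_ideal_closed: "f \<in> palg V E h t \<Longrightarrow> (\<And>n. \<exists>u\<in>closed_ideal X. agree_below n f u) \<Longrightarrow> f \<in> closed_ideal X"
proof -
  assume f: "f \<in> palg V E h t" and H: "\<And>n. \<exists>u\<in>closed_ideal X. agree_below n f u"
  have "\<exists>x\<in>gen_ideal X. agree_below n f x" for n
  proof -
    obtain u where "u \<in> closed_ideal X" "agree_below n f u" using H by blast
    then obtain x where "x \<in> gen_ideal X" "agree_below n u x" unfolding closed_ideal_iff by blast
    then show ?thesis using \<open>agree_below n f u\<close> agree_below_trans by blast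
  qed
  then show ?thesis using f closed_ideal_iff by blast
qed

lemma gen_ideal_subset_closed: "X \<subseteq> palg V E h t \<Longrightarrow> u \<in> gen_ideal X \<Longrightarrow> u \<in> closed_ideal X"
  unfolding closed_ideal_iff using gen_ideal_palg agree_below_refl by blast

lemma closed_ideal_generator: "X \<subseteq> palg V E h t \<Longrightarrow> g \<in> X \<Longrightarrow> g \<in> closed_ideal X"
  using gen_ideal_subset_closed gen_ideal_generator by blast

lemma closed_ideal_zero: "pzero \<in> closed_ideal X"
  unfolding closed_ideal_iff using gen_ideal_zero agree_below_refl pzero_palg by blast

lemma closed_ideal_add: "u \<in> closed_ideal X \<Longrightarrow> v \<in> closed_ideal X \<Longrightarrow> padd u v \<in> closed_ideal X"
  unfolding closed_ideal_iff by (meson agree_below_padd gen_ideal_add padd_palg)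

lemma closed_ideal_smult: "u \<in> closed_ideal X \<Longrightarrow> psmul c u \<in> closed_ideal X"
  unfolding closed_ideal_iff by (meson agree_below_psmul gen_ideal_smult psmul_palg)

lemma closed_ideal_sub: "u \<in> closed_ideal X \<Longrightarrow> v \<in> closed_ideal X \<Longrightarrow> psub u v \<in> closed_ideal X"
  by (simp add: psub_eq_padd_psmul closed_ideal_add closed_ideal_smult)

lemma closed_ideal_mult_left: "f \<in> palg V E h t \<Longrightarrow> u \<in> closed_ideal X \<Longrightarrow> pmul h f u \<in> closed_ideal X"
  unfolding closed_ideal_iff by (meson agree_below_pmul agree_below_refl gen_ideal_mult_left pmul_palg)

lemma closed_ideal_mult_right: "f \<in> palg V E h t \<Longrightarrow> u \<in> closed_ideal X \<Longrightarrow> pmul h u f \<in> closed_ideal X"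
  unfolding closed_ideal_iff by (meson agree_below_pmul agree_below_refl gen_ideal_mult_right pmul_palg)

lemma closed_ideal_sum: "finite I \<Longrightarrow> (\<And>i. i \<in> I \<Longrightarrow> G i \<in> closed_ideal X) \<Longrightarrow> (\<lambda>p. \<Sum>i\<in>I. G i p) \<in> closed_ideal X"
proof (induction I rule: finite_induct)
  case empty then show ?case using closed_ideal_zero by (simp add: pzero_def)
next
  case (insert x F)
  then show ?case using closed_ideal_add[of "G x" X "\<lambda>p. \<Sum>i\<in>F. G i p"] by (simp add: padd_def)
qed

end

section \<open>Bracketing of paths\<close>

lemma unbracket_Nil[simp]: "unbracket [] = []" by (simp add: unbracket_def)

lemma unbracket_Cons[simp]: "unbracket (d # ys) = unbr d @ unbracket ys" by (simp add: unbracket_def)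

lemma unbracket_append[simp]: "unbracket (xs @ ys) = unbracket xs @ unbracket ys" by (simp add: unbracket_def)

lemma unbr_ne[simp]: "unbr d \<noteq> []" by (cases d) auto

lemma unbracket_eq_Nil[simp]: "unbracket ys = [] \<longleftrightarrow> ys = []" by (cases ys) auto

lemma length_unbracket: "length (unbracket ys) \<le> 2 * length ys"
proof (induction ys)
  case (Cons d ys) then show ?case by (cases d) auto
qed simp

lemma unbracket_bracket: "unbracket (bracket k h t xs) = xs"
  by (induction k h t xs rule: bracket.induct) auto

lemma length_bracket: "length (bracket k' h' t' xs) \<le> length xs"
  by (induction k' h' t' xs rule: bracket.induct) auto

lemma bracket_append: "xs \<noteq> [] \<Longrightarrow> t (last xs) \<noteq> k \<Longrightarrow> bracket k h t (xs @ ys) = bracket k h t xs @ bracket k h t ys"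
proof (induction k h t xs rule: bracket.induct)
  case (1 k h t) then show ?case by simp
next
  case (2 k h t a)
  then show ?case by (cases ys) auto
next
  case (3 k h t a b xs)
  show ?case
  proof (cases "t a = k \<and> h b = k")
    case True
    then show ?thesis using 3 by (cases "xs = []") auto
  next
    case False
    then show ?thesis using 3 by auto
  qed
qed

definition bracket_letter :: "'v \<Rightarrow> ('a \<Rightarrow> 'v) \<Rightarrow> ('a \<Rightarrow> 'v) \<Rightarrow> 'a marrow \<Rightarrow> bool" where
  "bracket_letter k h t d = (case d of Old c \<Rightarrow> h c \<noteq> k \<and> t c \<noteq> k
       | Comp b a \<Rightarrow> t b = k \<and> h a = k \<and> t a \<noteq> k \<and> h b \<noteq> k | Star c \<Rightarrow> False)"

lemma bracket_letter_simps[simp]: "bracket_letter k h t (Old c) = (h c \<noteq> k \<and> t c \<noteq> k)"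
  "bracket_letter k h t (Comp b a) = (t b = k \<and> h a = k \<and> t a \<noteq> k \<and> h b \<noteq> k)"
  "bracket_letter k h t (Star c) = False"
  by (simp_all add: bracket_letter_def)

lemma bracket_unbracket: "\<forall>d\<in>set ys. bracket_letter k h t d \<Longrightarrow> bracket k h t (unbracket ys) = ys"
proof (induction ys)
  case Nil then show ?case by simp
next
  case (Cons d ys)
  then have ok: "bracket_letter k h t d" by simp
  have "bracket k h t (unbr d @ unbracket ys) = bracket k h t (unbr d) @ bracket k h t (unbracket ys)"
    using ok by (intro bracket_append) (cases d; auto)+
  moreover have "bracket k h t (unbr d) = [d]" using ok by (cases d) auto
  ultimately show ?case using Cons by simp
qed

definition ub_prefix_len :: "'a marrow list \<Rightarrow> nat \<Rightarrow> nat" where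
  "ub_prefix_len ys m = length (unbracket (take m ys))"

lemma ub_prefix_len_Cons_Suc: "ub_prefix_len (d # ys) (Suc m) = length (unbr d) + ub_prefix_len ys m"
  by (simp add: ub_prefix_len_def)

lemma ub_prefix_len_strict_mono: "m < m' \<Longrightarrow> m' \<le> length ys \<Longrightarrow> ub_prefix_len ys m < ub_prefix_len ys m'"
proof (induction ys arbitrary: m m')
  case Nil then show ?case by simp
next
  case (Cons d ys)
  then obtain m'' where m': "m' = Suc m''" by (cases m') auto
  show ?case
  proof (cases m)
    case 0
    then show ?thesis using m' by (simp add: ub_prefix_len_def)
  next
    case (Suc n)
    then show ?thesis using Cons m' by (simp add: ub_prefix_len_Cons_Suc)
  qed
qed

lemma ub_prefix_len_length: "ub_prefix_len ys (length ys) = length (unbracket ys)"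
  by (simp add: ub_prefix_len_def)

lemma ub_prefix_len_le: "m \<le> length ys \<Longrightarrow> ub_prefix_len ys m \<le> length (unbracket ys)"
  unfolding ub_prefix_len_def by (metis append_take_drop_id length_append le_add1 unbracket_append)

lemma inj_on_ub_prefix_len: "inj_on (ub_prefix_len ys) {0..length ys}"
proof (rule inj_onI)
  fix m m' assume "m \<in> {0..length ys}" "m' \<in> {0..length ys}" "ub_prefix_len ys m = ub_prefix_len ys m'"
  then show "m = m'" using ub_prefix_len_strict_mono[of m m' ys] ub_prefix_len_strict_mono[of m' m ys]
    by (cases m m' rule: linorder_cases) auto
qed

lemma ub_prefix_len_cases:
  assumes "\<forall>d\<in>set ys. \<forall>c. d \<noteq> Star c" "n \<le> length (unbracket ys)"
  shows "(\<exists>m\<le>length ys. n = ub_prefix_len ys m) \<or> (\<exists>m<length ys. \<exists>b a. ys ! m = Comp b a \<and> n = ub_prefix_len ys m + 1)"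
  using assms
proof (induction ys arbitrary: n)
  case Nil then show ?case by (simp add: ub_prefix_len_def)
next
  case (Cons d ys)
  show ?case
  proof (cases n)
    case 0 then show ?thesis by (auto simp: ub_prefix_len_def)
  next
    case (Suc n')
    show ?thesis
    proof (cases d)
      case (Old c)
      then have "n' \<le> length (unbracket ys)" using Cons.prems Suc by simp
      then have "(\<exists>m\<le>length ys. n' = ub_prefix_len ys m) \<or> (\<exists>m<length ys. \<exists>b a. ys ! m = Comp b a \<and> n' = ub_prefix_len ys m + 1)"
        using Cons by simp
      then show ?thesis
      proof
        assume "\<exists>m\<le>length ys. n' = ub_prefix_len ys m"
        then obtain m where "m \<le> length ys" "n' = ub_prefix_len ys m" by blast
        then show ?thesis using Suc Old by (intro disjI1 exI[of _ "Suc m"]) (simp add: ub_prefix_len_Cons_Suc)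
      next
        assume "\<exists>m<length ys. \<exists>b a. ys ! m = Comp b a \<and> n' = ub_prefix_len ys m + 1"
        then obtain m b a where "m < length ys" "ys ! m = Comp b a" "n' = ub_prefix_len ys m + 1" by blast
        then show ?thesis using Suc Old by (intro disjI2 exI[of _ "Suc m"]) (simp add: ub_prefix_len_Cons_Suc)
      qed
    next
      case (Comp b a)
      show ?thesis
      proof (cases n')
        case 0
        then show ?thesis using Suc Comp by (intro disjI2 exI[of _ 0]) (simp add: ub_prefix_len_def)
      next
        case (Suc n'')
        then have "n'' \<le> length (unbracket ys)" using Cons.prems \<open>n = Suc n'\<close> Comp by simp
        then have "(\<exists>m\<le>length ys. n'' = ub_prefix_len ys m) \<or> (\<exists>m<length ys. \<exists>b a. ys ! m = Comp b a \<and> n'' = ub_prefix_len ys m + 1)"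
          using Cons by simp
        then show ?thesis
        proof
          assume "\<exists>m\<le>length ys. n'' = ub_prefix_len ys m"
          then obtain m where "m \<le> length ys" "n'' = ub_prefix_len ys m" by blast
          then show ?thesis using Suc \<open>n = Suc n'\<close> Comp by (intro disjI1 exI[of _ "Suc m"]) (simp add: ub_prefix_len_Cons_Suc)
        next
          assume "\<exists>m<length ys. \<exists>b a. ys ! m = Comp b a \<and> n'' = ub_prefix_len ys m + 1"
          then obtain m b a where "m < length ys" "ys ! m = Comp b a" "n'' = ub_prefix_len ys m + 1" by blast
          then show ?thesis using Suc \<open>n = Suc n'\<close> Comp by (intro disjI2 exI[of _ "Suc m"]) (simp add: ub_prefix_len_Cons_Suc)
        qed
      qed
    next
      case (Star c) then show ?thesis using Cons.prems by auto
    qed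
  qed
qed

lemma unbracket_split_Comp:
  assumes "m < length ys" "ys ! m = Comp b a"
  shows "take (ub_prefix_len ys m + 1) (unbracket ys) = unbracket (take m ys) @ [b]"
    and "drop (ub_prefix_len ys m + 1) (unbracket ys) = a # unbracket (drop (Suc m) ys)"
proof -
  have ys: "ys = take m ys @ [Comp b a] @ drop (Suc m) ys"
    using id_take_nth_drop[OF assms(1)] assms(2) by simp
  have u: "unbracket ys = unbracket (take m ys) @ [b] @ (a # unbracket (drop (Suc m) ys))"
    by (subst ys) simp
  show "take (ub_prefix_len ys m + 1) (unbracket ys) = unbracket (take m ys) @ [b]"
    unfolding u ub_prefix_len_def by simp
  show "drop (ub_prefix_len ys m + 1) (unbracket ys) = a # unbracket (drop (Suc m) ys)"
    unfolding u ub_prefix_len_def by simp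
qed

lemma unbracket_take_drop:
  "take (ub_prefix_len ys m) (unbracket ys) = unbracket (take m ys)"
  "drop (ub_prefix_len ys m) (unbracket ys) = unbracket (drop m ys)"
proof -
  have u: "unbracket ys = unbracket (take m ys) @ unbracket (drop m ys)"
    by (simp only: unbracket_append[symmetric] append_take_drop_id)
  show "take (ub_prefix_len ys m) (unbracket ys) = unbracket (take m ys)"
    unfolding ub_prefix_len_def by (subst u) simp
  show "drop (ub_prefix_len ys m) (unbracket ys) = unbracket (drop m ys)"
    unfolding ub_prefix_len_def by (subst u) simp
qed

section \<open>The premutation\<close>

locale premutation =
  fixes V :: "'v set" and E :: "'a set" and h t :: "'a \<Rightarrow> 'v" and k :: 'v
    and S :: "'v \<times> 'a list \<Rightarrow> 'k::field"
  assumes quiver: "is_quiver V E h t"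
    and kV: "k \<in> V"
    and no_loop: "a \<in> E \<Longrightarrow> h a \<noteq> t a"
    and no_2cycle_at_k: "a \<in> E \<Longrightarrow> b \<in> E \<Longrightarrow> h a = k \<Longrightarrow> t b = k \<Longrightarrow> h b \<noteq> t a"
    and no_k_cycle: "S p \<noteq> 0 \<Longrightarrow> fst p \<noteq> k"
begin

abbreviation "E2 \<equiv> mE E h t k"

abbreviation "h2 \<equiv> mh h t"

abbreviation "t2 \<equiv> mt h t"

abbreviation "br \<equiv> bracket k h t"

lemma mE_simps[simp]:
  "Old c \<in> E2 \<longleftrightarrow> c \<in> E \<and> h c \<noteq> k \<and> t c \<noteq> k"
  "Comp b a \<in> E2 \<longleftrightarrow> a \<in> E \<and> b \<in> E \<and> h a = k \<and> t b = k"
  "Star c \<in> E2 \<longleftrightarrow> c \<in> E \<and> (h c = k \<or> t c = k)"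
  by (auto simp: mE_def)

lemma finite_E2: "finite E2"
proof -
  have fE: "finite E" using quiver by (simp add: is_quiver_def)
  have "{Comp b a | a b. a \<in> E \<and> b \<in> E \<and> h a = k \<and> t b = k} \<subseteq> (\<lambda>(a, b). Comp b a) ` (E \<times> E)"
    by auto
  then have "finite {Comp b a | a b. a \<in> E \<and> b \<in> E \<and> h a = k \<and> t b = k}"
    using fE by (meson finite_SigmaI finite_imageI finite_subset)
  then show ?thesis using fE by (simp add: mE_def)
qed

lemma quiver_premutated: "is_quiver V E2 h2 t2"
  using quiver finite_E2 by (auto simp: is_quiver_def mE_def)

end

sublocale premutation \<subseteq> A: path_algebra V E h t
  by unfold_locales (rule quiver)

sublocale premutation \<subseteq> B: path_algebra V "mE E h t k" "mh h t" "mt h t"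
  by unfold_locales (rule quiver_premutated)

context premutation
begin

lemma E2_cases:
  assumes "d \<in> E2"
  obtains (Old) c where "d = Old c" "c \<in> E" "h c \<noteq> k" "t c \<noteq> k"
  | (Comp) b a where "d = Comp b a" "a \<in> E" "b \<in> E" "h a = k" "t b = k"
  | (Star) c where "d = Star c" "c \<in> E" "h c = k \<or> t c = k"
  using assms by (cases d) auto

lemma E2_t2_k: "d \<in> E2 \<Longrightarrow> t2 d = k \<Longrightarrow> \<exists>a. d = Star a \<and> a \<in> E \<and> h a = k"
  by (erule E2_cases) (auto dest: no_loop)

lemma E2_h2_k: "d \<in> E2 \<Longrightarrow> h2 d = k \<Longrightarrow> \<exists>b. d = Star b \<and> b \<in> E \<and> t b = k"
  by (erule E2_cases) (auto dest: no_loop)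

definition starfree :: "'a marrow list \<Rightarrow> bool" where
  "starfree ys = (\<forall>c. Star c \<notin> set ys)"

lemma starfree_simps[simp]: "starfree []" "starfree (d # ys) \<longleftrightarrow> (\<forall>c. d \<noteq> Star c) \<and> starfree ys"
  "starfree (xs @ ys) \<longleftrightarrow> starfree xs \<and> starfree ys"
  by (auto simp: starfree_def)

lemma starfree_rotate[simp]: "starfree (rotate r ys) = starfree ys"
  by (simp add: starfree_def)

lemma bracket_letter_E2: "d \<in> E2 \<Longrightarrow> (\<forall>c. d \<noteq> Star c) \<Longrightarrow> bracket_letter k h t d"
  by (erule E2_cases) (auto dest: no_loop)

lemma bracket_letters: "set ys \<subseteq> E2 \<Longrightarrow> starfree ys \<Longrightarrow> \<forall>d\<in>set ys. bracket_letter k h t d"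
  by (auto simp: starfree_def intro!: bracket_letter_E2)

lemma ptgt_unbracket: "starfree ys \<Longrightarrow> ptgt h2 (j, ys) = ptgt h (j, unbracket ys)"
  by (cases ys) (auto simp: ptgt_def, case_tac a, auto)

lemma t2_last_unbracket: "ys \<noteq> [] \<Longrightarrow> starfree ys \<Longrightarrow> t2 (last ys) = t (last (unbracket ys))"
proof (induction ys)
  case Nil then show ?case by simp
next
  case (Cons d ys)
  then show ?case by (cases "ys = []"; cases d) auto
qed

lemma valid_unbracket: "starfree ys \<Longrightarrow> B.valid (j, ys) \<Longrightarrow> A.valid (j, unbracket ys)"
proof (induction ys)
  case Nil then show ?case by (simp add: valid_path_Nil)
next
  case (Cons d ys)
  then have v: "d \<in> E2" "B.valid (j, ys)" "t2 d = ptgt h2 (j, ys)" by (simp_all add: B.valid_Cons)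
  have ih: "A.valid (j, unbracket ys)" using Cons v by simp
  have pt: "ptgt h2 (j, ys) = ptgt h (j, unbracket ys)" using Cons.prems by (simp add: ptgt_unbracket)
  from v(1) show ?case
  proof (cases rule: E2_cases)
    case (Old c) then show ?thesis using ih v pt by (simp add: A.valid_Cons)
  next
    case (Comp b a) then show ?thesis using ih v pt by (simp add: A.valid_Cons ptgt_Cons)
  next
    case (Star c) then show ?thesis using Cons.prems by simp
  qed
qed

lemma valid_bracket: "A.valid (j, xs) \<Longrightarrow> j \<noteq> k \<Longrightarrow> ptgt h (j, xs) \<noteq> k \<Longrightarrow>
   (\<forall>d\<in>set (br xs). bracket_letter k h t d \<and> d \<in> E2) \<and> B.valid (j, br xs) \<and> ptgt h2 (j, br xs) = ptgt h (j, xs)"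
proof (induction xs rule: length_induct)
  case (1 xs)
  show ?case
  proof (cases xs)
    case Nil then show ?thesis using 1 by (simp add: valid_path_Nil ptgt_def)
  next
    case (Cons a r)
    show ?thesis
    proof (cases r)
      case Nil
      then have "a \<in> E" "j = t a" "h a \<noteq> k" using 1 Cons by (auto simp: A.valid_Cons valid_path_Nil ptgt_def)
      then show ?thesis using Cons Nil 1 A.tV by (auto simp: B.valid_Cons valid_path_Nil ptgt_def)
    next
      case (Cons b r')
      note xs = \<open>xs = a # r\<close> Cons
      have va: "a \<in> E" "b \<in> E" "A.valid (j, r')" "t a = h b" "t b = ptgt h (j, r')"
        using "1.prems"(1) xs by (auto simp: A.valid_Cons ptgt_def)
      have ha: "h a \<noteq> k" using "1.prems"(3) xs by (simp add: ptgt_def)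
      show ?thesis
      proof (cases "t a = k \<and> h b = k")
        case True
        have tb: "t b \<noteq> k" using True no_loop va by metis
        have ptr: "ptgt h (j, r') \<noteq> k" using tb va by simp
        have ih: "(\<forall>d\<in>set (br r'). bracket_letter k h t d \<and> d \<in> E2) \<and> B.valid (j, br r') \<and> ptgt h2 (j, br r') = ptgt h (j, r')"
          using "1.IH"[rule_format, of r'] xs va(3) "1.prems"(2) ptr by simp
        have "br xs = Comp a b # br r'" using xs True by simp
        then show ?thesis using ih True tb ha va xs by (auto simp: B.valid_Cons ptgt_def)
      next
        case False
        have hb: "h b \<noteq> k" using False va by auto
        have vr: "A.valid (j, r)" using "1.prems"(1) xs by (simp add: A.valid_Cons)
        have ptr: "ptgt h (j, r) \<noteq> k" using hb xs by (simp add: ptgt_def)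
        have ih: "(\<forall>d\<in>set (br r). bracket_letter k h t d \<and> d \<in> E2) \<and> B.valid (j, br r) \<and> ptgt h2 (j, br r) = ptgt h (j, r)"
          using "1.IH"[rule_format, of r] xs vr "1.prems"(2) ptr by simp
        have "br xs = Old a # br r" using xs False by simp
        then show ?thesis using ih False ha hb va xs by (auto simp: B.valid_Cons ptgt_def)
      qed
    qed
  qed
qed

lemma unbracket_split_inside_Comp:
  assumes E: "set ys \<subseteq> E2" and sf: "starfree ys"
    and n: "n \<le> length (unbracket ys)" "n \<notin> ub_prefix_len ys ` {0..length ys}"
  shows "\<exists>b a xs zs. take n (unbracket ys) = xs @ [b] \<and> drop n (unbracket ys) = a # zs \<and> t b = k \<and> h a = k"
proof -
  have "\<forall>d\<in>set ys. \<forall>c. d \<noteq> Star c" using sf by (auto simp: starfree_def)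
  from ub_prefix_len_cases[OF this n(1)] n(2) obtain m b a where
    m: "m < length ys" "ys ! m = Comp b a" "n = ub_prefix_len ys m + 1" by auto
  have "Comp b a \<in> E2" using E m nth_mem by (metis subsetD)
  then show ?thesis using unbracket_split_Comp[OF m(1,2)] m(3) by auto
qed

subsection \<open>The bracketing map\<close>

abbreviation "C1 \<equiv> corner V E h t k"

abbreviation "C2 \<equiv> corner V E2 h2 t2 k"

definition phi :: "('v \<times> 'a list \<Rightarrow> 'k) \<Rightarrow> 'v \<times> 'a marrow list \<Rightarrow> 'k" where
  "phi x = (\<lambda>(j, ys). if starfree ys \<and> br (unbracket ys) = ys then x (j, unbracket ys) else 0)"

lemma phi_nonzeroD: "phi x (j, ys) \<noteq> 0 \<Longrightarrow> starfree ys \<and> br (unbracket ys) = ys \<and> x (j, unbracket ys) \<noteq> 0"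
  by (auto simp: phi_def split: if_splits)

lemma phi_nonzero_valid:
  assumes "phi x (j, ys) \<noteq> 0" "A.valid (j, unbracket ys)" "j \<noteq> k" "ptgt h (j, unbracket ys) \<noteq> k"
  shows "starfree ys \<and> B.valid (j, ys) \<and> ptgt h2 (j, ys) = ptgt h (j, unbracket ys)"
  using phi_nonzeroD[OF assms(1)] valid_bracket[OF assms(2-4)] by metis

lemma phi_starfree: "starfree ys \<Longrightarrow> set ys \<subseteq> E2 \<Longrightarrow> phi x (j, ys) = x (j, unbracket ys)"
proof -
  assume "starfree ys" "set ys \<subseteq> E2"
  then have "br (unbracket ys) = ys" by (intro bracket_unbracket bracket_letters)
  then show ?thesis using \<open>starfree ys\<close> by (simp add: phi_def)
qed

lemma phi_corner: "x \<in> C1 \<Longrightarrow> phi x \<in> C2"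
proof (rule B.cornerI)
  fix p assume x: "x \<in> C1" and ne: "phi x p \<noteq> 0"
  obtain j ys where p: "p = (j, ys)" by (cases p)
  from phi_nonzeroD[OF ne[unfolded p]] have sf: "starfree ys" "br (unbracket ys) = ys" "x (j, unbracket ys) \<noteq> 0" by auto
  have "A.valid (j, unbracket ys) \<and> fst (j, unbracket ys) \<noteq> k \<and> ptgt h (j, unbracket ys) \<noteq> k"
    by (rule A.cornerD[OF x sf(3)])
  then have v: "A.valid (j, unbracket ys)" "j \<noteq> k" "ptgt h (j, unbracket ys) \<noteq> k" by auto
  from valid_bracket[OF v] sf v show "B.valid p \<and> fst p \<noteq> k \<and> ptgt h2 p \<noteq> k" unfolding p by auto
qed

lemma phi_padd: "phi (padd x y) = padd (phi x) (phi y)"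
  by (auto simp: phi_def padd_def fun_eq_iff)

lemma phi_psub: "phi (psub x y) = psub (phi x) (phi y)"
  by (auto simp: phi_def psub_def fun_eq_iff)

lemma phi_psmul: "phi (psmul c x) = psmul c (phi x)"
  by (auto simp: phi_def psmul_def fun_eq_iff)

lemma phi_pzero: "phi pzero = pzero"
  by (auto simp: phi_def pzero_def fun_eq_iff)

lemma phi_sum: "phi (\<lambda>p. \<Sum>i\<in>I. F i p) = (\<lambda>p. \<Sum>i\<in>I. phi (F i) p)"
  by (auto simp: phi_def fun_eq_iff)

lemma phi_agree_below: "agree_below (2 * n) x x' \<Longrightarrow> agree_below n (phi x) (phi x')"
  unfolding agree_below_def
proof (intro allI impI)
  fix p :: "'v \<times> 'a marrow list"
  assume H: "\<forall>p. length (snd p) < 2 * n \<longrightarrow> x p = x' p" and l: "length (snd p) < n"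
  obtain j ys where p: "p = (j, ys)" by (cases p)
  have "length (unbracket ys) < 2 * n" using length_unbracket[of ys] l p by simp
  then show "phi x p = phi x' p" using H p by (simp add: phi_def)
qed

lemma phi_pmono: "A.valid (j, xs) \<Longrightarrow> j \<noteq> k \<Longrightarrow> ptgt h (j, xs) \<noteq> k \<Longrightarrow> phi (pmono (j, xs)) = pmono (j, br xs)"
proof (rule ext, clarify)
  fix j' ys
  assume v: "A.valid (j, xs)" "j \<noteq> k" "ptgt h (j, xs) \<noteq> k"
  from valid_bracket[OF v] have ok: "\<forall>d\<in>set (br xs). bracket_letter k h t d" by auto
  then have sf: "starfree (br xs)" by (auto simp: starfree_def)
  show "phi (pmono (j, xs)) (j', ys) = pmono (j, br xs) (j', ys)"
  proof (cases "j' = j \<and> ys = br xs")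
    case True then show ?thesis using sf unbracket_bracket[of k h t xs] by (simp add: phi_def pmono_def)
  next
    case False
    then show ?thesis by (auto simp: phi_def pmono_def)
  qed
qed

lemma phi_pmul_starfree:
  assumes x: "x \<in> C1" and sf: "starfree ys" and E: "set ys \<subseteq> E2"
  shows "phi (pmul h x y) (j, ys) = pmul h2 (phi x) (phi y) (j, ys)"
proof -
  define us where "us = unbracket ys"
  define T where "T n = x (ptgt h (j, drop n us), take n us) * y (j, drop n us)" for n
  have L: "phi (pmul h x y) (j, ys) = (\<Sum>n\<in>{0..length us}. T n)"
    using sf E phi_starfree[of ys "pmul h x y" j] by (simp add: pmul_def T_def us_def)
  have R: "pmul h2 (phi x) (phi y) (j, ys) = (\<Sum>m\<in>{0..length ys}. T (ub_prefix_len ys m))"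
    unfolding pmul_def
  proof (simp, intro sum.cong refl)
    fix m assume m: "m \<in> {0..length ys}"
    have sf1: "starfree (take m ys)" "set (take m ys) \<subseteq> E2" "starfree (drop m ys)" "set (drop m ys) \<subseteq> E2"
      using sf E set_take_subset[of m ys] set_drop_subset[of m ys]
      by (auto simp: starfree_def)
    have "phi x (ptgt h2 (j, drop m ys), take m ys) = x (ptgt h2 (j, drop m ys), unbracket (take m ys))"
      using sf1 by (simp add: phi_starfree)
    moreover have "phi y (j, drop m ys) = y (j, unbracket (drop m ys))"
      using sf1 by (simp add: phi_starfree)
    moreover have "ptgt h2 (j, drop m ys) = ptgt h (j, unbracket (drop m ys))"
      using sf1 by (simp add: ptgt_unbracket)
    ultimately show "phi x (ptgt h2 (j, drop m ys), take m ys) * phi y (j, drop m ys) = T (ub_prefix_len ys m)"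
      unfolding T_def us_def by (simp add: unbracket_take_drop)
  qed
  have "(\<Sum>m\<in>{0..length ys}. T (ub_prefix_len ys m)) = (\<Sum>n\<in>ub_prefix_len ys ` {0..length ys}. T n)"
    by (simp add: sum.reindex inj_on_ub_prefix_len)
  also have "\<dots> = (\<Sum>n\<in>{0..length us}. T n)"
  proof (rule sum.mono_neutral_left)
    show "ub_prefix_len ys ` {0..length ys} \<subseteq> {0..length us}" using ub_prefix_len_le us_def by auto
    show "\<forall>n\<in>{0..length us} - ub_prefix_len ys ` {0..length ys}. T n = 0"
    proof
      fix n assume n: "n \<in> {0..length us} - ub_prefix_len ys ` {0..length ys}"
      then obtain a zs where "drop n us = a # zs" "h a = k"
        using unbracket_split_inside_Comp[OF E sf, of n] us_def by auto
      then have "ptgt h (j, drop n us) = k" by (simp add: ptgt_def)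
      then have "x (ptgt h (j, drop n us), take n us) = 0"
        using A.cornerD[OF x, of "(ptgt h (j, drop n us), take n us)"] by auto
      then show "T n = 0" by (simp add: T_def)
    qed
  qed simp
  finally show ?thesis using L R by simp
qed

lemma phi_mul:
  assumes x: "x \<in> C1" and y: "y \<in> C1"
  shows "phi (pmul h x y) = pmul h2 (phi x) (phi y)"
proof (rule ext, clarify)
  fix j ys
  show "phi (pmul h x y) (j, ys) = pmul h2 (phi x) (phi y) (j, ys)"
  proof (cases "starfree ys \<and> set ys \<subseteq> E2")
    case True
    then show ?thesis using phi_pmul_starfree[OF x] by blast
  next
    case False
    have l0: "phi (pmul h x y) (j, ys) = 0"
    proof (rule ccontr)
      assume ne: "phi (pmul h x y) (j, ys) \<noteq> 0"
      have "phi (pmul h x y) \<in> C2" using phi_corner A.corner_pmul x y by blast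
      then have "B.valid (j, ys)" using B.cornerD ne by blast
      then have "set ys \<subseteq> E2" by (rule B.valid_set)
      moreover have "starfree ys" using phi_nonzeroD[OF ne] by blast
      ultimately show False using False by blast
    qed
    have r0: "pmul h2 (phi x) (phi y) (j, ys) = 0"
    proof (rule ccontr)
      assume ne: "pmul h2 (phi x) (phi y) (j, ys) \<noteq> 0"
      have "pmul h2 (phi x) (phi y) \<in> C2" using phi_corner B.corner_pmul x y by blast
      then have "B.valid (j, ys)" using B.cornerD ne by blast
      then have s: "set ys \<subseteq> E2" by (rule B.valid_set)
      from ne obtain n where "phi x (ptgt h2 (j, drop n ys), take n ys) \<noteq> 0" "phi y (j, drop n ys) \<noteq> 0"
        by (rule pmul_nonzeroE)
      then have "starfree (take n ys)" "starfree (drop n ys)" using phi_nonzeroD by blast+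
      then have "starfree ys" using starfree_simps(3)[of "take n ys" "drop n ys"] by simp
      then show False using False s by blast
    qed
    show ?thesis using l0 r0 by simp
  qed
qed

subsection \<open>Cyclic derivatives of the premutated potential\<close>

abbreviation "S2 \<equiv> mS E k h t S"

definition cubic :: "'v \<Rightarrow> 'a marrow list \<Rightarrow> 'k" where
  "cubic i ys = (if \<exists>a b. a \<in> E \<and> b \<in> E \<and> h a = k \<and> t b = k \<and> i = h b
                 \<and> ys = [Comp b a, Star a, Star b] then 1 else 0)"

lemma S2_split: "S2 (i, ys) = bracketS k h t S (i, ys) + cubic i ys"
  by (simp add: mS_def cubic_def)

lemma bracketS_eq: "bracketS k h t S (i, ys) = (if ys \<noteq> [] \<and> starfree ys \<and> br (unbracket ys) = ys then S (i, unbracket ys) else 0)"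
  by (simp add: bracketS_def starfree_def)

lemma cubic_nonzeroD: "cubic i ys \<noteq> 0 \<Longrightarrow> \<exists>a b. a \<in> E \<and> b \<in> E \<and> h a = k \<and> t b = k \<and> i = h b \<and> ys = [Comp b a, Star a, Star b]"
  by (auto simp: cubic_def split: if_splits)

lemma cubic_Old: "Old c \<in> set ys \<Longrightarrow> cubic i ys = 0"
  by (auto simp: cubic_def)

lemma cubic_starfree: "starfree ys \<Longrightarrow> cubic i ys = 0"
  by (auto simp: cubic_def starfree_def)

lemma S_last_k: "t (last zs) = k \<Longrightarrow> S (t (last zs), zs) = 0"
  using no_k_cycle by force

lemma bracketS_rotations:
  assumes ne: "ys \<noteq> []" and E: "set ys \<subseteq> E2" and sf: "starfree ys"
  shows "(\<Sum>r\<in>{0..<length ys}. bracketS k h t S (t2 (last (rotate r ys)), rotate r ys)) =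
         (\<Sum>r\<in>{0..<length (unbracket ys)}. S (t (last (rotate r (unbracket ys))), rotate r (unbracket ys)))"
proof -
  define us where "us = unbracket ys"
  define F where "F zs = S (t (last zs), zs)" for zs
  have lt: "ub_prefix_len ys r < length us" if "r < length ys" for r
    using ub_prefix_len_strict_mono[of r "length ys" ys] that ub_prefix_len_length[of ys] us_def by simp
  have rot: "unbracket (rotate r ys) = rotate (ub_prefix_len ys r) us" if r: "r < length ys" for r
  proof -
    have "unbracket (rotate r ys) = unbracket (drop r ys) @ unbracket (take r ys)"
      using r by (simp add: rotate_drop_take)
    also have "\<dots> = drop (ub_prefix_len ys r) us @ take (ub_prefix_len ys r) us"
      by (simp add: us_def unbracket_take_drop)
    also have "\<dots> = rotate (ub_prefix_len ys r) us"
      using lt[OF r] by (simp add: rotate_drop_take)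
    finally show ?thesis .
  qed
  have trm: "bracketS k h t S (t2 (last (rotate r ys)), rotate r ys) = F (rotate (ub_prefix_len ys r) us)"
    if r: "r < length ys" for r
  proof -
    have rne: "rotate r ys \<noteq> []" using ne by simp
    have rsf: "starfree (rotate r ys)" using sf by simp
    have rE: "set (rotate r ys) \<subseteq> E2" using E by simp
    have "br (unbracket (rotate r ys)) = rotate r ys" by (intro bracket_unbracket bracket_letters rE rsf)
    then have "bracketS k h t S (t2 (last (rotate r ys)), rotate r ys) = S (t2 (last (rotate r ys)), unbracket (rotate r ys))"
      using rne rsf by (simp add: bracketS_eq)
    also have "\<dots> = F (unbracket (rotate r ys))" using t2_last_unbracket[OF rne rsf] by (simp add: F_def)
    finally show ?thesis using rot[OF r] by simp
  qed
  have "(\<Sum>r\<in>{0..<length ys}. bracketS k h t S (t2 (last (rotate r ys)), rotate r ys)) =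
        (\<Sum>r\<in>{0..<length ys}. F (rotate (ub_prefix_len ys r) us))"
    by (rule sum.cong) (auto simp: trm)
  also have "\<dots> = (\<Sum>n\<in>ub_prefix_len ys ` {0..<length ys}. F (rotate n us))"
  proof -
    have "inj_on (ub_prefix_len ys) {0..<length ys}" using inj_on_ub_prefix_len by (rule inj_on_subset) auto
    then show ?thesis by (simp add: sum.reindex)
  qed
  \<comment> \<open>a rotation of the unbracketed cycle that cuts some [ba] starts at k\<close>
  also have "\<dots> = (\<Sum>n\<in>{0..<length us}. F (rotate n us))"
  proof (rule sum.mono_neutral_left)
    show "ub_prefix_len ys ` {0..<length ys} \<subseteq> {0..<length us}" using lt by auto
    show "\<forall>n\<in>{0..<length us} - ub_prefix_len ys ` {0..<length ys}. F (rotate n us) = 0"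
    proof
      fix n assume n: "n \<in> {0..<length us} - ub_prefix_len ys ` {0..<length ys}"
      then have "n \<notin> ub_prefix_len ys ` {0..length ys}"
        using ub_prefix_len_length[of ys] by (auto simp: us_def le_less)
      then obtain b xs where "take n us = xs @ [b]" "t b = k"
        using unbracket_split_inside_Comp[OF E sf, of n] n us_def by auto
      moreover have "rotate n us = drop n us @ take n us" using n by (simp add: rotate_drop_take)
      ultimately show "F (rotate n us) = 0" using S_last_k by (simp add: F_def)
    qed
  qed simp
  finally show ?thesis by (simp add: F_def us_def)
qed

lemma cderB_eq: "cder V E2 h2 t2 d S2 (j, ys) = (if B.valid (j, ys) \<and> j = h2 d \<and> ptgt h2 (j, ys) = t2 d
   then (\<Sum>r\<in>{0..<length (d # ys)}. S2 (t2 (last (rotate r (d # ys))), rotate r (d # ys))) else 0)"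
  unfolding cder_def by (simp only: case_prod_conv length_Cons)

lemma cderA_eq: "cder V E h t c S (j, w) = (if A.valid (j, w) \<and> j = h c \<and> ptgt h (j, w) = t c
   then (\<Sum>r\<in>{0..<length (c # w)}. S (t (last (rotate r (c # w))), rotate r (c # w))) else 0)"
  unfolding cder_def by (simp only: case_prod_conv length_Cons)

lemma bracketS_rotate_not_starfree: "\<not> starfree ys \<Longrightarrow> bracketS k h t S (i, rotate r ys) = 0"
  by (simp add: bracketS_eq)

lemma cder_Old:
  assumes c: "c \<in> E" "h c \<noteq> k" "t c \<noteq> k"
  shows "cder V E2 h2 t2 (Old c) S2 = phi (cder V E h t c S)"
proof (rule ext, clarify)
  fix j ys
  define cond where "cond = (B.valid (j, ys) \<and> j = h c \<and> ptgt h2 (j, ys) = t c)"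
  let ?l = "Old c # ys"
  have L: "cder V E2 h2 t2 (Old c) S2 (j, ys) =
      (if cond then (\<Sum>r\<in>{0..<length ?l}. bracketS k h t S (t2 (last (rotate r ?l)), rotate r ?l)) else 0)"
  proof -
    have "S2 (t2 (last (rotate r ?l)), rotate r ?l) = bracketS k h t S (t2 (last (rotate r ?l)), rotate r ?l)" for r
      by (simp add: S2_split cubic_Old[of c])
    then show ?thesis unfolding cderB_eq cond_def by (simp only: mh.simps mt.simps)
  qed
  show "cder V E2 h2 t2 (Old c) S2 (j, ys) = phi (cder V E h t c S) (j, ys)"
  proof (cases "cond \<and> starfree ys")
    case True
    then have v: "B.valid (j, ys)" "j = h c" "ptgt h2 (j, ys) = t c" "starfree ys" by (auto simp: cond_def)
    have E: "set ?l \<subseteq> E2" using B.valid_set[OF v(1)] c by simp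
    have sf: "starfree ?l" using v by simp
    have "cder V E2 h2 t2 (Old c) S2 (j, ys) =
        (\<Sum>r\<in>{0..<length (c # unbracket ys)}. S (t (last (rotate r (c # unbracket ys))), rotate r (c # unbracket ys)))"
      using L True bracketS_rotations[OF _ E sf] by simp
    moreover have "phi (cder V E h t c S) (j, ys) = cder V E h t c S (j, unbracket ys)"
      using v(4) B.valid_set[OF v(1)] by (simp add: phi_starfree)
    moreover have "A.valid (j, unbracket ys)" "ptgt h (j, unbracket ys) = t c"
      using valid_unbracket[OF v(4,1)] ptgt_unbracket[OF v(4), of j] v(3) by auto
    ultimately show ?thesis using v(2) by (simp add: cderA_eq)
  next
    case False
    have l0: "cder V E2 h2 t2 (Old c) S2 (j, ys) = 0"
    proof (cases cond)
      case True
      then have "\<not> starfree ?l" using False by simp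
      then show ?thesis using L True by (simp add: bracketS_rotate_not_starfree)
    next
      case False then show ?thesis using L by simp
    qed
    have r0: "phi (cder V E h t c S) (j, ys) = 0"
    proof (rule ccontr)
      assume ne: "phi (cder V E h t c S) (j, ys) \<noteq> 0"
      then have v: "A.valid (j, unbracket ys)" "j = h c" "ptgt h (j, unbracket ys) = t c"
        using phi_nonzeroD[OF ne] by (auto simp: cderA_eq split: if_splits)
      then have "cond \<and> starfree ys"
        using phi_nonzero_valid[OF ne v(1)] c by (auto simp: cond_def)
      then show False using False by blast
    qed
    show ?thesis using l0 r0 by simp
  qed
qed

lemma cubic_rotate_cases:
  assumes nz: "cubic i (rotate r (d # ys)) \<noteq> 0" and r: "r < Suc (length ys)"
  obtains a' b' y1 y2 where "ys = [y1, y2]" "a' \<in> E" "b' \<in> E" "h a' = k" "t b' = k" "i = h b'"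
    "(r = 0 \<and> d = Comp b' a' \<and> y1 = Star a' \<and> y2 = Star b') \<or>
     (r = 1 \<and> y1 = Comp b' a' \<and> y2 = Star a' \<and> d = Star b') \<or>
     (r = 2 \<and> y2 = Comp b' a' \<and> d = Star a' \<and> y1 = Star b')"
proof -
  from cubic_nonzeroD[OF nz] obtain a' b' where ab: "a' \<in> E" "b' \<in> E" "h a' = k" "t b' = k" "i = h b'"
    and rl: "rotate r (d # ys) = [Comp b' a', Star a', Star b']" by blast
  have "length (d # ys) = 3" using arg_cong[OF rl, of length] by simp
  then obtain y1 y2 where ys: "ys = [y1, y2]"
    by (cases ys; cases "tl ys"; cases "tl (tl ys)") auto
  have "r = 0 \<or> r = 1 \<or> r = 2" using r ys by auto
  then have "(r = 0 \<and> d = Comp b' a' \<and> y1 = Star a' \<and> y2 = Star b') \<or>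
     (r = 1 \<and> y1 = Comp b' a' \<and> y2 = Star a' \<and> d = Star b') \<or>
     (r = 2 \<and> y2 = Comp b' a' \<and> d = Star a' \<and> y1 = Star b')"
    using rl ys by (auto simp: numeral_2_eq_2)
  then show ?thesis using that ys ab by blast
qed

lemma cubic_rotate_Comp:
  assumes "cubic i (rotate r (Comp b a # ys)) \<noteq> 0" "r < Suc (length ys)"
  shows "ys = [Star a, Star b]"
  using assms by (elim cubic_rotate_cases) auto

lemma cubic_rotate_Star_in:
  assumes "cubic i (rotate r (Star a # w)) \<noteq> 0" "r < Suc (length w)" "a \<in> E" "h a = k"
  shows "\<exists>b. b \<in> E \<and> t b = k \<and> w = [Star b, Comp b a]"
  using assms(1,2) no_loop[OF assms(3)] assms(4) by (elim cubic_rotate_cases) auto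

lemma cubic_rotate_Star_out:
  assumes "cubic i (rotate r (Star b # w)) \<noteq> 0" "r < Suc (length w)" "b \<in> E" "t b = k"
  shows "\<exists>a. a \<in> E \<and> h a = k \<and> w = [Comp b a, Star a]"
  using assms(1,2) no_loop[OF assms(3)] assms(4) by (elim cubic_rotate_cases) auto

definition cder2 :: "'a \<Rightarrow> 'a \<Rightarrow> 'v \<times> 'a list \<Rightarrow> 'k" where
  "cder2 a b = (\<lambda>(j, w). if A.valid (j, w) \<and> j = h b \<and> ptgt h (j, w) = t a
      then (\<Sum>r\<in>{0..<length (b # a # w)}. S (t (last (rotate r (b # a # w))), rotate r (b # a # w))) else 0)"

lemma cder2_eq: "cder2 a b (j, w) = (if A.valid (j, w) \<and> j = h b \<and> ptgt h (j, w) = t a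
      then (\<Sum>r\<in>{0..<length (b # a # w)}. S (t (last (rotate r (b # a # w))), rotate r (b # a # w))) else 0)"
  unfolding cder2_def by (simp only: case_prod_conv)

lemma cder2_palg: "cder2 a b \<in> palg V E h t"
  by (rule A.palgI) (auto simp: cder2_eq split: if_splits)

lemma cder2_corner:
  assumes "a \<in> E" "b \<in> E" "h a = k" "t b = k"
  shows "cder2 a b \<in> C1"
proof (rule A.cornerI)
  fix p assume ne: "cder2 a b p \<noteq> 0"
  obtain j w where p: "p = (j, w)" by (cases p)
  from ne have v: "A.valid (j, w)" "j = h b" "ptgt h (j, w) = t a"
    unfolding p by (auto simp: cder2_eq split: if_splits)
  have "h b \<noteq> k" "t a \<noteq> k" using assms no_loop by metis+
  then show "A.valid p \<and> fst p \<noteq> k \<and> ptgt h p \<noteq> k" using v p by simp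
qed

lemma cder2_nil: "a \<in> E \<Longrightarrow> b \<in> E \<Longrightarrow> h a = k \<Longrightarrow> t b = k \<Longrightarrow> cder2 a b (j, []) = 0"
  using no_2cycle_at_k by (auto simp: cder2_eq ptgt_def)

lemma cder_Comp:
  assumes ab: "a \<in> E" "b \<in> E" "h a = k" "t b = k"
  shows "cder V E2 h2 t2 (Comp b a) S2 = padd (phi (cder2 a b)) (pmono (h b, [Star a, Star b]))"
proof (rule ext, clarify)
  fix j ys
  define cond where "cond = (B.valid (j, ys) \<and> j = h b \<and> ptgt h2 (j, ys) = t a)"
  let ?l = "Comp b a # ys"
  have L: "cder V E2 h2 t2 (Comp b a) S2 (j, ys) =
      (if cond then (\<Sum>r\<in>{0..<length ?l}. bracketS k h t S (t2 (last (rotate r ?l)), rotate r ?l)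
         + cubic (t2 (last (rotate r ?l))) (rotate r ?l)) else 0)"
    unfolding cderB_eq cond_def S2_split by (simp only: mh.simps mt.simps)
  have ta: "t a \<noteq> k" and hb: "h b \<noteq> k" using ab no_loop by metis+
  show "cder V E2 h2 t2 (Comp b a) S2 (j, ys) = padd (phi (cder2 a b)) (pmono (h b, [Star a, Star b])) (j, ys)"
  proof (cases "cond \<and> starfree ys")
    case True
    then have v: "B.valid (j, ys)" "j = h b" "ptgt h2 (j, ys) = t a" "starfree ys" by (auto simp: cond_def)
    have E: "set ?l \<subseteq> E2" using B.valid_set[OF v(1)] ab by simp
    have sf: "starfree ?l" using v by simp
    have "cder V E2 h2 t2 (Comp b a) S2 (j, ys) =
        (\<Sum>r\<in>{0..<length ?l}. bracketS k h t S (t2 (last (rotate r ?l)), rotate r ?l))"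
      using L True cubic_starfree[of "rotate _ ?l"] sf by simp
    also have "\<dots> = (\<Sum>r\<in>{0..<length (b # a # unbracket ys)}. S (t (last (rotate r (b # a # unbracket ys))), rotate r (b # a # unbracket ys)))"
      using bracketS_rotations[OF _ E sf] by simp
    finally have l: "cder V E2 h2 t2 (Comp b a) S2 (j, ys) = \<dots>" .
    have "phi (cder2 a b) (j, ys) = cder2 a b (j, unbracket ys)"
      using v(4) B.valid_set[OF v(1)] by (simp add: phi_starfree)
    moreover have "A.valid (j, unbracket ys)" "ptgt h (j, unbracket ys) = t a"
      using valid_unbracket[OF v(4,1)] ptgt_unbracket[OF v(4), of j] v(3) by auto
    moreover have "pmono (h b, [Star a, Star b]) (j, ys) = 0" using v(4) by (auto simp: pmono_def)
    ultimately show ?thesis using v(2) l by (simp add: cder2_eq padd_def)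
  next
    case not_sf: False
    show ?thesis
    proof (cases "j = h b \<and> ys = [Star a, Star b]")
      case True
      have cond unfolding cond_def using True ab kV A.hV A.tV
        by (simp add: B.valid_Cons valid_path_Nil ptgt_def)
      then have "cder V E2 h2 t2 (Comp b a) S2 (j, ys) = 1"
        using L True ab by (simp add: sum_length3 bracketS_eq cubic_def numeral_2_eq_2)
      moreover have "padd (phi (cder2 a b)) (pmono (h b, [Star a, Star b])) (j, ys) = 1"
        using True by (simp add: padd_def phi_def pmono_def)
      ultimately show ?thesis by simp
    next
      case not_cubic: False
      have "phi (cder2 a b) (j, ys) = 0"
      proof (rule ccontr)
        assume ne: "phi (cder2 a b) (j, ys) \<noteq> 0"
        then have v: "A.valid (j, unbracket ys)" "j = h b" "ptgt h (j, unbracket ys) = t a"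
          using phi_nonzeroD[OF ne] by (auto simp: cder2_eq split: if_splits)
        then have "cond \<and> starfree ys"
          using phi_nonzero_valid[OF ne v(1)] ta hb by (auto simp: cond_def)
        then show False using not_sf by blast
      qed
      moreover have "cder V E2 h2 t2 (Comp b a) S2 (j, ys) = 0"
      proof (cases cond)
        case True
        have "cubic (t2 (last (rotate r ?l))) (rotate r ?l) = 0" if "r \<in> {0..<length ?l}" for r
          using cubic_rotate_Comp[of _ r b a ys] that not_cubic True by (auto simp: cond_def)
        moreover have "\<not> starfree ?l" using not_sf True by simp
        ultimately show ?thesis using L True by (simp add: bracketS_rotate_not_starfree)
      qed (use L in simp)
      ultimately show ?thesis using not_cubic by (auto simp: padd_def pmono_def)
    qed
  qed
qed

lemma cder_Star_in:
  assumes a: "a \<in> E" "h a = k"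
  shows "cder V E2 h2 t2 (Star a) S2 = (\<lambda>p. \<Sum>b\<in>{b\<in>E. t b = k}. pmono (t a, [Star b, Comp b a]) p)"
proof (rule ext, clarify)
  fix j w
  define cond where "cond = (B.valid (j, w) \<and> j = t a \<and> ptgt h2 (j, w) = h a)"
  let ?l = "Star a # w"
  have nsf: "\<not> starfree ?l" by simp
  have L: "cder V E2 h2 t2 (Star a) S2 (j, w) =
      (if cond then (\<Sum>r\<in>{0..<length ?l}. cubic (t2 (last (rotate r ?l))) (rotate r ?l)) else 0)"
    unfolding cderB_eq cond_def S2_split by (simp only: mh.simps mt.simps bracketS_rotate_not_starfree[OF nsf] add_0)
  have fin: "finite {b\<in>E. t b = k}" using A.fin_E by simp
  show "cder V E2 h2 t2 (Star a) S2 (j, w) = (\<Sum>b\<in>{b\<in>E. t b = k}. pmono (t a, [Star b, Comp b a]) (j, w))"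
  proof (cases "\<exists>b0. b0 \<in> E \<and> t b0 = k \<and> w = [Star b0, Comp b0 a] \<and> j = t a")
    case True
    then obtain b0 where b0: "b0 \<in> E" "t b0 = k" "w = [Star b0, Comp b0 a]" "j = t a" by blast
    have cond unfolding cond_def using b0 a A.hV A.tV
      by (simp add: B.valid_Cons valid_path_Nil ptgt_def)
    then have "cder V E2 h2 t2 (Star a) S2 (j, w) = 1"
      using L b0 a by (simp add: sum_length3 cubic_def numeral_2_eq_2)
    moreover have "(\<Sum>b\<in>{b\<in>E. t b = k}. pmono (t a, [Star b, Comp b a]) (j, w)) = (1::'k)"
      using fin b0 by (simp add: pmono_def)
    ultimately show ?thesis by simp
  next
    case False
    have "cder V E2 h2 t2 (Star a) S2 (j, w) = 0"
    proof (cases cond)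
      case True
      have "cubic (t2 (last (rotate r ?l))) (rotate r ?l) = 0" if "r \<in> {0..<length ?l}" for r
        using cubic_rotate_Star_in[of _ r a w] that a False True by (auto simp: cond_def)
      then show ?thesis using L True by simp
    qed (use L in simp)
    moreover have "(\<Sum>b\<in>{b\<in>E. t b = k}. pmono (t a, [Star b, Comp b a]) (j, w)) = (0::'k)"
      by (rule sum.neutral) (use False in \<open>auto simp: pmono_def\<close>)
    ultimately show ?thesis by simp
  qed
qed

lemma cder_Star_out:
  assumes b: "b \<in> E" "t b = k"
  shows "cder V E2 h2 t2 (Star b) S2 = (\<lambda>p. \<Sum>a\<in>{a\<in>E. h a = k}. pmono (k, [Comp b a, Star a]) p)"
proof (rule ext, clarify)
  fix j w
  define cond where "cond = (B.valid (j, w) \<and> j = t b \<and> ptgt h2 (j, w) = h b)"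
  let ?l = "Star b # w"
  have nsf: "\<not> starfree ?l" by simp
  have L: "cder V E2 h2 t2 (Star b) S2 (j, w) =
      (if cond then (\<Sum>r\<in>{0..<length ?l}. cubic (t2 (last (rotate r ?l))) (rotate r ?l)) else 0)"
    unfolding cderB_eq cond_def S2_split by (simp only: mh.simps mt.simps bracketS_rotate_not_starfree[OF nsf] add_0)
  have fin: "finite {a\<in>E. h a = k}" using A.fin_E by simp
  show "cder V E2 h2 t2 (Star b) S2 (j, w) = (\<Sum>a\<in>{a\<in>E. h a = k}. pmono (k, [Comp b a, Star a]) (j, w))"
  proof (cases "\<exists>a0. a0 \<in> E \<and> h a0 = k \<and> w = [Comp b a0, Star a0] \<and> j = k")
    case True
    then obtain a0 where a0: "a0 \<in> E" "h a0 = k" "w = [Comp b a0, Star a0]" "j = k" by blast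
    have cond unfolding cond_def using a0 b kV A.hV A.tV
      by (simp add: B.valid_Cons valid_path_Nil ptgt_def)
    then have "cder V E2 h2 t2 (Star b) S2 (j, w) = 1"
      using L a0 b by (simp add: sum_length3 cubic_def numeral_2_eq_2)
    moreover have "(\<Sum>a\<in>{a\<in>E. h a = k}. pmono (k, [Comp b a, Star a]) (j, w)) = (1::'k)"
      using fin a0 by (simp add: pmono_def)
    ultimately show ?thesis by simp
  next
    case False
    have "cder V E2 h2 t2 (Star b) S2 (j, w) = 0"
    proof (cases cond)
      case True
      have "cubic (t2 (last (rotate r ?l))) (rotate r ?l) = 0" if "r \<in> {0..<length ?l}" for r
        using cubic_rotate_Star_out[of _ r b w] that b False True by (auto simp: cond_def)
      then show ?thesis using L True by simp
    qed (use L in simp)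
    moreover have "(\<Sum>a\<in>{a\<in>E. h a = k}. pmono (k, [Comp b a, Star a]) (j, w)) = (0::'k)"
      by (rule sum.neutral) (use False in \<open>auto simp: pmono_def\<close>)
    ultimately show ?thesis by simp
  qed
qed

lemma cderA_palg: "cder V E h t c S \<in> palg V E h t"
  by (rule A.palgI) (auto simp: cder_def split: if_splits)

lemma cderB_palg: "cder V E2 h2 t2 d S2 \<in> palg V E2 h2 t2"
  by (rule B.palgI) (auto simp: cder_def split: if_splits)

lemma cder_in_decomp:
  assumes a: "a \<in> E" "h a = k"
  shows "cder V E h t a S = (\<lambda>p. \<Sum>b\<in>{b\<in>E. t b = k}. pmul h (cder2 a b) (pmono (k, [b])) p)"
proof -
  have sup: "fst p = k \<and> snd p \<noteq> []" if "cder V E h t a S p \<noteq> 0" for p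
    using that a no_loop[OF a(1)] by (cases p) (auto simp: cder_def ptgt_def split: if_splits)
  have strip_right: "A.strip_right k (cder V E h t a S) b = cder2 a b" if b: "b \<in> {b\<in>E. t b = k}" for b
  proof (rule ext, clarify)
    fix j w
    show "A.strip_right k (cder V E h t a S) b (j, w) = cder2 a b (j, w)"
    proof (cases "j = h b")
      case True
      have vb: "A.valid (k, w @ [b]) \<longleftrightarrow> A.valid (h b, w)"
        using b A.valid_append[of k w "[b]"] A.valid_Cons[of k b "[]"] kV
        by (simp add: ptgt_def valid_path_Nil)
      have pb: "ptgt h (k, w @ [b]) = ptgt h (h b, w)" by (simp add: ptgt_append ptgt_def)
      have rotations: "(\<Sum>r\<in>{0..<length (a # w @ [b])}. S (t (last (rotate r (a # w @ [b]))), rotate r (a # w @ [b]))) =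
                (\<Sum>r\<in>{0..<length (b # a # w)}. S (t (last (rotate r (b # a # w))), rotate r (b # a # w)))"
        using sum_rotate_rotate1[of "\<lambda>zs. S (t (last zs), zs)" "b # a # w"] by simp
      show ?thesis using True vb pb rotations a
        by (simp add: A.strip_right_def cderA_eq cder2_eq del: append_Cons)
    next
      case False then show ?thesis by (simp add: A.strip_right_def cder2_eq)
    qed
  qed
  show ?thesis
    by (subst A.sum_strip_right[OF cderA_palg sup]) (simp_all add: strip_right)
qed

lemma cder_out_decomp:
  assumes b: "b \<in> E" "t b = k"
  shows "cder V E h t b S = (\<lambda>p. \<Sum>a\<in>{a\<in>E. h a = k}. pmul h (pmono (t a, [a])) (cder2 a b) p)"
proof -
  have sup: "ptgt h p = k \<and> snd p \<noteq> []" if "cder V E h t b S p \<noteq> 0" for p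
    using that b no_loop[OF b(1)] by (cases p) (auto simp: cder_def ptgt_def split: if_splits)
  have strip_left: "A.strip_left (cder V E h t b S) a = cder2 a b" if a: "a \<in> {a\<in>E. h a = k}" for a
  proof (rule ext, clarify)
    fix j w
    show "A.strip_left (cder V E h t b S) a (j, w) = cder2 a b (j, w)"
      using a b by (auto simp: A.strip_left_def cderA_eq cder2_eq A.valid_Cons ptgt_Cons)
  qed
  show ?thesis
    by (subst A.sum_strip_left[OF cderA_palg sup]) (simp_all add: strip_left)
qed

subsection \<open>The inverse map\<close>

(* Since d_[ba] S~ = [d_ba S] + a* b*, a pair a* b* is sent to -d_ba S; stars occur only in
   such pairs in paths of the corner (star_paired_corner). *)
fun psi_word :: "'a marrow list \<Rightarrow> 'v \<times> 'a list \<Rightarrow> 'k" where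
  "psi_word [] = punit V"
| "psi_word (Old c # r) = pmul h (pmono (t c, [c])) (psi_word r)"
| "psi_word (Comp b a # r) = pmul h (pmono (t a, [b, a])) (psi_word r)"
| "psi_word (Star a # Star b # r) = (if h a = k \<and> t b = k then pmul h (psmul (-1) (cder2 a b)) (psi_word r) else pzero)"
| "psi_word (Star a # r) = pzero"

fun star_paired :: "'a marrow list \<Rightarrow> bool" where
  "star_paired [] = True"
| "star_paired (Old c # r) = star_paired r"
| "star_paired (Comp b a # r) = star_paired r"
| "star_paired (Star a # Star b # r) = (h a = k \<and> t b = k \<and> star_paired r)"
| "star_paired (Star a # r) = False"

lemma psi_word_palg: "set ys \<subseteq> E2 \<Longrightarrow> psi_word ys \<in> palg V E h t"
proof (induction ys rule: psi_word.induct)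
  case 1 then show ?case by (simp add: A.punit_palg)
next
  case (2 c r)
  have "A.valid (t c, [c])" using 2 A.tV by (simp add: A.valid_Cons valid_path_Nil ptgt_def)
  then show ?case using 2 by (simp add: A.pmul_palg A.pmono_palg)
next
  case (3 b a r)
  have "A.valid (t a, [b, a])" using 3 A.tV by (simp add: A.valid_Cons valid_path_Nil ptgt_def)
  then show ?case using 3 by (simp add: A.pmul_palg A.pmono_palg)
next
  case (4 a b r)
  then show ?case by (simp add: A.pmul_palg A.psmul_palg cder2_palg A.pzero_palg)
qed (simp_all add: A.pzero_palg)

lemma psi_word_length: "psi_word ys (j, zs) \<noteq> 0 \<Longrightarrow> set ys \<subseteq> E2 \<Longrightarrow> length ys \<le> 2 * length zs"
proof (induction ys arbitrary: j zs rule: psi_word.induct)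
  case 1 then show ?case by simp
next
  case (2 c r)
  from 2(2) obtain n where n: "n \<le> length zs" "pmono (t c, [c]) (ptgt h (j, drop n zs), take n zs) \<noteq> (0::'k)"
    "psi_word r (j, drop n zs) \<noteq> 0" by (auto elim: pmul_nonzeroE)
  then have "take n zs = [c]" by (auto simp: pmono_def split: if_splits)
  then have "n = 1" using n(1) length_take[of n zs] by auto
  then show ?case using 2(1)[OF n(3)] 2(3) n(1) by simp
next
  case (3 b a r)
  from 3(2) obtain n where n: "n \<le> length zs" "pmono (t a, [b, a]) (ptgt h (j, drop n zs), take n zs) \<noteq> (0::'k)"
    "psi_word r (j, drop n zs) \<noteq> 0" by (auto elim: pmul_nonzeroE)
  then have "take n zs = [b, a]" by (auto simp: pmono_def split: if_splits)
  then have "n = 2" using n(1) length_take[of n zs] by auto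
  then show ?case using 3(1)[OF n(3)] 3(3) n(1) by simp
next
  case (4 a b r)
  then have g: "h a = k" "t b = k" "a \<in> E" "b \<in> E" by (auto split: if_splits simp: pzero_def)
  with 4(2) obtain n where n: "n \<le> length zs" "psmul (-1) (cder2 a b) (ptgt h (j, drop n zs), take n zs) \<noteq> (0::'k)"
    "psi_word r (j, drop n zs) \<noteq> 0" by (auto elim: pmul_nonzeroE)
  have "take n zs \<noteq> []"
  proof
    assume e: "take n zs = []"
    have "cder2 a b (ptgt h (j, drop n zs), take n zs) = 0" by (simp only: e cder2_nil[OF g(3,4,1,2)])
    then show False using n(2) by (simp add: psmul_def)
  qed
  then have "n \<ge> 1" by (cases n) auto
  then show ?case using 4(1)[OF conjI[OF g(1,2)] n(3)] 4(3) n(1) by simp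
qed (simp_all add: pzero_def)

lemma psi_word_ptgt: "psi_word ys (j, zs) \<noteq> 0 \<Longrightarrow> ptgt h (j, zs) = ptgt h2 (j, ys)"
proof (induction ys arbitrary: j zs rule: psi_word.induct)
  case 1 then show ?case by (auto simp: punit_def ptgt_def split: if_splits)
next
  case (2 c r)
  from 2(2) obtain n where n: "pmono (t c, [c]) (ptgt h (j, drop n zs), take n zs) \<noteq> (0::'k)"
    by (auto elim: pmul_nonzeroE)
  then have "take n zs = [c]" by (auto simp: pmono_def split: if_splits)
  then show ?case using ptgt_take_drop[of h j n zs] by (simp add: ptgt_def)
next
  case (3 b a r)
  from 3(2) obtain n where n: "pmono (t a, [b, a]) (ptgt h (j, drop n zs), take n zs) \<noteq> (0::'k)"
    by (auto elim: pmul_nonzeroE)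
  then have "take n zs = [b, a]" by (auto simp: pmono_def split: if_splits)
  then show ?case using ptgt_take_drop[of h j n zs] by (simp add: ptgt_def)
next
  case (4 a b r)
  then have g: "h a = k" "t b = k" by (auto split: if_splits simp: pzero_def)
  with 4(2) obtain n where n: "psmul (-1) (cder2 a b) (ptgt h (j, drop n zs), take n zs) \<noteq> (0::'k)"
    by (auto elim: pmul_nonzeroE)
  then have "ptgt h (ptgt h (j, drop n zs), take n zs) = t a" by (auto simp: psmul_def cder2_eq split: if_splits)
  then show ?case using ptgt_take_drop[of h j n zs] by (simp add: ptgt_def)
qed (simp_all add: pzero_def)

lemma psi_word_append: "star_paired ys1 \<Longrightarrow> set ys2 \<subseteq> E2 \<Longrightarrow> psi_word (ys1 @ ys2) = pmul h (psi_word ys1) (psi_word ys2)"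
proof (induction ys1 rule: star_paired.induct)
  case 1 then show ?case by (simp add: A.pmul_punit_left psi_word_palg)
next
  case (2 c r) then show ?case by (simp add: pmul_assoc)
next
  case (3 b a r) then show ?case by (simp add: pmul_assoc)
next
  case (4 a b r) then show ?case by (simp add: pmul_assoc)
qed simp_all

lemma star_paired_corner: "B.valid (j, ys) \<Longrightarrow> j \<noteq> k \<Longrightarrow> ptgt h2 (j, ys) \<noteq> k \<Longrightarrow> star_paired ys"
proof (induction ys rule: length_induct)
  case (1 ys)
  show ?case
  proof (cases ys)
    case Nil then show ?thesis by simp
  next
    case (Cons d r)
    have v: "d \<in> E2" "B.valid (j, r)" "t2 d = ptgt h2 (j, r)" "h2 d \<noteq> k"
      using "1.prems" Cons by (auto simp: B.valid_Cons ptgt_def)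
    from v(1) show ?thesis
    proof (cases rule: E2_cases)
      case (Old c)
      then have "star_paired r" using "1.IH"[rule_format, of r] Cons v "1.prems"(2) by simp
      then show ?thesis using Old Cons by simp
    next
      case (Comp b a)
      have "t a \<noteq> k" using Comp no_loop by metis
      then have "star_paired r" using "1.IH"[rule_format, of r] Cons v "1.prems"(2) Comp by simp
      then show ?thesis using Comp Cons by simp
    next
      case (Star a)
      have ha: "h a = k" using Star v by auto
      then have pr: "ptgt h2 (j, r) = k" using v Star by simp
      then obtain d' r' where r: "r = d' # r'" using "1.prems"(2) by (cases r) (auto simp: ptgt_def)
      have v': "d' \<in> E2" "B.valid (j, r')" "t2 d' = ptgt h2 (j, r')" "h2 d' = k"
        using v(2) pr r by (auto simp: B.valid_Cons ptgt_def)
      from v'(1) obtain b where b: "d' = Star b" "b \<in> E" "t b = k"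
      proof (cases rule: E2_cases)
        case (Old c) then show ?thesis using v' by simp
      next
        case (Comp b' a')
        have "h b' \<noteq> k" using Comp no_loop by metis
        then show ?thesis using v' Comp by simp
      next
        case (Star c) then show ?thesis using v' that by simp
      qed
      have "h b \<noteq> k" using b no_loop by metis
      then have "star_paired r'" using "1.IH"[rule_format, of r'] Cons r v' b "1.prems"(2) by simp
      then show ?thesis using Cons r b Star ha by simp
    qed
  qed
qed

lemma psi_word_starfree: "starfree ys \<Longrightarrow> set ys \<subseteq> E2 \<Longrightarrow> psi_word ys (j, zs) = (if zs = unbracket ys \<and> A.valid (j, zs) then 1 else 0)"
proof (induction ys arbitrary: zs)
  case Nil then show ?case by (auto simp: punit_def valid_path_Nil)
next
  case (Cons d r)
  from Cons.prems have r: "starfree r" "set r \<subseteq> E2" by auto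
  from Cons.prems have d: "d \<in> E2" "\<forall>c. d \<noteq> Star c" by auto
  from d(1) show ?case
  proof (cases rule: E2_cases)
    case (Old c)
    show ?thesis using Cons.IH[OF r] Old
      by (cases zs) (auto simp: pmono_pmul A.valid_Cons)
  next
    case (Comp b a)
    show ?thesis using Cons.IH[OF r] Comp
      by (cases zs; cases "tl zs") (auto simp: pmono_pmul A.valid_Cons ptgt_def)
  next
    case (Star c) then show ?thesis using d by simp
  qed
qed

definition words_upto :: "nat \<Rightarrow> 'a marrow list set" where
  "words_upto N = {ys. set ys \<subseteq> E2 \<and> length ys \<le> N}"

lemma finite_words_upto: "finite (words_upto N)"
  unfolding words_upto_def by (rule finite_lists_length_le[OF finite_E2])

definition psi :: "('v \<times> 'a marrow list \<Rightarrow> 'k) \<Rightarrow> 'v \<times> 'a list \<Rightarrow> 'k" where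
  "psi z = (\<lambda>(j, zs). \<Sum>ys\<in>words_upto (2 * length zs). z (j, ys) * psi_word ys (j, zs))"

lemma psi_eq: "psi z (j, zs) = (\<Sum>ys\<in>words_upto (2 * length zs). z (j, ys) * psi_word ys (j, zs))"
  by (simp add: psi_def)

lemma psi_eq_words_upto: "2 * length zs \<le> N \<Longrightarrow> psi z (j, zs) = (\<Sum>ys\<in>words_upto N. z (j, ys) * psi_word ys (j, zs))"
  unfolding psi_eq
proof (rule sum.mono_neutral_left)
  show "finite (words_upto N)" by (rule finite_words_upto)
  assume "2 * length zs \<le> N"
  then show "words_upto (2 * length zs) \<subseteq> words_upto N" by (auto simp: words_upto_def)
  show "\<forall>ys\<in>words_upto N - words_upto (2 * length zs). z (j, ys) * psi_word ys (j, zs) = 0"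
    using psi_word_length by (fastforce simp: words_upto_def)
qed

lemma psi_padd: "psi (padd z w) = padd (psi z) (psi w)"
  by (auto simp: psi_def padd_def fun_eq_iff sum.distrib algebra_simps)

lemma psi_psmul: "psi (psmul c z) = psmul c (psi z)"
  by (auto simp: psi_def psmul_def fun_eq_iff sum_distrib_left algebra_simps)

lemma psi_pzero: "psi pzero = pzero"
  by (auto simp: psi_def pzero_def fun_eq_iff)

lemma psi_sum: "psi (\<lambda>p. \<Sum>i\<in>I. F i p) = (\<lambda>p. \<Sum>i\<in>I. psi (F i) p)"
  by (auto simp: psi_def fun_eq_iff sum_distrib_right intro: sum.swap)

lemma psi_agree_below: "agree_below (2 * n + 1) z z' \<Longrightarrow> agree_below n (psi z) (psi z')"
  unfolding agree_below_def
proof (intro allI impI)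
  fix p :: "'v \<times> 'a list"
  assume H: "\<forall>p. length (snd p) < 2 * n + 1 \<longrightarrow> z p = z' p" and l: "length (snd p) < n"
  obtain j zs where p: "p = (j, zs)" by (cases p)
  show "psi z p = psi z' p" unfolding p psi_eq
  proof (rule sum.cong[OF refl])
    fix ys assume "ys \<in> words_upto (2 * length zs)"
    then have "length ys < 2 * n + 1" using l p by (auto simp: words_upto_def)
    then show "z (j, ys) * psi_word ys (j, zs) = z' (j, ys) * psi_word ys (j, zs)" using H by simp
  qed
qed

lemma psi_corner: "z \<in> C2 \<Longrightarrow> psi z \<in> C1"
proof (rule A.cornerI)
  fix p assume z: "z \<in> C2" and ne: "psi z p \<noteq> 0"
  obtain j zs where p: "p = (j, zs)" by (cases p)
  from ne obtain ys where ys: "ys \<in> words_upto (2 * length zs)" "z (j, ys) * psi_word ys (j, zs) \<noteq> 0"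
    unfolding p psi_eq by (auto elim: sum.not_neutral_contains_not_neutral)
  then have nz: "z (j, ys) \<noteq> 0" "psi_word ys (j, zs) \<noteq> 0" by auto
  have sE: "set ys \<subseteq> E2" using ys by (simp add: words_upto_def)
  have "A.valid (j, zs)" using A.palgD[OF psi_word_palg[OF sE] nz(2)] .
  moreover have "B.valid (j, ys) \<and> fst (j, ys) \<noteq> k \<and> ptgt h2 (j, ys) \<noteq> k" by (rule B.cornerD[OF z nz(1)])
  moreover have "ptgt h (j, zs) = ptgt h2 (j, ys)" by (rule psi_word_ptgt[OF nz(2)])
  ultimately show "A.valid p \<and> fst p \<noteq> k \<and> ptgt h p \<noteq> k" unfolding p by simp
qed

lemma psi_phi: "x \<in> C1 \<Longrightarrow> psi (phi x) = x"
proof (rule ext, clarify)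
  fix j zs assume x: "x \<in> C1"
  have T0: "phi x (j, ys) * psi_word ys (j, zs) \<noteq> 0 \<Longrightarrow> set ys \<subseteq> E2 \<Longrightarrow> ys = br zs \<and> x (j, zs) \<noteq> 0" for ys
  proof -
    assume ne: "phi x (j, ys) * psi_word ys (j, zs) \<noteq> 0" and sE: "set ys \<subseteq> E2"
    then have n1: "phi x (j, ys) \<noteq> 0" "psi_word ys (j, zs) \<noteq> 0" by auto
    from phi_nonzeroD[OF n1(1)] have sf: "starfree ys" "br (unbracket ys) = ys" "x (j, unbracket ys) \<noteq> 0" by auto
    from n1(2) have "zs = unbracket ys" using psi_word_starfree[OF sf(1) sE] by (auto split: if_splits)
    then show ?thesis using sf by simp
  qed
  show "psi (phi x) (j, zs) = x (j, zs)"
  proof (cases "x (j, zs) = 0")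
    case True
    have "(\<Sum>ys\<in>words_upto (2 * length zs). phi x (j, ys) * psi_word ys (j, zs)) = 0"
      by (rule sum.neutral) (use T0 True in \<open>force simp: words_upto_def\<close>)
    then show ?thesis using True by (simp add: psi_eq)
  next
    case False
    have c: "A.valid (j, zs) \<and> fst (j, zs) \<noteq> k \<and> ptgt h (j, zs) \<noteq> k" by (rule A.cornerD[OF x False])
    then have c': "A.valid (j, zs)" "j \<noteq> k" "ptgt h (j, zs) \<noteq> k" by auto
    from valid_bracket[OF c'] have ok: "\<forall>d\<in>set (br zs). bracket_letter k h t d \<and> d \<in> E2" by blast
    then have sf0: "starfree (br zs)" "set (br zs) \<subseteq> E2" by (auto simp: starfree_def)
    have inW: "br zs \<in> words_upto (2 * length zs)" using sf0 length_bracket[of k h t zs] by (auto simp: words_upto_def)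
    have "(\<Sum>ys\<in>words_upto (2 * length zs). phi x (j, ys) * psi_word ys (j, zs)) = phi x (j, br zs) * psi_word (br zs) (j, zs)"
    proof (rule sum_eq_single[OF finite_words_upto inW])
      fix ys assume "ys \<in> words_upto (2 * length zs)" "ys \<noteq> br zs"
      then show "phi x (j, ys) * psi_word ys (j, zs) = 0" using T0 by (auto simp: words_upto_def)
    qed
    also have "\<dots> = x (j, zs)"
      using sf0 c'(1) by (simp add: phi_starfree psi_word_starfree unbracket_bracket)
    finally show ?thesis by (simp add: psi_eq)
  qed
qed

lemma psi_pmono: "set ys0 \<subseteq> E2 \<Longrightarrow> psi (pmono (j0, ys0)) = (\<lambda>(j, zs). if j = j0 then psi_word ys0 (j, zs) else 0)"
proof (rule ext, clarify)
  fix j zs assume sE: "set ys0 \<subseteq> E2"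
  show "psi (pmono (j0, ys0)) (j, zs) = (if j = j0 then psi_word ys0 (j, zs) else 0)"
  proof (cases "j = j0 \<and> ys0 \<in> words_upto (2 * length zs)")
    case True
    have "(\<Sum>ys\<in>words_upto (2 * length zs). pmono (j0, ys0) (j, ys) * psi_word ys (j, zs)) = pmono (j0, ys0) (j, ys0) * psi_word ys0 (j, zs)"
      by (rule sum_eq_single[OF finite_words_upto]) (use True in \<open>auto simp: pmono_def\<close>)
    then show ?thesis using True by (simp add: psi_eq pmono_def)
  next
    case False
    have "(\<Sum>ys\<in>words_upto (2 * length zs). pmono (j0, ys0) (j, ys) * psi_word ys (j, zs)) = 0"
      by (rule sum.neutral) (use False in \<open>auto simp: pmono_def\<close>)
    moreover have "j = j0 \<Longrightarrow> psi_word ys0 (j, zs) = 0"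
      using False sE psi_word_length[of ys0 j zs] by (auto simp: words_upto_def)
    ultimately show ?thesis by (auto simp: psi_eq)
  qed
qed

lemma psi_pmono_eq_psi_word:
  assumes "set ys0 \<subseteq> E2" "\<And>j zs. psi_word ys0 (j, zs) \<noteq> 0 \<Longrightarrow> j = j0"
  shows "psi (pmono (j0, ys0)) = psi_word ys0"
proof (rule ext, clarify)
  fix j zs
  show "psi (pmono (j0, ys0)) (j, zs) = psi_word ys0 (j, zs)"
    using psi_pmono[OF assms(1)] assms(2)[of j zs] by (cases "j = j0") auto
qed

lemma psi_pmono_Star_pair: "a \<in> E \<Longrightarrow> b \<in> E \<Longrightarrow> h a = k \<Longrightarrow> t b = k \<Longrightarrow>
  psi (pmono (h b, [Star a, Star b])) = psmul (-1) (cder2 a b)"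
proof -
  assume ab: "a \<in> E" "b \<in> E" "h a = k" "t b = k"
  have e: "psi_word [Star a, Star b] = psmul (-1) (cder2 a b)"
    using ab by (simp add: A.pmul_punit_right A.psmul_palg cder2_palg)
  have "psi (pmono (h b, [Star a, Star b])) = psi_word [Star a, Star b]"
  proof (rule psi_pmono_eq_psi_word)
    show "set [Star a, Star b] \<subseteq> E2" using ab by simp
    fix j zs assume "psi_word [Star a, Star b] (j, zs) \<noteq> 0"
    then show "j = h b" unfolding e by (auto simp: psmul_def cder2_eq split: if_splits)
  qed
  then show ?thesis using e by simp
qed

lemma sum_words_split:
  "(\<Sum>ys\<in>words_upto N. \<Sum>m\<in>{0..length ys}. F (take m ys) (drop m ys)) =
   (\<Sum>p\<in>{(y1, y2). y1 \<in> words_upto N \<and> y2 \<in> words_upto N \<and> length y1 + length y2 \<le> N}. F (fst p) (snd p))"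
proof -
  have "(\<Sum>ys\<in>words_upto N. \<Sum>m\<in>{0..length ys}. F (take m ys) (drop m ys)) =
      (\<Sum>q\<in>Sigma (words_upto N) (\<lambda>ys. {0..length ys}). F (take (snd q) (fst q)) (drop (snd q) (fst q)))"
    by (subst sum.Sigma) (auto simp: finite_words_upto case_prod_beta)
  also have "\<dots> = (\<Sum>p\<in>{(y1, y2). y1 \<in> words_upto N \<and> y2 \<in> words_upto N \<and> length y1 + length y2 \<le> N}. F (fst p) (snd p))"
    by (rule sum.reindex_bij_witness[where i = "\<lambda>p. (fst p @ snd p, length (fst p))"
                                         and j = "\<lambda>q. (take (snd q) (fst q), drop (snd q) (fst q))"])
       (auto simp: words_upto_def dest!: in_set_takeD in_set_dropD)
  finally show ?thesis .
qed

lemma psi_pmul_double_sum: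
  assumes z: "z \<in> C2"
  shows "psi (pmul h2 z w) (j, zs) =
    (\<Sum>y1\<in>words_upto (2 * length zs). \<Sum>y2\<in>words_upto (2 * length zs).
      z (ptgt h2 (j, y2), y1) * w (j, y2) * pmul h (psi_word y1) (psi_word y2) (j, zs))"
proof -
  define N where "N = 2 * length zs"
  define W where "W = words_upto N"
  define G where "G y1 y2 = z (ptgt h2 (j, y2), y1) * w (j, y2) * pmul h (psi_word y1) (psi_word y2) (j, zs)" for y1 y2
  have WE: "y \<in> W \<Longrightarrow> set y \<subseteq> E2" for y by (simp add: W_def words_upto_def)
  have factor_word: "z (ptgt h2 (j, drop m ys), take m ys) * w (j, drop m ys) * psi_word ys (j, zs) = G (take m ys) (drop m ys)"
    if ys: "ys \<in> W" for ys m
  proof (cases "z (ptgt h2 (j, drop m ys), take m ys) = 0")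
    case True then show ?thesis by (simp add: G_def)
  next
    case False
    have "B.valid (ptgt h2 (j, drop m ys), take m ys) \<and> fst (ptgt h2 (j, drop m ys), take m ys) \<noteq> k
        \<and> ptgt h2 (ptgt h2 (j, drop m ys), take m ys) \<noteq> k"
      by (rule B.cornerD[OF z False])
    then have gd: "star_paired (take m ys)" using star_paired_corner by auto
    have "set (drop m ys) \<subseteq> E2" using WE[OF ys] by (meson order_trans set_drop_subset)
    then have "psi_word ys = pmul h (psi_word (take m ys)) (psi_word (drop m ys))"
      using psi_word_append[OF gd] by (metis append_take_drop_id)
    then show ?thesis by (simp add: G_def)
  qed
  have "psi (pmul h2 z w) (j, zs) = (\<Sum>ys\<in>W. \<Sum>m\<in>{0..length ys}. G (take m ys) (drop m ys))"
    unfolding psi_eq W_def[symmetric] N_def[symmetric]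
    by (rule sum.cong[OF refl]) (simp add: pmul_def sum_distrib_right factor_word)
  also have "\<dots> = (\<Sum>p\<in>{(y1, y2). y1 \<in> W \<and> y2 \<in> W \<and> length y1 + length y2 \<le> N}. G (fst p) (snd p))"
    unfolding W_def by (rule sum_words_split)
  also have "\<dots> = (\<Sum>p\<in>W \<times> W. G (fst p) (snd p))"
  proof (rule sum.mono_neutral_left)
    show "finite (W \<times> W)" by (simp add: W_def finite_words_upto)
    show "{(y1, y2). y1 \<in> W \<and> y2 \<in> W \<and> length y1 + length y2 \<le> N} \<subseteq> W \<times> W" by auto
    show "\<forall>p\<in>W \<times> W - {(y1, y2). y1 \<in> W \<and> y2 \<in> W \<and> length y1 + length y2 \<le> N}. G (fst p) (snd p) = 0"
    proof
      fix p assume p: "p \<in> W \<times> W - {(y1, y2). y1 \<in> W \<and> y2 \<in> W \<and> length y1 + length y2 \<le> N}"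
      obtain y1 y2 where p12: "p = (y1, y2)" by (cases p)
      show "G (fst p) (snd p) = 0"
      proof (rule ccontr)
        assume "G (fst p) (snd p) \<noteq> 0"
        then have "pmul h (psi_word y1) (psi_word y2) (j, zs) \<noteq> 0" by (simp add: G_def p12)
        then obtain n where n: "n \<le> length zs" "psi_word y1 (ptgt h (j, drop n zs), take n zs) \<noteq> 0" "psi_word y2 (j, drop n zs) \<noteq> 0"
          by (rule pmul_nonzeroE)
        have "length y1 \<le> 2 * length (take n zs)" using psi_word_length[OF n(2)] WE p p12 by auto
        moreover have "length y2 \<le> 2 * length (drop n zs)" using psi_word_length[OF n(3)] WE p p12 by auto
        ultimately have "length y1 + length y2 \<le> N" using n(1) by (simp add: N_def)
        then show False using p p12 by auto
      qed
    qed
  qed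
  also have "\<dots> = (\<Sum>y1\<in>W. \<Sum>y2\<in>W. G y1 y2)"
    by (simp add: sum.cartesian_product case_prod_beta)
  finally show ?thesis by (simp add: W_def N_def G_def)
qed

lemma pmul_psi_double_sum:
  "pmul h (psi z) (psi w) (j, zs) =
    (\<Sum>y1\<in>words_upto (2 * length zs). \<Sum>y2\<in>words_upto (2 * length zs).
      z (ptgt h2 (j, y2), y1) * w (j, y2) * pmul h (psi_word y1) (psi_word y2) (j, zs))"
proof -
  define W where "W = words_upto (2 * length zs)"
  define G where "G y1 y2 = z (ptgt h2 (j, y2), y1) * w (j, y2) * pmul h (psi_word y1) (psi_word y2) (j, zs)" for y1 y2
  have "pmul h (psi z) (psi w) (j, zs) =
      (\<Sum>n\<in>{0..length zs}. (\<Sum>y1\<in>W. z (ptgt h (j, drop n zs), y1) * psi_word y1 (ptgt h (j, drop n zs), take n zs)) *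
                             (\<Sum>y2\<in>W. w (j, y2) * psi_word y2 (j, drop n zs)))"
  proof -
    have "psi z (ptgt h (j, drop n zs), take n zs) = (\<Sum>y1\<in>W. z (ptgt h (j, drop n zs), y1) * psi_word y1 (ptgt h (j, drop n zs), take n zs))"
      and "psi w (j, drop n zs) = (\<Sum>y2\<in>W. w (j, y2) * psi_word y2 (j, drop n zs))" for n
      unfolding W_def by (rule psi_eq_words_upto; simp)+
    then show ?thesis by (simp add: pmul_def)
  qed
  also have "\<dots> = (\<Sum>n\<in>{0..length zs}. \<Sum>y1\<in>W. \<Sum>y2\<in>W.
        z (ptgt h (j, drop n zs), y1) * psi_word y1 (ptgt h (j, drop n zs), take n zs) * (w (j, y2) * psi_word y2 (j, drop n zs)))"
    by (simp add: sum_product)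
  also have "\<dots> = (\<Sum>y1\<in>W. \<Sum>y2\<in>W. \<Sum>n\<in>{0..length zs}.
        z (ptgt h (j, drop n zs), y1) * psi_word y1 (ptgt h (j, drop n zs), take n zs) * (w (j, y2) * psi_word y2 (j, drop n zs)))"
    by (simp add: sum.swap[of _ "{0..length zs}"])
  also have "\<dots> = (\<Sum>y1\<in>W. \<Sum>y2\<in>W. G y1 y2)"
  proof (intro sum.cong refl)
    fix y1 y2
    have e: "z (ptgt h (j, drop n zs), y1) * psi_word y1 (ptgt h (j, drop n zs), take n zs) * (w (j, y2) * psi_word y2 (j, drop n zs))
        = z (ptgt h2 (j, y2), y1) * w (j, y2) * (psi_word y1 (ptgt h (j, drop n zs), take n zs) * psi_word y2 (j, drop n zs))" for n
    proof (cases "psi_word y2 (j, drop n zs) = 0")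
      case True then show ?thesis by simp
    next
      case False
      then have "ptgt h (j, drop n zs) = ptgt h2 (j, y2)" by (rule psi_word_ptgt)
      then show ?thesis by (simp add: algebra_simps)
    qed
    show "(\<Sum>n\<in>{0..length zs}. z (ptgt h (j, drop n zs), y1) * psi_word y1 (ptgt h (j, drop n zs), take n zs) * (w (j, y2) * psi_word y2 (j, drop n zs))) = G y1 y2"
      unfolding G_def by (simp add: e pmul_def sum_distrib_left)
  qed
  finally show ?thesis by (simp add: W_def G_def)
qed

lemma psi_mul:
  assumes "z \<in> C2"
  shows "psi (pmul h2 z w) = pmul h (psi z) (psi w)"
  by (rule ext, clarify) (simp only: psi_pmul_double_sum[OF assms] pmul_psi_double_sum)

subsection \<open>The maps respect the Jacobian ideals\<close>

abbreviation "X1 \<equiv> (\<lambda>c. cder V E h t c S) ` E"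

abbreviation "X2 \<equiv> (\<lambda>d. cder V E2 h2 t2 d S2) ` E2"

abbreviation "J1 \<equiv> A.closed_ideal X1"

abbreviation "J2 \<equiv> B.closed_ideal X2"

lemma X1_palg: "X1 \<subseteq> palg V E h t" using cderA_palg by auto

lemma X2_palg: "X2 \<subseteq> palg V E2 h2 t2" using cderB_palg by auto

lemma J2_gen: "d \<in> E2 \<Longrightarrow> cder V E2 h2 t2 d S2 \<in> J2"
  by (rule B.closed_ideal_generator[OF X2_palg]) auto

lemma J1_gen: "c \<in> E \<Longrightarrow> cder V E h t c S \<in> J1"
  by (rule A.closed_ideal_generator[OF X1_palg]) auto

lemma cderA_supp: "prestrict {h c} {t c} h (cder V E h t c S) = cder V E h t c S"
  by (rule prestrict_id) (auto simp: cder_def split: if_splits)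

lemma cderB_supp: "prestrict {h2 d} {t2 d} h2 (cder V E2 h2 t2 d S2) = cder V E2 h2 t2 d S2"
  by (rule prestrict_id) (auto simp: cder_def split: if_splits)

lemma cderA_corner: "c \<in> E \<Longrightarrow> h c \<noteq> k \<Longrightarrow> t c \<noteq> k \<Longrightarrow> cder V E h t c S \<in> C1"
  by (rule A.cornerI) (auto simp: cder_def split: if_splits)

lemma phi_mul3: "x \<in> C1 \<Longrightarrow> g \<in> C1 \<Longrightarrow> y \<in> C1 \<Longrightarrow> phi (pmul h (pmul h x g) y) = pmul h2 (pmul h2 (phi x) (phi g)) (phi y)"
  by (simp add: phi_mul A.corner_pmul)

lemma psi_mul3: "x \<in> C2 \<Longrightarrow> g \<in> C2 \<Longrightarrow> y \<in> C2 \<Longrightarrow> psi (pmul h2 (pmul h2 x g) y) = pmul h (pmul h (psi x) (psi g)) (psi y)"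
  by (simp add: psi_mul B.corner_pmul)

lemma phi_palg: "x \<in> C1 \<Longrightarrow> phi x \<in> palg V E2 h2 t2"
  using phi_corner B.corner_palg by blast

lemma psi_palg: "z \<in> C2 \<Longrightarrow> psi z \<in> palg V E h t"
  using psi_corner A.corner_palg by blast

lemma J2_mul3: "a \<in> palg V E2 h2 t2 \<Longrightarrow> g \<in> J2 \<Longrightarrow> b \<in> palg V E2 h2 t2 \<Longrightarrow> pmul h2 (pmul h2 a g) b \<in> J2"
  by (simp add: B.closed_ideal_mult_left B.closed_ideal_mult_right)

lemma J1_mul3: "a \<in> palg V E h t \<Longrightarrow> g \<in> J1 \<Longrightarrow> b \<in> palg V E h t \<Longrightarrow> pmul h (pmul h a g) b \<in> J1"
  by (simp add: A.closed_ideal_mult_left A.closed_ideal_mult_right)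

lemma phi_gen_Old:
  assumes c: "c \<in> E" "h c \<noteq> k" "t c \<noteq> k" and x: "x \<in> palg V E h t" and y: "y \<in> palg V E h t"
  shows "phi (prestrict (-{k}) (-{k}) h (pmul h (pmul h x (cder V E h t c S)) y)) \<in> J2"
proof -
  let ?g = "cder V E h t c S"
  have P: "prestrict (-{k}) (-{k}) h (pmul h (pmul h x ?g) y) = pmul h (pmul h (prestrict {t c} (-{k}) h x) ?g) (prestrict (-{k}) {h c} h y)"
    by (rule prestrict_pmul3[OF cderA_supp])
  have x': "prestrict {t c} (-{k}) h x \<in> C1" using c x by (intro A.prestrict_corner) auto
  have y': "prestrict (-{k}) {h c} h y \<in> C1" using c y by (intro A.prestrict_corner) auto
  have g: "?g \<in> C1" using cderA_corner[OF c] .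
  have "phi ?g = cder V E2 h2 t2 (Old c) S2" using cder_Old[OF c] by simp
  then have "phi ?g \<in> J2" using J2_gen[of "Old c"] c by simp
  then show ?thesis unfolding P phi_mul3[OF x' g y'] using phi_palg x' y' by (intro J2_mul3) auto
qed

lemma phi_cder2: "a \<in> E \<Longrightarrow> b \<in> E \<Longrightarrow> h a = k \<Longrightarrow> t b = k \<Longrightarrow>
    phi (cder2 a b) = psub (cder V E2 h2 t2 (Comp b a) S2) (pmono (h b, [Star a, Star b]))"
  by (simp add: cder_Comp) (auto simp: psub_def padd_def fun_eq_iff)

lemma pmono_Comp_corner: "a' \<in> E \<Longrightarrow> b \<in> E \<Longrightarrow> h a' = k \<Longrightarrow> t b = k \<Longrightarrow> pmono (t a', [b, a']) \<in> C1"
proof (rule A.corner_pmono)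
  assume H: "a' \<in> E" "b \<in> E" "h a' = k" "t b = k"
  show "A.valid (t a', [b, a'])" using H A.tV by (simp add: A.valid_Cons valid_path_Nil ptgt_def)
  show "fst (t a', [b, a']) \<noteq> k" using H no_loop by (simp, metis)
  show "ptgt h (t a', [b, a']) \<noteq> k" using H no_loop by (simp add: ptgt_def, metis)
qed

lemma cder_in_pmul_pmono:
  assumes a: "a \<in> E" "h a = k" and a': "a' \<in> E" "h a' = k"
  shows "pmul h (cder V E h t a S) (pmono (t a', [a'])) = (\<lambda>p. \<Sum>b\<in>{b\<in>E. t b = k}. pmul h (cder2 a b) (pmono (t a', [b, a'])) p)"
proof -
  have "pmul h (cder V E h t a S) (pmono (t a', [a'])) = (\<lambda>p. \<Sum>b\<in>{b\<in>E. t b = k}. pmul h (pmul h (cder2 a b) (pmono (k, [b]))) (pmono (t a', [a'])) p)"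
    by (subst cder_in_decomp[OF a]) (simp add: pmul_sum_l)
  also have "\<dots> = (\<lambda>p. \<Sum>b\<in>{b\<in>E. t b = k}. pmul h (cder2 a b) (pmono (t a', [b, a'])) p)"
  proof -
    have e: "pmul h (pmono (k, [b])) (pmono (t a', [a'])) = pmono (t a', [b, a'])" for b
      using pmono_mul[of h "t a'" "[a']" "[b]"] a' by (simp add: ptgt_def)
    show ?thesis by (simp add: pmul_assoc e)
  qed
  finally show ?thesis .
qed

lemma phi_cder_in_pmul_pmono:
  assumes a: "a \<in> E" "h a = k" and a': "a' \<in> E" "h a' = k"
  shows "phi (pmul h (cder V E h t a S) (pmono (t a', [a']))) =
    psub (\<lambda>p. \<Sum>b\<in>{b\<in>E. t b = k}. pmul h2 (cder V E2 h2 t2 (Comp b a) S2) (pmono (t a', [Comp b a'])) p)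
      (pmul h2 (pmono (k, [Star a])) (cder V E2 h2 t2 (Star a') S2))"
proof -
  let ?B = "{b\<in>E. t b = k}"
  have "phi (pmul h (cder V E h t a S) (pmono (t a', [a']))) =
      (\<lambda>p. \<Sum>b\<in>?B. psub (pmul h2 (cder V E2 h2 t2 (Comp b a) S2) (pmono (t a', [Comp b a'])))
                        (pmul h2 (pmono (k, [Star a])) (pmono (t a', [Star b, Comp b a']))) p)"
    unfolding cder_in_pmul_pmono[OF assms] phi_sum
  proof (intro ext sum.cong refl)
    fix p b assume b: "b \<in> ?B"
    have uC: "cder2 a b \<in> C1" using a a' b by (intro cder2_corner) auto
    have mC: "pmono (t a', [b, a']) \<in> C1" using a' b by (intro pmono_Comp_corner) auto
    have pm: "phi (pmono (t a', [b, a'])) = pmono (t a', [Comp b a'])"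
    proof -
      have v: "A.valid (t a', [b, a'])" "t a' \<noteq> k" "ptgt h (t a', [b, a']) \<noteq> k"
        using mC A.cornerD[OF mC, of "(t a', [b, a'])"] by (auto simp: pmono_def)
      show ?thesis using phi_pmono[OF v] b a' by simp
    qed
    have m2: "pmul h2 (pmono (h b, [Star a, Star b])) (pmono (t a', [Comp b a'])) =
              pmul h2 (pmono (k, [Star a])) (pmono (t a', [Star b, Comp b a']))"
    proof -
      have "pmul h2 (pmono (h b, [Star a, Star b])) (pmono (t a', [Comp b a'])) = pmono (t a', [Star a, Star b, Comp b a'])"
        using pmono_mul[of h2 "t a'" "[Comp b a']" "[Star a, Star b]"] by (simp add: ptgt_def)
      also have "\<dots> = pmul h2 (pmono (k, [Star a])) (pmono (t a', [Star b, Comp b a']))"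
        by (rule sym) (use pmono_mul[of h2 "t a'" "[Star b, Comp b a']" "[Star a]"] b in \<open>simp add: ptgt_def\<close>)
      finally show ?thesis .
    qed
    show "phi (pmul h (cder2 a b) (pmono (t a', [b, a']))) p =
        psub (pmul h2 (cder V E2 h2 t2 (Comp b a) S2) (pmono (t a', [Comp b a'])))
             (pmul h2 (pmono (k, [Star a])) (pmono (t a', [Star b, Comp b a']))) p"
      using b a by (simp add: phi_mul[OF uC mC] pm phi_cder2 pmul_psub_l m2)
  qed
  also have "\<dots> = psub (\<lambda>p. \<Sum>b\<in>?B. pmul h2 (cder V E2 h2 t2 (Comp b a) S2) (pmono (t a', [Comp b a'])) p)
                       (pmul h2 (pmono (k, [Star a])) (cder V E2 h2 t2 (Star a') S2))"
    by (simp add: sum_psub cder_Star_in[OF a'] pmul_sum_r)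
  finally show ?thesis .
qed

lemma phi_cder_in_pmono:
  assumes a: "a \<in> E" "h a = k" and a': "a' \<in> E" "h a' = k"
  shows "pmul h (cder V E h t a S) (pmono (t a', [a'])) \<in> C1"
    and "phi (pmul h (cder V E h t a S) (pmono (t a', [a']))) \<in> J2"
proof -
  let ?B = "{b\<in>E. t b = k}"
  show "pmul h (cder V E h t a S) (pmono (t a', [a'])) \<in> C1"
    unfolding cder_in_pmul_pmono[OF assms] by (intro A.corner_sum A.corner_pmul cder2_corner pmono_Comp_corner) (use a a' in auto)
  have v1: "B.valid (t a', [Comp b a'])" if "b \<in> ?B" for b
    using that a' A.tV by (simp add: B.valid_Cons valid_path_Nil ptgt_def)
  have v2: "B.valid (k, [Star a])" using a kV by (simp add: B.valid_Cons valid_path_Nil ptgt_def)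
  have fB: "finite ?B" using A.fin_E by simp
  have s1: "(\<lambda>p. \<Sum>b\<in>?B. pmul h2 (cder V E2 h2 t2 (Comp b a) S2) (pmono (t a', [Comp b a'])) p) \<in> J2"
  proof (rule B.closed_ideal_sum[OF fB])
    fix b assume b: "b \<in> ?B"
    have "cder V E2 h2 t2 (Comp b a) S2 \<in> J2" using a b by (intro J2_gen) auto
    then show "pmul h2 (cder V E2 h2 t2 (Comp b a) S2) (pmono (t a', [Comp b a'])) \<in> J2"
      using B.closed_ideal_mult_right B.pmono_palg[OF v1[OF b]] by blast
  qed
  have s2: "pmul h2 (pmono (k, [Star a])) (cder V E2 h2 t2 (Star a') S2) \<in> J2"
    using B.closed_ideal_mult_left B.pmono_palg[OF v2] J2_gen[of "Star a'"] a' by auto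
  show "phi (pmul h (cder V E h t a S) (pmono (t a', [a']))) \<in> J2"
    unfolding phi_cder_in_pmul_pmono[OF assms] using s1 s2 by (rule B.closed_ideal_sub)
qed

lemma pmono_pmul_cder_out:
  assumes b: "b \<in> E" "t b = k" and b': "b' \<in> E" "t b' = k"
  shows "pmul h (pmono (k, [b'])) (cder V E h t b S) = (\<lambda>p. \<Sum>a\<in>{a\<in>E. h a = k}. pmul h (pmono (t a, [b', a])) (cder2 a b) p)"
proof -
  have "pmul h (pmono (k, [b'])) (cder V E h t b S) = (\<lambda>p. \<Sum>a\<in>{a\<in>E. h a = k}. pmul h (pmono (k, [b'])) (pmul h (pmono (t a, [a])) (cder2 a b)) p)"
    by (subst cder_out_decomp[OF b]) (simp add: pmul_sum_r)
  also have "\<dots> = (\<lambda>p. \<Sum>a\<in>{a\<in>E. h a = k}. pmul h (pmono (t a, [b', a])) (cder2 a b) p)"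
  proof (intro ext sum.cong refl)
    fix p a assume a: "a \<in> {a\<in>E. h a = k}"
    have e: "pmul h (pmono (k, [b'])) (pmono (t a, [a])) = pmono (t a, [b', a])"
      using pmono_mul[of h "t a" "[a]" "[b']"] a by (simp add: ptgt_def)
    show "pmul h (pmono (k, [b'])) (pmul h (pmono (t a, [a])) (cder2 a b)) p = pmul h (pmono (t a, [b', a])) (cder2 a b) p"
      by (simp add: pmul_assoc[symmetric] e)
  qed
  finally show ?thesis .
qed

lemma phi_pmono_pmul_cder_out:
  assumes b: "b \<in> E" "t b = k" and b': "b' \<in> E" "t b' = k"
  shows "phi (pmul h (pmono (k, [b'])) (cder V E h t b S)) =
    psub (\<lambda>p. \<Sum>a\<in>{a\<in>E. h a = k}. pmul h2 (pmono (t a, [Comp b' a])) (cder V E2 h2 t2 (Comp b a) S2) p)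
      (pmul h2 (cder V E2 h2 t2 (Star b') S2) (pmono (h b, [Star b])))"
proof -
  let ?A = "{a\<in>E. h a = k}"
  have "phi (pmul h (pmono (k, [b'])) (cder V E h t b S)) =
      (\<lambda>p. \<Sum>a\<in>?A. psub (pmul h2 (pmono (t a, [Comp b' a])) (cder V E2 h2 t2 (Comp b a) S2))
                        (pmul h2 (pmono (k, [Comp b' a, Star a])) (pmono (h b, [Star b]))) p)"
    unfolding pmono_pmul_cder_out[OF assms] phi_sum
  proof (intro ext sum.cong refl)
    fix p a assume a: "a \<in> ?A"
    have uC: "cder2 a b \<in> C1" using a b by (intro cder2_corner) auto
    have mC: "pmono (t a, [b', a]) \<in> C1" using a b' by (intro pmono_Comp_corner) auto
    have pm: "phi (pmono (t a, [b', a])) = pmono (t a, [Comp b' a])"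
    proof -
      have v: "A.valid (t a, [b', a])" "t a \<noteq> k" "ptgt h (t a, [b', a]) \<noteq> k"
        using mC A.cornerD[OF mC, of "(t a, [b', a])"] by (auto simp: pmono_def)
      show ?thesis using phi_pmono[OF v] b' a by simp
    qed
    have m2: "pmul h2 (pmono (t a, [Comp b' a])) (pmono (h b, [Star a, Star b])) =
              pmul h2 (pmono (k, [Comp b' a, Star a])) (pmono (h b, [Star b]))"
    proof -
      have "pmul h2 (pmono (t a, [Comp b' a])) (pmono (h b, [Star a, Star b])) = pmono (h b, [Comp b' a, Star a, Star b])"
        using pmono_mul[of h2 "h b" "[Star a, Star b]" "[Comp b' a]"] by (simp add: ptgt_def)
      also have "\<dots> = pmul h2 (pmono (k, [Comp b' a, Star a])) (pmono (h b, [Star b]))"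
        by (rule sym) (use pmono_mul[of h2 "h b" "[Star b]" "[Comp b' a, Star a]"] b in \<open>simp add: ptgt_def\<close>)
      finally show ?thesis .
    qed
    show "phi (pmul h (pmono (t a, [b', a])) (cder2 a b)) p =
        psub (pmul h2 (pmono (t a, [Comp b' a])) (cder V E2 h2 t2 (Comp b a) S2))
             (pmul h2 (pmono (k, [Comp b' a, Star a])) (pmono (h b, [Star b]))) p"
      using b a by (simp add: phi_mul[OF mC uC] pm phi_cder2 pmul_psub_r m2)
  qed
  also have "\<dots> = psub (\<lambda>p. \<Sum>a\<in>?A. pmul h2 (pmono (t a, [Comp b' a])) (cder V E2 h2 t2 (Comp b a) S2) p)
                       (pmul h2 (cder V E2 h2 t2 (Star b') S2) (pmono (h b, [Star b])))"
    by (simp add: sum_psub cder_Star_out[OF b'] pmul_sum_l)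
  finally show ?thesis .
qed

lemma phi_pmono_cder_out:
  assumes b: "b \<in> E" "t b = k" and b': "b' \<in> E" "t b' = k"
  shows "pmul h (pmono (k, [b'])) (cder V E h t b S) \<in> C1"
    and "phi (pmul h (pmono (k, [b'])) (cder V E h t b S)) \<in> J2"
proof -
  let ?A = "{a\<in>E. h a = k}"
  show "pmul h (pmono (k, [b'])) (cder V E h t b S) \<in> C1"
    unfolding pmono_pmul_cder_out[OF assms] by (intro A.corner_sum A.corner_pmul cder2_corner pmono_Comp_corner) (use b b' in auto)
  have v1: "B.valid (t a, [Comp b' a])" if "a \<in> ?A" for a
    using that b' A.tV by (simp add: B.valid_Cons valid_path_Nil ptgt_def)
  have v2: "B.valid (h b, [Star b])" using b A.hV by (simp add: B.valid_Cons valid_path_Nil ptgt_def)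
  have fA: "finite ?A" using A.fin_E by simp
  have s1: "(\<lambda>p. \<Sum>a\<in>?A. pmul h2 (pmono (t a, [Comp b' a])) (cder V E2 h2 t2 (Comp b a) S2) p) \<in> J2"
  proof (rule B.closed_ideal_sum[OF fA])
    fix a assume a: "a \<in> ?A"
    have "cder V E2 h2 t2 (Comp b a) S2 \<in> J2" using a b by (intro J2_gen) auto
    then show "pmul h2 (pmono (t a, [Comp b' a])) (cder V E2 h2 t2 (Comp b a) S2) \<in> J2"
      using B.closed_ideal_mult_left B.pmono_palg[OF v1[OF a]] by blast
  qed
  have s2: "pmul h2 (cder V E2 h2 t2 (Star b') S2) (pmono (h b, [Star b])) \<in> J2"
    using B.closed_ideal_mult_right B.pmono_palg[OF v2] J2_gen[of "Star b'"] b' by auto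
  show "phi (pmul h (pmono (k, [b'])) (cder V E h t b S)) \<in> J2"
    unfolding phi_pmono_pmul_cder_out[OF assms] using s1 s2 by (rule B.closed_ideal_sub)
qed

lemma phi_gen_in:
  assumes a: "a \<in> E" "h a = k" and x: "x \<in> palg V E h t" and y: "y \<in> palg V E h t"
  shows "phi (prestrict (-{k}) (-{k}) h (pmul h (pmul h x (cder V E h t a S)) y)) \<in> J2"
proof -
  let ?g = "cder V E h t a S"
  let ?A = "{a'\<in>E. h a' = k}"
  define x' where "x' = prestrict {t a} (-{k}) h x"
  define y' where "y' = prestrict (-{k}) {k} h y"
  have ta: "t a \<noteq> k" using a no_loop by metis
  have P: "prestrict (-{k}) (-{k}) h (pmul h (pmul h x ?g) y) = pmul h (pmul h x' ?g) y'"
    unfolding x'_def y'_def using prestrict_pmul3[OF cderA_supp[of a], of "-{k}" "-{k}" x y] a by simp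
  have x'C: "x' \<in> C1" unfolding x'_def using ta x by (intro A.prestrict_corner) auto
  have y'p: "y' \<in> palg V E h t" unfolding y'_def using y by (rule A.prestrict_palg)
  have sup: "ptgt h p = k \<and> snd p \<noteq> []" if "y' p \<noteq> 0" for p
    using that by (cases p) (auto simp: y'_def prestrict_def ptgt_def split: if_splits)
  have dlC: "A.strip_left y' a' \<in> C1" if a': "a' \<in> ?A" for a'
  proof (rule A.cornerI)
    fix p assume ne: "A.strip_left y' a' p \<noteq> 0"
    obtain j w where p: "p = (j, w)" by (cases p)
    from ne have e: "ptgt h (j, w) = t a'" "y' (j, a' # w) \<noteq> 0" unfolding p A.strip_left_def by (auto split: if_splits)
    have "A.valid (j, a' # w)" using A.palgD[OF y'p e(2)] .
    moreover have "j \<noteq> k" using e(2) by (auto simp: y'_def prestrict_def split: if_splits)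
    moreover have "t a' \<noteq> k" using a' no_loop by (simp, metis)
    ultimately show "A.valid p \<and> fst p \<noteq> k \<and> ptgt h p \<noteq> k" using e(1) p by (simp add: A.valid_Cons)
  qed
  have eq: "pmul h (pmul h x' ?g) y' = (\<lambda>p. \<Sum>a'\<in>?A. pmul h (pmul h x' (pmul h ?g (pmono (t a', [a'])))) (A.strip_left y' a') p)"
    by (subst A.sum_strip_left[OF y'p sup]) (simp_all add: pmul_sum_r pmul_assoc)
  have "phi (\<lambda>p. \<Sum>a'\<in>?A. pmul h (pmul h x' (pmul h ?g (pmono (t a', [a'])))) (A.strip_left y' a') p) \<in> J2"
    unfolding phi_sum
  proof (rule B.closed_ideal_sum)
    show "finite ?A" using A.fin_E by simp
    fix a' assume a': "a' \<in> ?A"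
    have QC: "pmul h ?g (pmono (t a', [a'])) \<in> C1" and QJ: "phi (pmul h ?g (pmono (t a', [a']))) \<in> J2"
      using phi_cder_in_pmono[OF a] a' by auto
    show "phi (pmul h (pmul h x' (pmul h ?g (pmono (t a', [a'])))) (A.strip_left y' a')) \<in> J2"
      unfolding phi_mul3[OF x'C QC dlC[OF a']]
      using J2_mul3[OF phi_palg[OF x'C] QJ phi_palg[OF dlC[OF a']]] .
  qed
  then show ?thesis unfolding P eq .
qed

lemma phi_gen_out:
  assumes b: "b \<in> E" "t b = k" and x: "x \<in> palg V E h t" and y: "y \<in> palg V E h t"
  shows "phi (prestrict (-{k}) (-{k}) h (pmul h (pmul h x (cder V E h t b S)) y)) \<in> J2"
proof -
  let ?g = "cder V E h t b S"
  let ?B = "{b'\<in>E. t b' = k}"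
  define x' where "x' = prestrict {k} (-{k}) h x"
  define y' where "y' = prestrict (-{k}) {h b} h y"
  have hb: "h b \<noteq> k" using b no_loop by metis
  have P: "prestrict (-{k}) (-{k}) h (pmul h (pmul h x ?g) y) = pmul h (pmul h x' ?g) y'"
    unfolding x'_def y'_def using prestrict_pmul3[OF cderA_supp[of b], of "-{k}" "-{k}" x y] b by simp
  have y'C: "y' \<in> C1" unfolding y'_def using hb y by (intro A.prestrict_corner) auto
  have x'p: "x' \<in> palg V E h t" unfolding x'_def using x by (rule A.prestrict_palg)
  have sup: "fst p = k \<and> snd p \<noteq> []" if "x' p \<noteq> 0" for p
    using that by (cases p) (auto simp: x'_def prestrict_def ptgt_def split: if_splits)
  have drC: "A.strip_right k x' b' \<in> C1" if b': "b' \<in> ?B" for b'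
  proof (rule A.cornerI)
    fix p assume ne: "A.strip_right k x' b' p \<noteq> 0"
    obtain j w where p: "p = (j, w)" by (cases p)
    from ne have e: "j = h b'" "x' (k, w @ [b']) \<noteq> 0" unfolding p A.strip_right_def by (auto split: if_splits)
    have v: "A.valid (k, w @ [b'])" using A.palgD[OF x'p e(2)] .
    then have "A.valid (h b', w)" using A.valid_append[of k w "[b']"] by (simp add: ptgt_def)
    moreover have "h b' \<noteq> k" using b' no_loop by (simp, metis)
    moreover have "ptgt h (k, w @ [b']) \<noteq> k" using e(2) by (auto simp: x'_def prestrict_def split: if_splits)
    moreover have "ptgt h (k, w @ [b']) = ptgt h (h b', w)" by (simp only: ptgt_append) (simp add: ptgt_def)
    ultimately show "A.valid p \<and> fst p \<noteq> k \<and> ptgt h p \<noteq> k" using e(1) p by simp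
  qed
  have eq: "pmul h (pmul h x' ?g) y' = (\<lambda>p. \<Sum>b'\<in>?B. pmul h (pmul h (A.strip_right k x' b') (pmul h (pmono (k, [b'])) ?g)) y' p)"
    by (subst A.sum_strip_right[OF x'p sup]) (simp_all add: pmul_sum_l pmul_assoc)
  have "phi (\<lambda>p. \<Sum>b'\<in>?B. pmul h (pmul h (A.strip_right k x' b') (pmul h (pmono (k, [b'])) ?g)) y' p) \<in> J2"
    unfolding phi_sum
  proof (rule B.closed_ideal_sum)
    show "finite ?B" using A.fin_E by simp
    fix b' assume b': "b' \<in> ?B"
    have QC: "pmul h (pmono (k, [b'])) ?g \<in> C1" and QJ: "phi (pmul h (pmono (k, [b'])) ?g) \<in> J2"
      using phi_pmono_cder_out[OF b] b' by auto
    show "phi (pmul h (pmul h (A.strip_right k x' b') (pmul h (pmono (k, [b'])) ?g)) y') \<in> J2"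
      unfolding phi_mul3[OF drC[OF b'] QC y'C]
      using J2_mul3[OF phi_palg[OF drC[OF b']] QJ phi_palg[OF y'C]] .
  qed
  then show ?thesis unfolding P eq .
qed

lemma phi_ideal: "g \<in> A.gen_ideal X1 \<Longrightarrow> phi (prestrict (-{k}) (-{k}) h g) \<in> J2"
proof (induction rule: ideal_gen.induct)
  case zero then show ?case by (simp add: prestrict_pzero phi_pzero B.closed_ideal_zero)
next
  case (gen g x y)
  then obtain c where c: "c \<in> E" "g = cder V E h t c S" by auto
  show ?case
  proof (cases "h c = k")
    case True then show ?thesis using phi_gen_in[OF c(1) True gen(2,3)] c by simp
  next
    case False
    show ?thesis
    proof (cases "t c = k")
      case True then show ?thesis using phi_gen_out[OF c(1) True gen(2,3)] c by simp
    next
      case False2: False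
      show ?thesis using phi_gen_Old[OF c(1) False False2 gen(2,3)] c by simp
    qed
  qed
next
  case (add u v) then show ?case by (simp add: prestrict_padd phi_padd B.closed_ideal_add)
qed

lemma phi_J: "x \<in> C1 \<Longrightarrow> x \<in> J1 \<Longrightarrow> phi x \<in> J2"
proof -
  assume xC: "x \<in> C1" and xJ: "x \<in> J1"
  show ?thesis
  proof (rule B.closed_ideal_closed[OF phi_palg[OF xC]])
    fix n
    obtain g where g: "g \<in> A.gen_ideal X1" "agree_below (2 * n) x g" using xJ unfolding A.closed_ideal_iff by blast
    have "agree_below (2 * n) (prestrict (-{k}) (-{k}) h x) (prestrict (-{k}) (-{k}) h g)"
      using g(2) by (auto simp: agree_below_def prestrict_def)
    then have "agree_below (2 * n) x (prestrict (-{k}) (-{k}) h g)" using A.prestrict_corner_id[OF xC] by simp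
    then have "agree_below n (phi x) (phi (prestrict (-{k}) (-{k}) h g))" by (rule phi_agree_below)
    then show "\<exists>u\<in>J2. agree_below n (phi x) u" using phi_ideal[OF g(1)] by blast
  qed
qed

lemma pmono_pair: "a \<in> E \<Longrightarrow> h a = k \<Longrightarrow> pmul h (pmono (k, [b])) (pmono (t a, [a])) = pmono (t a, [b, a])"
  using pmono_mul[of h "t a" "[a]" "[b]"] by (simp add: ptgt_def)

lemma pmono_pair_palg: "a \<in> E \<Longrightarrow> b \<in> E \<Longrightarrow> h a = k \<Longrightarrow> t b = k \<Longrightarrow> pmono (t a, [b, a]) \<in> palg V E h t"
  by (rule A.pmono_palg) (use A.tV in \<open>simp add: A.valid_Cons valid_path_Nil ptgt_def\<close>)

lemma psi_gen_Old:
  assumes c: "c \<in> E" "h c \<noteq> k" "t c \<noteq> k" and x: "x \<in> palg V E2 h2 t2" and y: "y \<in> palg V E2 h2 t2"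
  shows "psi (prestrict (-{k}) (-{k}) h2 (pmul h2 (pmul h2 x (cder V E2 h2 t2 (Old c) S2)) y)) \<in> J1"
proof -
  let ?g = "cder V E2 h2 t2 (Old c) S2"
  have P: "prestrict (-{k}) (-{k}) h2 (pmul h2 (pmul h2 x ?g) y) = pmul h2 (pmul h2 (prestrict {t c} (-{k}) h2 x) ?g) (prestrict (-{k}) {h c} h2 y)"
    using prestrict_pmul3[OF cderB_supp[of "Old c"]] by simp
  have x': "prestrict {t c} (-{k}) h2 x \<in> C2" using c x by (intro B.prestrict_corner) auto
  have y': "prestrict (-{k}) {h c} h2 y \<in> C2" using c y by (intro B.prestrict_corner) auto
  have g: "?g = phi (cder V E h t c S)" using cder_Old[OF c] .
  have gC: "?g \<in> C2" unfolding g using phi_corner cderA_corner[OF c] by blast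
  have "psi ?g = cder V E h t c S" unfolding g using psi_phi cderA_corner[OF c] by blast
  then have "psi ?g \<in> J1" using J1_gen[OF c(1)] by simp
  then show ?thesis unfolding P psi_mul3[OF x' gC y'] using psi_palg x' y' by (intro J1_mul3) auto
qed

lemma psi_gen_Comp:
  assumes ab: "a \<in> E" "b \<in> E" "h a = k" "t b = k" and x: "x \<in> palg V E2 h2 t2" and y: "y \<in> palg V E2 h2 t2"
  shows "psi (prestrict (-{k}) (-{k}) h2 (pmul h2 (pmul h2 x (cder V E2 h2 t2 (Comp b a) S2)) y)) \<in> J1"
proof -
  let ?g = "cder V E2 h2 t2 (Comp b a) S2"
  have ta: "t a \<noteq> k" and hb: "h b \<noteq> k" using ab no_loop by metis+
  have P: "prestrict (-{k}) (-{k}) h2 (pmul h2 (pmul h2 x ?g) y) = pmul h2 (pmul h2 (prestrict {t a} (-{k}) h2 x) ?g) (prestrict (-{k}) {h b} h2 y)"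
    using prestrict_pmul3[OF cderB_supp[of "Comp b a"]] by simp
  have x': "prestrict {t a} (-{k}) h2 x \<in> C2" using ta x by (intro B.prestrict_corner) auto
  have y': "prestrict (-{k}) {h b} h2 y \<in> C2" using hb y by (intro B.prestrict_corner) auto
  have uC: "cder2 a b \<in> C1" using cder2_corner[OF ab] .
  have vm: "B.valid (h b, [Star a, Star b])" using ab A.hV by (simp add: B.valid_Cons valid_path_Nil ptgt_def)
  have mC: "pmono (h b, [Star a, Star b]) \<in> C2" using vm hb ta by (intro B.corner_pmono) (auto simp: ptgt_def)
  have gC: "?g \<in> C2" unfolding cder_Comp[OF ab] using phi_corner[OF uC] mC by (rule B.corner_padd)
  have "psi ?g = pzero"
    unfolding cder_Comp[OF ab] psi_padd psi_phi[OF uC] psi_pmono_Star_pair[OF ab] by (auto simp: padd_def psmul_def pzero_def fun_eq_iff)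
  then have "psi ?g \<in> J1" using A.closed_ideal_zero by simp
  then show ?thesis unfolding P psi_mul3[OF x' gC y'] using psi_palg x' y' by (intro J1_mul3) auto
qed

lemma pmono_pmul_cder_Star_in:
  assumes a: "a \<in> E" "h a = k" and a2: "a'' \<in> E" "h a'' = k"
  shows "pmul h2 (pmono (k, [Star a''])) (cder V E2 h2 t2 (Star a) S2) = (\<lambda>p. \<Sum>b\<in>{b\<in>E. t b = k}. pmono (t a, [Star a'', Star b, Comp b a]) p)"
proof -
  have e: "pmul h2 (pmono (k, [Star a''])) (pmono (t a, [Star b, Comp b a])) = pmono (t a, [Star a'', Star b, Comp b a])"
    if "b \<in> {b\<in>E. t b = k}" for b
    using pmono_mul[of h2 "t a" "[Star b, Comp b a]" "[Star a'']"] that by (simp add: ptgt_def)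
  show ?thesis unfolding cder_Star_in[OF a] pmul_sum_r by (intro ext sum.cong refl) (simp add: e)
qed

lemma psi_pmono_Star_Star_Comp:
  assumes a: "a \<in> E" "h a = k" and a2: "a'' \<in> E" "h a'' = k"
    and b: "b \<in> E" "t b = k"
  shows "psi (pmono (t a, [Star a'', Star b, Comp b a])) = psmul (-1) (pmul h (cder2 a'' b) (pmono (t a, [b, a])))"
proof -
  have e: "psi_word [Star a'', Star b, Comp b a] = psmul (-1) (pmul h (cder2 a'' b) (pmono (t a, [b, a])))"
    using a a2 b by (simp add: A.pmul_punit_right pmono_pair_palg pmul_psmul_l)
  have "psi (pmono (t a, [Star a'', Star b, Comp b a])) = psi_word [Star a'', Star b, Comp b a]"
  proof (rule psi_pmono_eq_psi_word)
    show "set [Star a'', Star b, Comp b a] \<subseteq> E2" using a a2 b by simp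
    fix j zs assume "psi_word [Star a'', Star b, Comp b a] (j, zs) \<noteq> 0"
    then show "j = t a" unfolding e by (auto simp: psmul_def dest: pmul_pmono_source)
  qed
  then show ?thesis using e by simp
qed

lemma psi_pmono_pmul_cder_Star_in:
  assumes a: "a \<in> E" "h a = k" and a2: "a'' \<in> E" "h a'' = k"
  shows "psi (pmul h2 (pmono (k, [Star a''])) (cder V E2 h2 t2 (Star a) S2)) =
    psmul (-1) (pmul h (cder V E h t a'' S) (pmono (t a, [a])))"
proof -
  have "psi (pmul h2 (pmono (k, [Star a''])) (cder V E2 h2 t2 (Star a) S2)) =
      (\<lambda>p. \<Sum>b\<in>{b\<in>E. t b = k}. psmul (-1) (pmul h (cder2 a'' b) (pmono (t a, [b, a]))) p)"
    unfolding pmono_pmul_cder_Star_in[OF assms] psi_sum by (intro ext sum.cong refl) (simp add: psi_pmono_Star_Star_Comp[OF assms])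
  also have "\<dots> = psmul (-1) (\<lambda>p. \<Sum>b\<in>{b\<in>E. t b = k}. pmul h (pmul h (cder2 a'' b) (pmono (k, [b]))) (pmono (t a, [a])) p)"
    by (simp add: psmul_def sum_distrib_left pmul_assoc pmono_pair[OF a])
  also have "\<dots> = psmul (-1) (pmul h (cder V E h t a'' S) (pmono (t a, [a])))"
    by (simp add: cder_in_decomp[OF a2] pmul_sum_l)
  finally show ?thesis .
qed

lemma psi_pmono_cder_Star_in:
  assumes a: "a \<in> E" "h a = k" and a2: "a'' \<in> E" "h a'' = k"
  shows "pmul h2 (pmono (k, [Star a''])) (cder V E2 h2 t2 (Star a) S2) \<in> C2"
    and "psi (pmul h2 (pmono (k, [Star a''])) (cder V E2 h2 t2 (Star a) S2)) \<in> J1"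
proof -
  let ?B = "{b\<in>E. t b = k}"
  have ta: "t a \<noteq> k" using a no_loop by metis
  have ta2: "t a'' \<noteq> k" using a2 no_loop by metis
  have mC: "pmono (t a, [Star a'', Star b, Comp b a]) \<in> C2" if b: "b \<in> ?B" for b
  proof (rule B.corner_pmono)
    show "B.valid (t a, [Star a'', Star b, Comp b a])"
      using a a2 b A.tV by (simp add: B.valid_Cons valid_path_Nil ptgt_def)
  qed (use ta ta2 in \<open>auto simp: ptgt_def\<close>)
  show "pmul h2 (pmono (k, [Star a''])) (cder V E2 h2 t2 (Star a) S2) \<in> C2"
    unfolding pmono_pmul_cder_Star_in[OF assms] by (rule B.corner_sum) (rule mC)
  have "psmul (-1) (pmul h (cder V E h t a'' S) (pmono (t a, [a]))) \<in> J1"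
    using a A.tV by (intro A.closed_ideal_smult A.closed_ideal_mult_right J1_gen a2 A.pmono_palg)
      (simp_all add: A.valid_Cons valid_path_Nil ptgt_def)
  then show "psi (pmul h2 (pmono (k, [Star a''])) (cder V E2 h2 t2 (Star a) S2)) \<in> J1"
    unfolding psi_pmono_pmul_cder_Star_in[OF assms] .
qed

lemma cder_Star_out_pmul_pmono:
  assumes b: "b \<in> E" "t b = k" and b2: "b'' \<in> E" "t b'' = k"
  shows "pmul h2 (cder V E2 h2 t2 (Star b) S2) (pmono (h b'', [Star b''])) = (\<lambda>p. \<Sum>a\<in>{a\<in>E. h a = k}. pmono (h b'', [Comp b a, Star a, Star b'']) p)"
proof -
  have e: "pmul h2 (pmono (k, [Comp b a, Star a])) (pmono (h b'', [Star b''])) = pmono (h b'', [Comp b a, Star a, Star b''])"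
    if "a \<in> {a\<in>E. h a = k}" for a
    using pmono_mul[of h2 "h b''" "[Star b'']" "[Comp b a, Star a]"] that b2 by (simp add: ptgt_def)
  show ?thesis unfolding cder_Star_out[OF b] pmul_sum_l by (intro ext sum.cong refl) (simp add: e)
qed

lemma psi_pmono_Comp_Star_Star:
  assumes b: "b \<in> E" "t b = k" and b2: "b'' \<in> E" "t b'' = k"
    and a: "a \<in> E" "h a = k"
  shows "psi (pmono (h b'', [Comp b a, Star a, Star b''])) = psmul (-1) (pmul h (pmono (t a, [b, a])) (cder2 a b''))"
proof -
  have e: "psi_word [Comp b a, Star a, Star b''] = psmul (-1) (pmul h (pmono (t a, [b, a])) (cder2 a b''))"
    using a b b2 by (simp add: A.pmul_punit_right A.psmul_palg cder2_palg pmul_psmul_r)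
  have "psi (pmono (h b'', [Comp b a, Star a, Star b''])) = psi_word [Comp b a, Star a, Star b'']"
  proof (rule psi_pmono_eq_psi_word)
    show "set [Comp b a, Star a, Star b''] \<subseteq> E2" using a b b2 by simp
    fix j zs assume "psi_word [Comp b a, Star a, Star b''] (j, zs) \<noteq> 0"
    then have "pmul h (pmono (t a, [b, a])) (cder2 a b'') (j, zs) \<noteq> 0" unfolding e by (simp add: psmul_def)
    then obtain w where "cder2 a b'' (j, w) \<noteq> 0" by (auto elim!: pmul_nonzeroE)
    then show "j = h b''" by (auto simp: cder2_eq split: if_splits)
  qed
  then show ?thesis using e by simp
qed

lemma psi_cder_Star_out_pmul_pmono:
  assumes b: "b \<in> E" "t b = k" and b2: "b'' \<in> E" "t b'' = k"
  shows "psi (pmul h2 (cder V E2 h2 t2 (Star b) S2) (pmono (h b'', [Star b'']))) =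
    psmul (-1) (pmul h (pmono (k, [b])) (cder V E h t b'' S))"
proof -
  have "psi (pmul h2 (cder V E2 h2 t2 (Star b) S2) (pmono (h b'', [Star b'']))) =
      (\<lambda>p. \<Sum>a\<in>{a\<in>E. h a = k}. psmul (-1) (pmul h (pmono (t a, [b, a])) (cder2 a b'')) p)"
    unfolding cder_Star_out_pmul_pmono[OF assms] psi_sum by (intro ext sum.cong refl) (simp add: psi_pmono_Comp_Star_Star[OF assms])
  also have "\<dots> = psmul (-1) (\<lambda>p. \<Sum>a\<in>{a\<in>E. h a = k}. pmul h (pmono (k, [b])) (pmul h (pmono (t a, [a])) (cder2 a b'')) p)"
    by (intro ext) (simp add: psmul_def sum_distrib_left pmul_assoc[symmetric] pmono_pair)
  also have "\<dots> = psmul (-1) (pmul h (pmono (k, [b])) (cder V E h t b'' S))"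
    by (simp add: cder_out_decomp[OF b2] pmul_sum_r)
  finally show ?thesis .
qed

lemma psi_cder_Star_out_pmono:
  assumes b: "b \<in> E" "t b = k" and b2: "b'' \<in> E" "t b'' = k"
  shows "pmul h2 (cder V E2 h2 t2 (Star b) S2) (pmono (h b'', [Star b''])) \<in> C2"
    and "psi (pmul h2 (cder V E2 h2 t2 (Star b) S2) (pmono (h b'', [Star b'']))) \<in> J1"
proof -
  let ?A = "{a\<in>E. h a = k}"
  have hb: "h b \<noteq> k" using b no_loop by metis
  have hb2: "h b'' \<noteq> k" using b2 no_loop by metis
  have mC: "pmono (h b'', [Comp b a, Star a, Star b'']) \<in> C2" if a: "a \<in> ?A" for a
  proof (rule B.corner_pmono)
    show "B.valid (h b'', [Comp b a, Star a, Star b''])"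
      using a b b2 A.hV by (simp add: B.valid_Cons valid_path_Nil ptgt_def)
  qed (use hb hb2 in \<open>auto simp: ptgt_def\<close>)
  show "pmul h2 (cder V E2 h2 t2 (Star b) S2) (pmono (h b'', [Star b''])) \<in> C2"
    unfolding cder_Star_out_pmul_pmono[OF assms] by (rule B.corner_sum) (rule mC)
  have "psmul (-1) (pmul h (pmono (k, [b])) (cder V E h t b'' S)) \<in> J1"
    using b kV by (intro A.closed_ideal_smult A.closed_ideal_mult_left J1_gen b2 A.pmono_palg)
      (simp_all add: A.valid_Cons valid_path_Nil ptgt_def)
  then show "psi (pmul h2 (cder V E2 h2 t2 (Star b) S2) (pmono (h b'', [Star b'']))) \<in> J1"
    unfolding psi_cder_Star_out_pmul_pmono[OF assms] .
qed

lemma psi_gen_Star_in: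
  assumes a: "a \<in> E" "h a = k" and x: "x \<in> palg V E2 h2 t2" and y: "y \<in> palg V E2 h2 t2"
  shows "psi (prestrict (-{k}) (-{k}) h2 (pmul h2 (pmul h2 x (cder V E2 h2 t2 (Star a) S2)) y)) \<in> J1"
proof -
  let ?g = "cder V E2 h2 t2 (Star a) S2"
  let ?D = "{d\<in>E2. t2 d = k}"
  define x' where "x' = prestrict {k} (-{k}) h2 x"
  define y' where "y' = prestrict (-{k}) {t a} h2 y"
  have ta: "t a \<noteq> k" using a no_loop by metis
  have P: "prestrict (-{k}) (-{k}) h2 (pmul h2 (pmul h2 x ?g) y) = pmul h2 (pmul h2 x' ?g) y'"
    unfolding x'_def y'_def using prestrict_pmul3[OF cderB_supp[of "Star a"], of "-{k}" "-{k}" x y] a by simp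
  have y'C: "y' \<in> C2" unfolding y'_def using ta y by (intro B.prestrict_corner) auto
  have x'p: "x' \<in> palg V E2 h2 t2" unfolding x'_def using x by (rule B.prestrict_palg)
  have sup: "fst p = k \<and> snd p \<noteq> []" if "x' p \<noteq> 0" for p
    using that by (cases p) (auto simp: x'_def prestrict_def ptgt_def split: if_splits)
  have drC: "B.strip_right k x' d \<in> C2" if d: "d \<in> ?D" for d
  proof (rule B.cornerI)
    fix p assume ne: "B.strip_right k x' d p \<noteq> 0"
    obtain j w where p: "p = (j, w)" by (cases p)
    from ne have e: "j = h2 d" "x' (k, w @ [d]) \<noteq> 0" unfolding p B.strip_right_def by (auto split: if_splits)
    have v: "B.valid (k, w @ [d])" using B.palgD[OF x'p e(2)] .
    then have "B.valid (h2 d, w)" using B.valid_append[of k w "[d]"] by (simp add: ptgt_def)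
    moreover have "h2 d \<noteq> k"
    proof -
      obtain a'' where a'': "d = Star a''" "a'' \<in> E" "h a'' = k" using E2_t2_k[of d] d by auto
      have "h a'' \<noteq> t a''" by (rule no_loop[OF a''(2)])
      then show ?thesis using a'' by simp
    qed
    moreover have "ptgt h2 (k, w @ [d]) \<noteq> k" using e(2) by (auto simp: x'_def prestrict_def split: if_splits)
    moreover have "ptgt h2 (k, w @ [d]) = ptgt h2 (h2 d, w)" by (simp only: ptgt_append) (simp add: ptgt_def)
    ultimately show "B.valid p \<and> fst p \<noteq> k \<and> ptgt h2 p \<noteq> k" using e(1) p by simp
  qed
  have eq: "pmul h2 (pmul h2 x' ?g) y' = (\<lambda>p. \<Sum>d\<in>?D. pmul h2 (pmul h2 (B.strip_right k x' d) (pmul h2 (pmono (k, [d])) ?g)) y' p)"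
    by (subst B.sum_strip_right[OF x'p sup]) (simp_all add: pmul_sum_l pmul_assoc)
  have "psi (\<lambda>p. \<Sum>d\<in>?D. pmul h2 (pmul h2 (B.strip_right k x' d) (pmul h2 (pmono (k, [d])) ?g)) y' p) \<in> J1"
    unfolding psi_sum
  proof (rule A.closed_ideal_sum)
    show "finite ?D" using finite_E2 by simp
    fix d assume d: "d \<in> ?D"
    obtain a'' where a'': "d = Star a''" "a'' \<in> E" "h a'' = k" using E2_t2_k[of d] d by auto
    have QC: "pmul h2 (pmono (k, [d])) ?g \<in> C2" and QJ: "psi (pmul h2 (pmono (k, [d])) ?g) \<in> J1"
      using psi_pmono_cder_Star_in[OF a a''(2,3)] a''(1) by auto
    show "psi (pmul h2 (pmul h2 (B.strip_right k x' d) (pmul h2 (pmono (k, [d])) ?g)) y') \<in> J1"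
      unfolding psi_mul3[OF drC[OF d] QC y'C]
      using J1_mul3[OF psi_palg[OF drC[OF d]] QJ psi_palg[OF y'C]] .
  qed
  then show ?thesis unfolding P eq .
qed

lemma psi_gen_Star_out:
  assumes b: "b \<in> E" "t b = k" and x: "x \<in> palg V E2 h2 t2" and y: "y \<in> palg V E2 h2 t2"
  shows "psi (prestrict (-{k}) (-{k}) h2 (pmul h2 (pmul h2 x (cder V E2 h2 t2 (Star b) S2)) y)) \<in> J1"
proof -
  let ?g = "cder V E2 h2 t2 (Star b) S2"
  let ?D = "{d\<in>E2. h2 d = k}"
  define x' where "x' = prestrict {h b} (-{k}) h2 x"
  define y' where "y' = prestrict (-{k}) {k} h2 y"
  have hb: "h b \<noteq> k" using b no_loop by metis
  have P: "prestrict (-{k}) (-{k}) h2 (pmul h2 (pmul h2 x ?g) y) = pmul h2 (pmul h2 x' ?g) y'"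
    unfolding x'_def y'_def using prestrict_pmul3[OF cderB_supp[of "Star b"], of "-{k}" "-{k}" x y] b by simp
  have x'C: "x' \<in> C2" unfolding x'_def using hb x by (intro B.prestrict_corner) auto
  have y'p: "y' \<in> palg V E2 h2 t2" unfolding y'_def using y by (rule B.prestrict_palg)
  have sup: "ptgt h2 p = k \<and> snd p \<noteq> []" if "y' p \<noteq> 0" for p
    using that by (cases p) (auto simp: y'_def prestrict_def ptgt_def split: if_splits)
  have dlC: "B.strip_left y' d \<in> C2" if d: "d \<in> ?D" for d
  proof (rule B.cornerI)
    fix p assume ne: "B.strip_left y' d p \<noteq> 0"
    obtain j w where p: "p = (j, w)" by (cases p)
    from ne have e: "ptgt h2 (j, w) = t2 d" "y' (j, d # w) \<noteq> 0" unfolding p B.strip_left_def by (auto split: if_splits)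
    have "B.valid (j, d # w)" using B.palgD[OF y'p e(2)] .
    moreover have "j \<noteq> k" using e(2) by (auto simp: y'_def prestrict_def split: if_splits)
    moreover have "t2 d \<noteq> k"
    proof -
      obtain b'' where b'': "d = Star b''" "b'' \<in> E" "t b'' = k" using E2_h2_k[of d] d by auto
      have "h b'' \<noteq> t b''" by (rule no_loop[OF b''(2)])
      then show ?thesis using b'' by simp
    qed
    ultimately show "B.valid p \<and> fst p \<noteq> k \<and> ptgt h2 p \<noteq> k" using e(1) p by (simp add: B.valid_Cons)
  qed
  have eq: "pmul h2 (pmul h2 x' ?g) y' = (\<lambda>p. \<Sum>d\<in>?D. pmul h2 (pmul h2 x' (pmul h2 ?g (pmono (t2 d, [d])))) (B.strip_left y' d) p)"
    by (subst B.sum_strip_left[OF y'p sup]) (simp_all add: pmul_sum_r pmul_assoc)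
  have "psi (\<lambda>p. \<Sum>d\<in>?D. pmul h2 (pmul h2 x' (pmul h2 ?g (pmono (t2 d, [d])))) (B.strip_left y' d) p) \<in> J1"
    unfolding psi_sum
  proof (rule A.closed_ideal_sum)
    show "finite ?D" using finite_E2 by simp
    fix d assume d: "d \<in> ?D"
    obtain b'' where b'': "d = Star b''" "b'' \<in> E" "t b'' = k" using E2_h2_k[of d] d by auto
    have QC: "pmul h2 ?g (pmono (t2 d, [d])) \<in> C2" and QJ: "psi (pmul h2 ?g (pmono (t2 d, [d]))) \<in> J1"
      using psi_cder_Star_out_pmono[OF b b''(2,3)] b''(1) by auto
    show "psi (pmul h2 (pmul h2 x' (pmul h2 ?g (pmono (t2 d, [d])))) (B.strip_left y' d)) \<in> J1"
      unfolding psi_mul3[OF x'C QC dlC[OF d]]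
      using J1_mul3[OF psi_palg[OF x'C] QJ psi_palg[OF dlC[OF d]]] .
  qed
  then show ?thesis unfolding P eq .
qed

lemma psi_ideal: "g \<in> B.gen_ideal X2 \<Longrightarrow> psi (prestrict (-{k}) (-{k}) h2 g) \<in> J1"
proof (induction rule: ideal_gen.induct)
  case zero then show ?case by (simp add: prestrict_pzero psi_pzero A.closed_ideal_zero)
next
  case (gen g x y)
  then obtain d where d: "d \<in> E2" "g = cder V E2 h2 t2 d S2" by auto
  from d(1) show ?case
  proof (cases rule: E2_cases)
    case (Old c) then show ?thesis using psi_gen_Old[OF Old(2,3,4) gen(2,3)] d by simp
  next
    case (Comp b a) then show ?thesis using psi_gen_Comp[OF Comp(2,3,4,5) gen(2,3)] d by simp
  next
    case (Star c)
    show ?thesis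
    proof (cases "h c = k")
      case True then show ?thesis using psi_gen_Star_in[OF Star(2) True gen(2,3)] d Star by simp
    next
      case False
      then have "t c = k" using Star by simp
      then show ?thesis using psi_gen_Star_out[OF Star(2) _ gen(2,3)] d Star by simp
    qed
  qed
next
  case (add u v) then show ?case by (simp add: prestrict_padd psi_padd A.closed_ideal_add)
qed

lemma psi_J: "z \<in> C2 \<Longrightarrow> z \<in> J2 \<Longrightarrow> psi z \<in> J1"
proof -
  assume zC: "z \<in> C2" and zJ: "z \<in> J2"
  show ?thesis
  proof (rule A.closed_ideal_closed[OF psi_palg[OF zC]])
    fix n
    obtain g where g: "g \<in> B.gen_ideal X2" "agree_below (2 * n + 1) z g" using zJ unfolding B.closed_ideal_iff by blast
    have "agree_below (2 * n + 1) (prestrict (-{k}) (-{k}) h2 z) (prestrict (-{k}) (-{k}) h2 g)"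
      using g(2) by (auto simp: agree_below_def prestrict_def)
    then have "agree_below (2 * n + 1) z (prestrict (-{k}) (-{k}) h2 g)" using B.prestrict_corner_id[OF zC] by simp
    then have "agree_below n (psi z) (psi (prestrict (-{k}) (-{k}) h2 g))" by (rule psi_agree_below)
    then show "\<exists>u\<in>J1. agree_below n (psi z) u" using psi_ideal[OF g(1)] by blast
  qed
qed

subsection \<open>Surjectivity modulo the Jacobian ideal\<close>

lemma phi_psi_Old:
  assumes c: "c \<in> E" "h c \<noteq> k" "t c \<noteq> k"
  shows "phi (psi (pmono (t c, [Old c]))) = pmono (t c, [Old c])"
proof -
  have v: "A.valid (t c, [c])" using c A.tV by (simp add: A.valid_Cons valid_path_Nil ptgt_def)
  have e: "psi_word [Old c] = pmono (t c, [c])" using A.pmul_punit_right[OF A.pmono_palg[OF v]] by simp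
  have "psi (pmono (t c, [Old c])) = psi_word [Old c]"
  proof (rule psi_pmono_eq_psi_word)
    show "set [Old c] \<subseteq> E2" using c by simp
    fix j zs assume "psi_word [Old c] (j, zs) \<noteq> 0"
    then show "j = t c" unfolding e by (auto simp: pmono_def split: if_splits)
  qed
  then show ?thesis using e phi_pmono[OF v] c by (simp add: ptgt_def)
qed

lemma phi_psi_Comp:
  assumes ab: "a \<in> E" "b \<in> E" "h a = k" "t b = k"
  shows "phi (psi (pmono (t a, [Comp b a]))) = pmono (t a, [Comp b a])"
proof -
  have v: "A.valid (t a, [b, a])" using ab A.tV by (simp add: A.valid_Cons valid_path_Nil ptgt_def)
  have ta: "t a \<noteq> k" and hb: "h b \<noteq> k" using ab no_loop by metis+
  have e: "psi_word [Comp b a] = pmono (t a, [b, a])" using A.pmul_punit_right[OF A.pmono_palg[OF v]] by simp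
  have "psi (pmono (t a, [Comp b a])) = psi_word [Comp b a]"
  proof (rule psi_pmono_eq_psi_word)
    show "set [Comp b a] \<subseteq> E2" using ab by simp
    fix j zs assume "psi_word [Comp b a] (j, zs) \<noteq> 0"
    then show "j = t a" unfolding e by (auto simp: pmono_def split: if_splits)
  qed
  moreover have "phi (pmono (t a, [b, a])) = pmono (t a, [Comp b a])"
    using phi_pmono[OF v] ab ta hb by (simp add: ptgt_def)
  ultimately show ?thesis using e by simp
qed

lemma phi_psi_Star_pair:
  assumes ab: "a \<in> E" "b \<in> E" "h a = k" "t b = k"
  shows "psub (pmono (h b, [Star a, Star b])) (phi (psi (pmono (h b, [Star a, Star b])))) = cder V E2 h2 t2 (Comp b a) S2"
  unfolding psi_pmono_Star_pair[OF ab] phi_psmul phi_cder2[OF ab]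
  by (auto simp: psub_def psmul_def fun_eq_iff)

lemma phi_psi_pmono_append:
  assumes v: "B.valid (j, l @ r)" "j \<noteq> k" "ptgt h2 (j, l @ r) \<noteq> k" "ptgt h2 (j, r) \<noteq> k"
    and J1': "psub (pmono (ptgt h2 (j, r), l)) (phi (psi (pmono (ptgt h2 (j, r), l)))) \<in> J2"
    and J2': "psub (pmono (j, r)) (phi (psi (pmono (j, r)))) \<in> J2"
  shows "psub (pmono (j, l @ r)) (phi (psi (pmono (j, l @ r)))) \<in> J2"
proof -
  let ?v = "ptgt h2 (j, r)"
  let ?M1 = "pmono (?v, l)" and ?M2 = "pmono (j, r)"
  have vv: "B.valid (?v, l)" "B.valid (j, r)" using v(1) B.valid_append by auto
  have pt: "ptgt h2 (?v, l) = ptgt h2 (j, l @ r)" by (simp add: ptgt_append)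
  have M1C: "?M1 \<in> C2" using vv(1) v(4) v(3) pt by (intro B.corner_pmono) auto
  have M2C: "?M2 \<in> C2" using vv(2) v(2) v(4) by (intro B.corner_pmono) auto
  have mm: "pmono (j, l @ r) = pmul h2 ?M1 ?M2" by (rule pmono_mul[symmetric])
  have pp: "phi (psi (pmul h2 ?M1 ?M2)) = pmul h2 (phi (psi ?M1)) (phi (psi ?M2))"
    using psi_mul[OF M1C] phi_mul[OF psi_corner[OF M1C] psi_corner[OF M2C]] by simp
  show ?thesis unfolding mm pp psub_pmul_pmul
  proof (rule B.closed_ideal_add)
    show "pmul h2 (psub ?M1 (phi (psi ?M1))) ?M2 \<in> J2"
      using J1' B.closed_ideal_mult_right B.corner_palg[OF M2C] by blast
    show "pmul h2 (phi (psi ?M1)) (psub ?M2 (phi (psi ?M2))) \<in> J2"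
      using J2' B.closed_ideal_mult_left phi_palg[OF psi_corner[OF M1C]] by blast
  qed
qed

lemma phi_psi_pmono:
  "B.valid (j, ys) \<Longrightarrow> j \<noteq> k \<Longrightarrow> ptgt h2 (j, ys) \<noteq> k \<Longrightarrow> psub (pmono (j, ys)) (phi (psi (pmono (j, ys)))) \<in> J2"
proof (induction ys rule: length_induct)
  case (1 ys)
  note IH = "1.IH"
  have gd: "star_paired ys" using star_paired_corner "1.prems" by blast
  show ?case
  proof (cases ys)
    case Nil
    have jV: "j \<in> V" using "1.prems"(1) Nil by (simp add: valid_path_Nil)
    have e: "psi (pmono (j, [])) = pmono (j, [])"
      using psi_pmono[of "[]" j] jV by (auto simp: punit_def pmono_def fun_eq_iff)
    have e2: "phi (pmono (j, [])) = pmono (j, [])"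
      using phi_pmono[of j "[]"] jV "1.prems"(2) by (simp add: valid_path_Nil ptgt_def)
    have "psub (pmono (j, [])) (phi (psi (pmono (j, [])))) = pzero"
      unfolding e e2 by (simp add: psub_def pzero_def)
    then show ?thesis using Nil B.closed_ideal_zero by simp
  next
    case (Cons d r)
    have vd: "d \<in> E2" "B.valid (j, r)" "t2 d = ptgt h2 (j, r)" using "1.prems"(1) Cons by (auto simp: B.valid_Cons)
    from vd(1) show ?thesis
    proof (cases rule: E2_cases)
      case (Old c)
      have r: "ptgt h2 (j, r) \<noteq> k" using vd Old by simp
      have ih: "psub (pmono (j, r)) (phi (psi (pmono (j, r)))) \<in> J2"
        using IH[rule_format, of r] Cons vd(2) "1.prems"(2) r by simp
      have l: "psub (pmono (ptgt h2 (j, r), [Old c])) (phi (psi (pmono (ptgt h2 (j, r), [Old c])))) \<in> J2"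
        using phi_psi_Old[OF Old(2,3,4)] vd(3) Old B.closed_ideal_zero by (simp add: psub_def pzero_def)
      show ?thesis using phi_psi_pmono_append[of j "[Old c]" r] "1.prems" Cons Old r l ih by simp
    next
      case (Comp b a)
      have ta: "t a \<noteq> k" using Comp no_loop by metis
      have r: "ptgt h2 (j, r) \<noteq> k" using vd Comp ta by simp
      have ih: "psub (pmono (j, r)) (phi (psi (pmono (j, r)))) \<in> J2"
        using IH[rule_format, of r] Cons vd(2) "1.prems"(2) r by simp
      have l: "psub (pmono (ptgt h2 (j, r), [Comp b a])) (phi (psi (pmono (ptgt h2 (j, r), [Comp b a])))) \<in> J2"
        using phi_psi_Comp[OF Comp(2,3,4,5)] vd(3) Comp B.closed_ideal_zero by (simp add: psub_def pzero_def)
      show ?thesis using phi_psi_pmono_append[of j "[Comp b a]" r] "1.prems" Cons Comp r l ih by simp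
    next
      case (Star a)
      obtain b r' where r: "r = Star b # r'" "h a = k" "t b = k" "star_paired r'"
        using gd Cons Star by (cases r rule: star_paired.cases) auto
      have vr: "Star b \<in> E2" "B.valid (j, r')" "t2 (Star b) = ptgt h2 (j, r')"
        using vd(2) r by (auto simp: B.valid_Cons)
      have bE: "b \<in> E" using vr(1) by simp
      have aE: "a \<in> E" using Star by simp
      have hb: "h b \<noteq> k" using bE r no_loop by metis
      have r': "ptgt h2 (j, r') \<noteq> k" using vr hb by simp
      have ih: "psub (pmono (j, r')) (phi (psi (pmono (j, r')))) \<in> J2"
        using IH[rule_format, of r'] Cons r vr(2) "1.prems"(2) r' by simp
      have l: "psub (pmono (ptgt h2 (j, r'), [Star a, Star b])) (phi (psi (pmono (ptgt h2 (j, r'), [Star a, Star b])))) \<in> J2"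
        using phi_psi_Star_pair[OF aE bE r(2,3)] vr(3) J2_gen[of "Comp b a"] aE bE r by simp
      have ys: "ys = [Star a, Star b] @ r'" using Cons Star r by simp
      show ?thesis using phi_psi_pmono_append[of j "[Star a, Star b]" r'] "1.prems" ys r' l ih by simp
    qed
  qed
qed

lemma phi_psi_J:
  assumes zC: "z \<in> C2"
  shows "psub z (phi (psi z)) \<in> J2"
proof (rule B.closed_ideal_closed)
  show "psub z (phi (psi z)) \<in> palg V E2 h2 t2"
    using B.psub_palg B.corner_palg[OF zC] phi_palg[OF psi_corner[OF zC]] by blast
  fix n
  \<comment> \<open>psi loses at most a factor 2 in path length and phi another one\<close>
  obtain Q where fQ: "finite Q" and Q: "\<And>q. q \<in> Q \<Longrightarrow> B.valid q \<and> fst q \<noteq> k \<and> ptgt h2 q \<noteq> k"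
    and agrN: "agree_below (2 * (2 * n) + 1) z (\<lambda>p. \<Sum>q\<in>Q. psmul (z q) (pmono q) p)"
    using B.corner_truncation[OF zC, where N = "2 * (2 * n) + 1"] by blast
  define zN where "zN = (\<lambda>p. \<Sum>q\<in>Q. psmul (z q) (pmono q) p)"
  have ag: "agree_below n (psub z (phi (psi z))) (psub zN (phi (psi zN)))"
  proof (rule agree_below_psub)
    show "agree_below n z zN" using agrN unfolding zN_def by (rule agree_below_mono) simp
    have "agree_below (2 * n) (psi z) (psi zN)" using agrN unfolding zN_def by (rule psi_agree_below)
    then show "agree_below n (phi (psi z)) (phi (psi zN))" by (rule phi_agree_below)
  qed
  have "phi (psi zN) = (\<lambda>p. \<Sum>q\<in>Q. psmul (z q) (phi (psi (pmono q))) p)"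
    unfolding zN_def psi_sum phi_sum by (simp add: psi_psmul phi_psmul)
  then have eq: "psub zN (phi (psi zN)) = (\<lambda>p. \<Sum>q\<in>Q. psmul (z q) (psub (pmono q) (phi (psi (pmono q)))) p)"
    by (simp add: zN_def psub_def psmul_def sum_subtractf algebra_simps)
  have "psub zN (phi (psi zN)) \<in> J2"
    unfolding eq
  proof (rule B.closed_ideal_sum[OF fQ])
    fix q :: "'v \<times> 'a marrow list" assume q: "q \<in> Q"
    then have "psub (pmono q) (phi (psi (pmono q))) \<in> J2"
      using phi_psi_pmono[of "fst q" "snd q"] Q by simp
    then show "psmul (z q) (psub (pmono q) (phi (psi (pmono q)))) \<in> J2" by (rule B.closed_ideal_smult)
  qed
  then show "\<exists>u\<in>J2. agree_below n (psub z (phi (psi z))) u" using ag by blast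
qed

lemma phi_quot_iso: "quot_iso h C1 J1 h2 C2 J2 phi"
  unfolding quot_iso_def
proof (intro conjI ballI allI)
  fix x :: "'v \<times> 'a list \<Rightarrow> 'k" assume "x \<in> C1" then show "phi x \<in> C2" by (rule phi_corner)
next
  fix x y :: "'v \<times> 'a list \<Rightarrow> 'k" assume x: "x \<in> C1" and y: "y \<in> C1"
  have d: "psub x y \<in> C1" using A.corner_psub x y by blast
  show "psub x y \<in> J1 \<longleftrightarrow> psub (phi x) (phi y) \<in> J2"
  proof
    assume "psub x y \<in> J1"
    then have "phi (psub x y) \<in> J2" using phi_J d by blast
    then show "psub (phi x) (phi y) \<in> J2" by (simp add: phi_psub)
  next
    assume "psub (phi x) (phi y) \<in> J2"
    then have "phi (psub x y) \<in> J2" by (simp add: phi_psub)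
    then have "psi (phi (psub x y)) \<in> J1" using psi_J phi_corner[OF d] by blast
    then show "psub x y \<in> J1" using psi_phi[OF d] by simp
  qed
next
  fix z :: "'v \<times> 'a marrow list \<Rightarrow> 'k" assume z: "z \<in> C2"
  show "\<exists>x\<in>C1. psub z (phi x) \<in> J2" using psi_corner[OF z] phi_psi_J[OF z] by blast
next
  fix x y :: "'v \<times> 'a list \<Rightarrow> 'k" assume "x \<in> C1" "y \<in> C1"
  show "psub (phi (padd x y)) (padd (phi x) (phi y)) \<in> J2"
    by (simp add: phi_padd psub_self B.closed_ideal_zero)
next
  fix x y :: "'v \<times> 'a list \<Rightarrow> 'k" assume x: "x \<in> C1" and y: "y \<in> C1"
  show "psub (phi (pmul h x y)) (pmul h2 (phi x) (phi y)) \<in> J2"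
    by (simp add: phi_mul[OF x y] psub_self B.closed_ideal_zero)
next
  fix c :: 'k and x :: "'v \<times> 'a list \<Rightarrow> 'k" assume "x \<in> C1"
  show "psub (phi (psmul c x)) (psmul c (phi x)) \<in> J2"
    by (simp add: phi_psmul psub_self B.closed_ideal_zero)
qed

end

theorem proposition6p1:
  fixes V :: "'v set" and E :: "'a set" and h t :: "'a \<Rightarrow> 'v" and k :: 'v
    and S :: "'v \<times> 'a list \<Rightarrow> 'k::field"
  assumes quiver: "is_quiver V E h t"
    and kV: "k \<in> V"
    and S_alg: "S \<in> palg V E h t"
    and QP: "is_QP V E h t S"
    and one_way: "\<forall>i\<in>V. (\<forall>a\<in>E. \<not> (h a = i \<and> t a = k)) \<or> (\<forall>a\<in>E. \<not> (h a = k \<and> t a = i))"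
    and no_k_cycle: "\<forall>p. S p \<noteq> 0 \<longrightarrow> fst p \<noteq> k"
  shows "\<exists>\<phi>. quot_iso h (corner V E h t k) (jacobian V E h t S)
                 (mh h t) (corner V (mE E h t k) (mh h t) (mt h t) k)
                 (jacobian V (mE E h t k) (mh h t) (mt h t) (mS E k h t S)) \<phi>"
proof -
  have "premutation V E h t k S"
  proof
    show "h a \<noteq> t a" if "a \<in> E" for a
      using QP that by (auto simp: is_QP_def)
    show "h b \<noteq> t a" if "a \<in> E" "b \<in> E" "h a = k" "t b = k" for a b
      using one_way quiver that by (auto simp: is_quiver_def)
  qed (use quiver kV no_k_cycle in auto)
  then interpret premutation V E h t k S .
  show ?thesis
    unfolding jacobian_def using phi_quot_iso by blast
qed

end
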